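(* Let $L\ge2$ and suppose Assumptions 1, 4 and 5 hold. Then the gradient descent iterates satisfy, for all $t$: (i) for every $1\le k\le L$, $\|W_k(t)\|_F^2-\|W_k(t)\|_2^2\le D+2\mathcal{R}(W(0))$; (ii) for every $1\le k<L$ with $W_{k+1}(t)\neq0$, $$\langle v_{k+1}(t),u_k(t)\rangle^2\ge1-\frac{D+3\mathcal{R}(W(0))+\|W_{k+1}(0)\|_2^2+\|W_k(0)\|_2^2}{\|W_{k+1}(t)\|_2^2};$$ (iii) if $\max_{1\le k\le L}\|W_k(t)\|_F\to\infty$, then $\left|\left\langle\frac{w_{\mathrm{prod}}(t)}{\prod_{k=1}^L\|W_k(t)\|_F},v_1(t)\right\rangle\right|\to1$.
   Context: Setting: data $(x_i,y_i)_{i=1}^n$ with $x_i\in\mathbb{R}^d$, $\|x_i\|\le 1$, $y_i\in\{-1,+1\}$; $z_i:=y_ix_i$; the data are linearly separable. A depth-$L$ linear network is $W=(W_L,\dots,W_1)$ with $W_k\in\mathbb{R}^{d_k\times d_{k-1}}$, $d_0=d$, $d_L=1$, $w_{\mathrm{prod}}:=(W_L\cdots W_1)^\top$, and $\mathcal{R}(W)=\frac1n\sum_{i=1}^n\ell(\langle w_{\mathrm{prod}},z_i\rangle)$. $\|\cdot\|_F$ is the Frobenius norm and $\|\cdot\|_2$ the spectral norm. $B(R):=\{W:\max_k\|W_k\|_F\le R\}$. Gradient descent: $W(t+1)=W(t)-\eta_t\nabla\mathcal{R}(W(t))$, $t=0,1,2,\dots$. Assumption 1: $\ell$ is continuously differentiable,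 $\ell'<0$ everywhere, $\lim_{x\to-\infty}\ell(x)=\infty$, $\lim_{x\to\infty}\ell(x)=0$. Assumption 4: $\ell'$ is $\beta$-Lipschitz and $|\ell'|\le G$. Let $\beta(R):=2L^2R^{2L-2}(\beta+G)$. Assumption 5: $\eta_t=\min\{1/\beta(R_t),1\}$, where the radii $R_t$ satisfy $W(t)\in B(R_t-1)$ for every $t$, and $R_{t+1}=R_t$ whenever $W(t+1)\in B(R_t-1)$. The constant $$D:=\Big(\max_{1\le k\le L}\|W_k(0)\|_F^2\Big)-\|W_L(0)\|_F^2+\sum_{k=1}^{L-1}\big\|W_k(0)W_k(0)^\top-W_{k+1}(0)^\top W_{k+1}(0)\big\|_2.$$ $u_k(t),v_k(t)$ are a pair of first (top) left and right unit singular vectors of $W_k(t)$. *)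

theory Defs
  imports Complex_Main "Jordan_Normal_Form.Matrix"
begin

definition vnorm :: "real vec \<Rightarrow> real" where
  "vnorm v = sqrt (v \<bullet> v)"

definition frob :: "real mat \<Rightarrow> real" where
  "frob A = sqrt (\<Sum>i<dim_row A. \<Sum>j<dim_col A. (A $$ (i,j))\<^sup>2)"

definition spec :: "real mat \<Rightarrow> real" where
  "spec A = Sup {vnorm (A *\<^sub>v v) | v. v \<in> carrier_vec (dim_col A) \<and> vnorm v = 1}"

definition top_sv :: "real mat \<Rightarrow> real vec \<Rightarrow> real vec \<Rightarrow> bool" where
  "top_sv A u v \<longleftrightarrow> u \<in> carrier_vec (dim_row A) \<and> v \<in> carrier_vec (dim_col A) \<and>
     vnorm u = 1 \<and> vnorm v = 1 \<and>
     A *\<^sub>v v = spec A \<cdot>\<^sub>v u \<and> A\<^sup>T *\<^sub>v u = spec A \<cdot>\<^sub>v v"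

(* W_k \<cdots> W_1 (a d_k x d matrix); a network is W :: nat \<Rightarrow> real mat, layers indexed 1..L *)
fun mprod :: "nat \<Rightarrow> (nat \<Rightarrow> real mat) \<Rightarrow> nat \<Rightarrow> real mat" where
  "mprod d W 0 = 1\<^sub>m d"
| "mprod d W (Suc k) = W (Suc k) * mprod d W k"

(* w_prod = (W_L \<cdots> W_1)^T, as a vector in R^d (W_L \<cdots> W_1 is 1 x d) *)
definition wprod :: "nat \<Rightarrow> nat \<Rightarrow> (nat \<Rightarrow> real mat) \<Rightarrow> real vec" where
  "wprod d L W = row (mprod d W L) 0"

definition risk :: "(real \<Rightarrow> real) \<Rightarrow> nat \<Rightarrow> (nat \<Rightarrow> real vec) \<Rightarrow> nat \<Rightarrow> nat
    \<Rightarrow> (nat \<Rightarrow> real mat) \<Rightarrow> real" where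
  "risk l n z d L W = (1 / real n) * (\<Sum>i<n. l (wprod d L W \<bullet> z i))"

definition set_entry :: "real mat \<Rightarrow> nat \<Rightarrow> nat \<Rightarrow> real \<Rightarrow> real mat" where
  "set_entry A i j s = mat (dim_row A) (dim_col A) (\<lambda>(a,b). if (a,b) = (i,j) then s else A $$ (a,b))"

definition grad_k :: "(real \<Rightarrow> real) \<Rightarrow> nat \<Rightarrow> (nat \<Rightarrow> real vec) \<Rightarrow> nat \<Rightarrow> nat
    \<Rightarrow> (nat \<Rightarrow> real mat) \<Rightarrow> nat \<Rightarrow> real mat" where
  "grad_k l n z d L W k = mat (dim_row (W k)) (dim_col (W k))
     (\<lambda>(i,j). THE D. ((\<lambda>s. risk l n z d L (W(k := set_entry (W k) i j s))) has_real_derivative D) (at (W k $$ (i,j))))"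

definition betaR :: "nat \<Rightarrow> real \<Rightarrow> real \<Rightarrow> real \<Rightarrow> real" where
  "betaR L beta G R = 2 * real L ^ 2 * R ^ (2 * L - 2) * (beta + G)"

definition Dconst :: "nat \<Rightarrow> (nat \<Rightarrow> real mat) \<Rightarrow> real" where
  "Dconst L W0 = Max {frob (W0 k) ^ 2 | k. 1 \<le> k \<and> k \<le> L} - frob (W0 L) ^ 2
     + (\<Sum>k\<in>{1..<L}. spec (W0 k * (W0 k)\<^sup>T - (W0 (Suc k))\<^sup>T * W0 (Suc k)))"

end

theory Submission
  imports Defs
begin

(*
  Write \<nabla>\<^sub>k for the gradient of the risk with respect to W\<^sub>k.  Since the network is
  linear, W\<^sub>k \<nabla>\<^sub>k\<^sup>T and W\<^sub>k\<^sub>+\<^sub>1\<^sup>T \<nabla>\<^sub>k\<^sub>+\<^sub>1 define the same quadratic form, so a gradient step changes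
  W\<^sub>k W\<^sub>k\<^sup>T - W\<^sub>k\<^sub>+\<^sub>1\<^sup>T W\<^sub>k\<^sub>+\<^sub>1 only by \<eta>\<^sup>2 (\<nabla>\<^sub>k \<nabla>\<^sub>k\<^sup>T - \<nabla>\<^sub>k\<^sub>+\<^sub>1\<^sup>T \<nabla>\<^sub>k\<^sub>+\<^sub>1).  With the step size of
  Assumption 5 the risk is \<beta>(R)-smooth along each step, so every step decreases it by at least
  (3/4) \<eta> \<parallel>\<nabla>\<parallel>\<^sup>2; hence \<Sum>\<^sub>t \<eta>\<^sub>t\<^sup>2 \<parallel>\<nabla>(t)\<parallel>\<^sup>2 \<le> (4/3) R(W(0)) and the layers stay balanced up to
  D + O(R(W(0))).  Approximate balance gives (i) by comparing \<parallel>W\<^sub>k\<parallel>\<^sub>F with the row W\<^sub>L, whose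
  Frobenius and spectral norms agree, and chaining spectral norms through the layers; (ii) by
  testing it on the top singular vectors; and (iii) because the top right singular vector of W\<^sub>1
  passes through every layer with gain almost \<parallel>W\<^sub>k\<parallel>\<^sub>F, so its image under W\<^sub>L \<cdots> W\<^sub>1 is a
  (1 - o(1)) fraction of \<Prod>\<^sub>k \<parallel>W\<^sub>k\<parallel>\<^sub>F as the norms grow.
*)

section \<open>Euclidean, Frobenius and spectral norms\<close>

abbreviation sq_norm :: "real vec \<Rightarrow> real" where "sq_norm v \<equiv> v \<bullet> v"

lemma sq_norm_nonneg: "0 \<le> sq_norm v"
  unfolding scalar_prod_def by (rule sum_nonneg) simp

lemma vnorm_sq: "vnorm v ^ 2 = sq_norm v" using sq_norm_nonneg[of v] unfolding vnorm_def by simp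

lemma vnorm_nonneg: "vnorm v \<ge> 0" unfolding vnorm_def using sq_norm_nonneg[of v] by simp

lemma scalar_prod_comm: "dim_vec v = dim_vec w \<Longrightarrow> (v::real vec) \<bullet> w = w \<bullet> v"
  unfolding scalar_prod_def by (auto intro: sum.cong simp: ac_simps)

lemma cauchy_schwarz_sum: fixes a b :: "nat \<Rightarrow> real"
  shows "(\<Sum>i\<in>A. a i * b i)^2 \<le> (\<Sum>i\<in>A. a i ^ 2) * (\<Sum>i\<in>A. b i ^ 2)"
proof (cases "(\<Sum>i\<in>A. b i ^ 2) = 0")
  case True
  show ?thesis
  proof (cases "finite A")
    case True
    with \<open>(\<Sum>i\<in>A. b i ^ 2) = 0\<close> have "\<forall>i\<in>A. b i ^ 2 = 0"
      by (subst sum_nonneg_eq_0_iff[symmetric]) auto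
    thus ?thesis by simp
  qed simp
next
  case False
  let ?A = "\<Sum>i\<in>A. a i ^ 2" and ?B = "\<Sum>i\<in>A. b i ^ 2" and ?C = "\<Sum>i\<in>A. a i * b i"
  have B: "?B > 0" using False by (metis (mono_tags, lifting) order_le_less sum_nonneg zero_le_power2)
  define c where "c = ?C / ?B"
  have "0 \<le> (\<Sum>i\<in>A. (a i - c * b i)^2)" by (auto intro: sum_nonneg)
  also have "\<dots> = ?A - 2 * c * ?C + c^2 * ?B"
    by (simp add: power2_eq_square algebra_simps sum.distrib sum_subtractf sum_distrib_left)
  also have "\<dots> = ?A - ?C^2 / ?B" using B unfolding c_def by (simp add: power2_eq_square field_simps)
  finally have "?C^2 / ?B \<le> ?A" by simp
  thus ?thesis using B by (simp add: field_simps)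
qed

lemma cauchy_schwarz: assumes "dim_vec v = dim_vec w" shows "(v \<bullet> w)^2 \<le> sq_norm v * sq_norm w"
  using cauchy_schwarz_sum[of "\<lambda>i. v $ i" "\<lambda>i. w $ i" "{0..<dim_vec w}"] assms unfolding scalar_prod_def by (simp add: power2_eq_square)

lemma cauchy_schwarz_abs: assumes "dim_vec v = dim_vec w" shows "\<bar>v \<bullet> w\<bar> \<le> sqrt (sq_norm v) * sqrt (sq_norm w)"
proof -
  have "\<bar>v \<bullet> w\<bar> = sqrt ((v \<bullet> w)^2)" by simp
  also have "\<dots> \<le> sqrt (sq_norm v * sq_norm w)" using cauchy_schwarz[OF assms] by (rule real_sqrt_le_mono)
  finally show ?thesis by (simp add: real_sqrt_mult)
qed

lemma sum_sq_le_card_sum_sq: fixes a :: "nat \<Rightarrow> real"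
  shows "(\<Sum>i\<in>A. a i)^2 \<le> real (card A) * (\<Sum>i\<in>A. a i ^ 2)"
  using cauchy_schwarz_sum[of "\<lambda>_. 1" a A] by simp

lemma index_mult_mat_vec_sum: "A \<in> carrier_mat r c \<Longrightarrow> x \<in> carrier_vec c \<Longrightarrow> i < r \<Longrightarrow> (A *\<^sub>v x) $ i = (\<Sum>j<c. A $$ (i,j) * x $ j)"
  by (auto simp: scalar_prod_def row_def atLeast0LessThan intro!: sum.cong)

lemma frob_sq: "frob A ^ 2 = (\<Sum>i<dim_row A. \<Sum>j<dim_col A. (A $$ (i,j))\<^sup>2)"
  unfolding frob_def by (subst real_sqrt_pow2) (auto intro!: sum_nonneg)

lemma frob_nonneg: "frob A \<ge> 0" unfolding frob_def by (auto intro!: sum_nonneg)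

lemma sq_norm_mult_le_frob: assumes A: "A \<in> carrier_mat r c" and x: "x \<in> carrier_vec c"
  shows "sq_norm (A *\<^sub>v x) \<le> frob A ^ 2 * sq_norm x"
proof -
  have "sq_norm (A *\<^sub>v x) = (\<Sum>i<r. ((A *\<^sub>v x) $ i)^2)"
    using A by (simp add: scalar_prod_def atLeast0LessThan power2_eq_square)
  also have "\<dots> = (\<Sum>i<r. (\<Sum>j<c. A $$ (i,j) * x $ j)^2)"
    using A x by (intro sum.cong) (auto simp: index_mult_mat_vec_sum[OF A x] simp del: index_mult_mat_vec)
  also have "\<dots> \<le> (\<Sum>i<r. (\<Sum>j<c. (A $$ (i,j))^2) * (\<Sum>j<c. (x $ j)^2))"
    by (intro sum_mono cauchy_schwarz_sum)
  also have "\<dots> = frob A ^ 2 * sq_norm x"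
    unfolding frob_sq using A x by (simp add: scalar_prod_def atLeast0LessThan sum_distrib_right power2_eq_square)
  finally show ?thesis .
qed

lemma frob_transpose: "frob (transpose_mat A) = frob A"
  unfolding frob_def by (simp, subst sum.swap, auto intro!: sum.cong)

lemma sq_norm_transpose_mult_le_frob: assumes A: "A \<in> carrier_mat r c" and x: "x \<in> carrier_vec r"
  shows "sq_norm (transpose_mat A *\<^sub>v x) \<le> frob A ^ 2 * sq_norm x"
  using sq_norm_mult_le_frob[of "transpose_mat A" c r x] A x by (simp add: frob_transpose)

lemma vnorm_mult_le_frob: assumes A: "A \<in> carrier_mat r c" and x: "x \<in> carrier_vec c"
  shows "vnorm (A *\<^sub>v x) \<le> frob A * vnorm x"
proof -
  have "vnorm (A *\<^sub>v x) = sqrt (sq_norm (A *\<^sub>v x))" unfolding vnorm_def ..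
  also have "\<dots> \<le> sqrt (frob A ^ 2 * sq_norm x)" using sq_norm_mult_le_frob[OF A x] by (rule real_sqrt_le_mono)
  also have "\<dots> = frob A * vnorm x" using frob_nonneg[of A] by (simp add: real_sqrt_mult vnorm_def)
  finally show ?thesis .
qed

lemma spec_bdd: assumes A: "A \<in> carrier_mat r c"
  shows "bdd_above {vnorm (A *\<^sub>v v) | v. v \<in> carrier_vec (dim_col A) \<and> vnorm v = 1}"
proof -
  { fix v assume v: "v \<in> carrier_vec (dim_col A)" "vnorm v = 1"
    have "vnorm (A *\<^sub>v v) \<le> frob A" using vnorm_mult_le_frob[OF A, of v] v A by simp }
  thus ?thesis unfolding bdd_above_def by blast
qed

lemma spec_upper: assumes A: "A \<in> carrier_mat r c" and v: "v \<in> carrier_vec c" "vnorm v = 1"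
  shows "vnorm (A *\<^sub>v v) \<le> spec A"
  unfolding spec_def using A v by (intro cSup_upper[OF _ spec_bdd[OF A]]) auto

lemma vnorm_unit: "j < c \<Longrightarrow> vnorm (unit_vec c j) = 1"
  unfolding vnorm_def by simp

lemma spec_least: assumes A: "A \<in> carrier_mat r c" and c: "c > 0"
  and K: "\<And>v. v \<in> carrier_vec c \<Longrightarrow> vnorm v = 1 \<Longrightarrow> vnorm (A *\<^sub>v v) \<le> K"
shows "spec A \<le> K"
  unfolding spec_def
proof (rule cSup_least)
  show "{vnorm (A *\<^sub>v v) |v. v \<in> carrier_vec (dim_col A) \<and> vnorm v = 1} \<noteq> {}"
    using A c vnorm_unit[of 0 c] by (auto intro!: exI[of _ "unit_vec c 0"])
qed (use A K in auto)

lemma spec_nonneg: assumes A: "A \<in> carrier_mat r c" and c: "c > 0" shows "0 \<le> spec A"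
  using spec_upper[OF A _ vnorm_unit[OF c]] vnorm_nonneg[of "A *\<^sub>v unit_vec c 0"] by simp

lemma sq_norm_smult: "sq_norm (k \<cdot>\<^sub>v v) = k^2 * sq_norm v"
  by (simp add: power2_eq_square)

lemma sq_norm_mult_le_spec: assumes A: "A \<in> carrier_mat r c" and x: "x \<in> carrier_vec c"
  shows "sq_norm (A *\<^sub>v x) \<le> spec A ^ 2 * sq_norm x"
proof (cases "sq_norm x = 0")
  case True
  thus ?thesis using sq_norm_mult_le_frob[OF A x] sq_norm_nonneg[of "A *\<^sub>v x"] by simp
next
  case False
  hence Nx: "sq_norm x > 0" using sq_norm_nonneg[of x] by simp
  hence c: "c > 0" using x by (cases c) (auto simp: scalar_prod_def)
  define s where "s = sqrt (sq_norm x)"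
  have s: "s > 0" "s^2 = sq_norm x" using Nx unfolding s_def by auto
  define v where "v = (1/s) \<cdot>\<^sub>v x"
  have v: "v \<in> carrier_vec c" using x unfolding v_def by simp
  have Nv: "sq_norm v = 1" using s Nx unfolding v_def sq_norm_smult by (simp add: power_divide)
  hence "vnorm v = 1" unfolding vnorm_def by simp
  from spec_upper[OF A v this] have le: "vnorm (A *\<^sub>v v) \<le> spec A" .
  have "sq_norm (A *\<^sub>v v) = (1/s)^2 * sq_norm (A *\<^sub>v x)" unfolding v_def mult_mat_vec[OF A x] sq_norm_smult ..
  moreover have "sq_norm (A *\<^sub>v v) \<le> spec A ^ 2"
  proof -
    have "sq_norm (A *\<^sub>v v) = vnorm (A *\<^sub>v v) ^ 2" by (simp add: vnorm_sq)
    also have "\<dots> \<le> spec A ^ 2" using le vnorm_nonneg by (intro power_mono) auto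
    finally show ?thesis .
  qed
  ultimately have "sq_norm (A *\<^sub>v x) / s^2 \<le> spec A ^ 2" by (simp add: power_divide)
  thus ?thesis using s Nx by (simp add: field_simps)
qed

lemma spec_sq_least: assumes A: "A \<in> carrier_mat r c" and c: "c > 0"
  and K: "\<And>v. v \<in> carrier_vec c \<Longrightarrow> sq_norm (A *\<^sub>v v) \<le> K * sq_norm v"
shows "spec A ^ 2 \<le> K"
proof -
  have "sq_norm (A *\<^sub>v unit_vec c 0) \<le> K" using K[of "unit_vec c 0"] c by simp
  hence K0: "K \<ge> 0" using sq_norm_nonneg[of "A *\<^sub>v unit_vec c 0"] by simp
  have "spec A \<le> sqrt K"
  proof (rule spec_least[OF A c])
    fix v assume v: "v \<in> carrier_vec c" "vnorm v = 1"
    hence "sq_norm v = 1" using vnorm_sq[of v] by simp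
    hence "sq_norm (A *\<^sub>v v) \<le> K" using K[OF v(1)] by simp
    thus "vnorm (A *\<^sub>v v) \<le> sqrt K" unfolding vnorm_def by (rule real_sqrt_le_mono)
  qed
  hence "spec A ^ 2 \<le> (sqrt K)^2" using spec_nonneg[OF A c] by (intro power_mono) auto
  thus ?thesis using K0 by simp
qed

lemma sq_norm_transpose_mult_le_spec: assumes A: "A \<in> carrier_mat r c" and y: "y \<in> carrier_vec r"
  shows "sq_norm (transpose_mat A *\<^sub>v y) \<le> spec A ^ 2 * sq_norm y"
proof -
  define w where "w = transpose_mat A *\<^sub>v y"
  have w: "w \<in> carrier_vec c" using A y unfolding w_def by simp
  have "sq_norm w = y \<bullet> (A *\<^sub>v w)" unfolding w_def using transpose_vec_mult_scalar[OF A _ y, of "transpose_mat A *\<^sub>v y"] A y by simp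
  hence "(sq_norm w)^2 \<le> sq_norm y * sq_norm (A *\<^sub>v w)" using cauchy_schwarz[of y "A *\<^sub>v w"] A y by simp
  also have "\<dots> \<le> sq_norm y * (spec A ^ 2 * sq_norm w)" using sq_norm_mult_le_spec[OF A w] sq_norm_nonneg[of y] by (intro mult_left_mono) auto
  finally have *: "(sq_norm w)^2 \<le> sq_norm y * (spec A ^ 2 * sq_norm w)" .
  show ?thesis
  proof (cases "sq_norm w = 0")
    case True thus ?thesis using sq_norm_nonneg[of y] unfolding w_def by simp
  next
    case False
    hence "sq_norm w > 0" using sq_norm_nonneg[of w] by simp
    have "sq_norm w * sq_norm w \<le> (sq_norm y * spec A ^ 2) * sq_norm w" using * by (simp add: power2_eq_square algebra_simps)
    hence "sq_norm w \<le> sq_norm y * spec A ^ 2" using \<open>sq_norm w > 0\<close> by (rule mult_right_le_imp_le)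
    thus ?thesis unfolding w_def by (simp add: algebra_simps)
  qed
qed

lemma abs_quad_form_le_spec: assumes M: "M \<in> carrier_mat m m" and x: "x \<in> carrier_vec m"
  shows "\<bar>x \<bullet> (M *\<^sub>v x)\<bar> \<le> spec M * sq_norm x"
proof (cases "m = 0")
  case True thus ?thesis using x M by (simp add: scalar_prod_def)
next
  case False
  have "(x \<bullet> (M *\<^sub>v x))^2 \<le> sq_norm x * sq_norm (M *\<^sub>v x)" using cauchy_schwarz[of x "M *\<^sub>v x"] M x by simp
  also have "\<dots> \<le> sq_norm x * (spec M ^ 2 * sq_norm x)" using sq_norm_mult_le_spec[OF M x] sq_norm_nonneg[of x] by (intro mult_left_mono) auto
  also have "\<dots> = (spec M * sq_norm x)^2" by (simp add: power2_eq_square)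
  finally have "(x \<bullet> (M *\<^sub>v x))^2 \<le> (spec M * sq_norm x)^2" .
  moreover have "spec M * sq_norm x \<ge> 0" using spec_nonneg[OF M] False sq_norm_nonneg[of x] by simp
  ultimately show ?thesis using abs_le_square_iff by (metis abs_of_nonneg)
qed

lemma quad_form_gram_diff: assumes A: "A \<in> carrier_mat m p" and B: "B \<in> carrier_mat q m" and x: "x \<in> carrier_vec m"
  shows "x \<bullet> ((A * transpose_mat A - transpose_mat B * B) *\<^sub>v x) = sq_norm (transpose_mat A *\<^sub>v x) - sq_norm (B *\<^sub>v x)"
proof -
  have AA: "A * transpose_mat A \<in> carrier_mat m m" using A by simp
  have BB: "transpose_mat B * B \<in> carrier_mat m m" using B by simp
  have "(A * transpose_mat A - transpose_mat B * B) *\<^sub>v x = A *\<^sub>v (transpose_mat A *\<^sub>v x) - transpose_mat B *\<^sub>v (B *\<^sub>v x)"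
    using A B x by (simp add: minus_mult_distrib_mat_vec[OF AA BB x])
  hence "x \<bullet> ((A * transpose_mat A - transpose_mat B * B) *\<^sub>v x) = x \<bullet> (A *\<^sub>v (transpose_mat A *\<^sub>v x)) - x \<bullet> (transpose_mat B *\<^sub>v (B *\<^sub>v x))"
    using A B x by (simp add: scalar_prod_minus_distrib)
  also have "x \<bullet> (A *\<^sub>v (transpose_mat A *\<^sub>v x)) = sq_norm (transpose_mat A *\<^sub>v x)"
    using transpose_vec_mult_scalar[OF A, of "transpose_mat A *\<^sub>v x" x] A x by simp
  also have "x \<bullet> (transpose_mat B *\<^sub>v (B *\<^sub>v x)) = sq_norm (B *\<^sub>v x)"
    using transpose_vec_mult_scalar[OF B x, of "B *\<^sub>v x"] A B x scalar_prod_comm by simp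
  finally show ?thesis .
qed

lemma spec_pos: assumes A: "A \<in> carrier_mat r c" and nz: "A \<noteq> 0\<^sub>m r c"
  shows "spec A > 0"
proof -
  obtain i j where ij: "i < r" "j < c" "A $$ (i,j) \<noteq> 0"
    using nz A by (metis carrier_matD(1,2) eq_matI index_zero_mat(1,2,3))
  have "(A *\<^sub>v unit_vec c j) $ i = A $$ (i,j)" using A ij by simp
  have "(A $$ (i,j))^2 \<le> sq_norm (A *\<^sub>v unit_vec c j)"
  proof -
    have "sq_norm (A *\<^sub>v unit_vec c j) = (\<Sum>k<r. ((A *\<^sub>v unit_vec c j) $ k)^2)"
      using A by (simp add: scalar_prod_def atLeast0LessThan power2_eq_square)
    also have "\<dots> \<ge> ((A *\<^sub>v unit_vec c j) $ i)^2"
      using ij by (intro member_le_sum) auto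
    finally show ?thesis using A ij by simp
  qed
  also have "\<dots> \<le> spec A ^ 2 * sq_norm (unit_vec c j)" using sq_norm_mult_le_spec[OF A] by simp
  also have "\<dots> = spec A ^ 2" using ij by simp
  finally have "spec A ^ 2 > 0" using ij by (smt (verit) zero_less_power2)
  moreover have "spec A \<ge> 0" using spec_nonneg[OF A] ij by simp
  ultimately show ?thesis by (simp add: less_le)
qed

lemma frob_le_spec_row: assumes A: "A \<in> carrier_mat 1 c" and c: "c > 0"
  shows "frob A \<le> spec A"
proof -
  define x where "x = row A 0"
  have x: "x \<in> carrier_vec c" using A unfolding x_def by (metis carrier_matD(2) row_carrier)
  have Nx: "sq_norm x = frob A ^ 2" unfolding frob_sq x_def using A
    by (simp add: scalar_prod_def atLeast0LessThan power2_eq_square)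
  have "(A *\<^sub>v x) $ 0 = sq_norm x" using A unfolding x_def by simp
  hence "sq_norm (A *\<^sub>v x) = (sq_norm x)^2" using A by (simp add: scalar_prod_def power2_eq_square)
  hence "(frob A ^ 2)^2 \<le> spec A ^ 2 * frob A ^ 2" using sq_norm_mult_le_spec[OF A x] Nx by simp
  hence H: "frob A ^ 2 * frob A ^ 2 \<le> spec A ^ 2 * frob A ^ 2" by (simp add: power2_eq_square)
  have "frob A ^ 2 \<le> spec A ^ 2"
  proof (cases "frob A = 0")
    case False
    hence "frob A ^ 2 > 0" by simp
    from mult_right_le_imp_le[OF H this] show ?thesis .
  qed simp
  thus ?thesis using spec_nonneg[OF A c] by (rule power2_le_imp_le)
qed

lemma sq_norm_add: assumes "dim_vec a = dim_vec b" shows "sq_norm (a + b) = sq_norm a + 2 * (a \<bullet> b) + sq_norm b"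
  using assms by (simp add: scalar_prod_def atLeast0LessThan sum.distrib sum_distrib_left algebra_simps)

lemma vnorm_add_le: assumes "dim_vec a = dim_vec b" shows "vnorm (a + b) \<le> vnorm a + vnorm b"
proof -
  have "sq_norm (a + b) \<le> (vnorm a + vnorm b)^2"
  proof -
    have "a \<bullet> b \<le> vnorm a * vnorm b" using cauchy_schwarz_abs[OF assms] unfolding vnorm_def by simp
    thus ?thesis unfolding sq_norm_add[OF assms] power2_sum vnorm_sq by simp
  qed
  hence "sqrt (sq_norm (a + b)) \<le> sqrt ((vnorm a + vnorm b)^2)" by (rule real_sqrt_le_mono)
  thus ?thesis unfolding vnorm_def[of "a + b"] using vnorm_nonneg[of a] vnorm_nonneg[of b] by simp
qed

lemma vnorm_zero [simp]: "vnorm (0\<^sub>v n) = 0" unfolding vnorm_def by simp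

lemma vnorm_smult: "vnorm (c \<cdot>\<^sub>v a) = \<bar>c\<bar> * vnorm a"
  unfolding vnorm_def sq_norm_smult by (simp add: real_sqrt_mult)

lemma vnorm_component: assumes "i < dim_vec v" shows "\<bar>v $ i\<bar> \<le> vnorm v"
proof -
  have "(v $ i)^2 \<le> sq_norm v" unfolding scalar_prod_def using assms
    by (subst power2_eq_square, intro member_le_sum) auto
  hence "sqrt ((v $ i)^2) \<le> sqrt (sq_norm v)" by (rule real_sqrt_le_mono)
  thus ?thesis unfolding vnorm_def by simp
qed

lemma mult_plus_smult_vec: fixes A B :: "real mat" assumes A: "A \<in> carrier_mat r c" and B: "B \<in> carrier_mat r c" and x: "x \<in> carrier_vec c"
  shows "(A + t \<cdot>\<^sub>m B) *\<^sub>v x = A *\<^sub>v x + t \<cdot>\<^sub>v (B *\<^sub>v x)"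
  using A B x by (intro eq_vecI)
    (auto simp: scalar_prod_def atLeast0LessThan sum.distrib sum_distrib_left algebra_simps)

lemma sum_diff_pointwise: fixes f g h k :: "nat \<Rightarrow> real"
  assumes "\<And>j. j < c \<Longrightarrow> f j - g j = h j + t * k j"
  shows "(\<Sum>j<c. f j) - (\<Sum>j<c. g j) = (\<Sum>j<c. h j) + t * (\<Sum>j<c. k j)"
proof -
  have "(\<Sum>j<c. f j) - (\<Sum>j<c. g j) = (\<Sum>j<c. f j - g j)" by (simp add: sum_subtractf)
  also have "\<dots> = (\<Sum>j<c. h j + t * k j)" using assms by (intro sum.cong) auto
  finally show ?thesis by (simp add: sum.distrib sum_distrib_left)
qed

lemma sum_diff_pointwise2: fixes f1 f2 g1 g2 h1 h2 k :: "nat \<Rightarrow> real"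
  assumes "\<And>j. j < c \<Longrightarrow> (f1 j + f2 j) - (g1 j + g2 j) = h1 j + h2 j + t * k j"
  shows "((\<Sum>j<c. f1 j) + (\<Sum>j<c. f2 j)) - ((\<Sum>j<c. g1 j) + (\<Sum>j<c. g2 j)) = (\<Sum>j<c. h1 j) + (\<Sum>j<c. h2 j) + t * (\<Sum>j<c. k j)"
proof -
  have "((\<Sum>j<c. f1 j) + (\<Sum>j<c. f2 j)) - ((\<Sum>j<c. g1 j) + (\<Sum>j<c. g2 j)) = (\<Sum>j<c. (f1 j + f2 j) - (g1 j + g2 j))"
    by (simp add: sum_subtractf sum.distrib)
  also have "\<dots> = (\<Sum>j<c. h1 j + h2 j + t * k j)" using assms by (intro sum.cong) auto
  finally show ?thesis by (simp add: sum.distrib sum_distrib_left)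
qed

lemma mult_perturb_diff: fixes A B :: "real mat" assumes A: "A \<in> carrier_mat r c" and B: "B \<in> carrier_mat r c"
  and a: "a \<in> carrier_vec c" and b: "b \<in> carrier_vec c"
  shows "(A + t \<cdot>\<^sub>m B) *\<^sub>v a - A *\<^sub>v b = (A + t \<cdot>\<^sub>m B) *\<^sub>v (a - b) + t \<cdot>\<^sub>v (B *\<^sub>v b)"
proof (rule eq_vecI)
  fix i assume "i < dim_vec ((A + t \<cdot>\<^sub>m B) *\<^sub>v (a - b) + t \<cdot>\<^sub>v (B *\<^sub>v b))"
  hence i: "i < r" using A B by simp
  have M: "A + t \<cdot>\<^sub>m B \<in> carrier_mat r c" using A B by simp
  have ab: "a - b \<in> carrier_vec c" using a b by simp
  show "((A + t \<cdot>\<^sub>m B) *\<^sub>v a - A *\<^sub>v b) $ i = ((A + t \<cdot>\<^sub>m B) *\<^sub>v (a - b) + t \<cdot>\<^sub>v (B *\<^sub>v b)) $ i"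
    using i A B a b index_mult_mat_vec_sum[OF M a i] index_mult_mat_vec_sum[OF A b i] index_mult_mat_vec_sum[OF M ab i] index_mult_mat_vec_sum[OF B b i]
    by (simp del: index_mult_mat_vec) (rule sum_diff_pointwise, auto simp: algebra_simps)
qed (use A B in auto)

lemma mult_perturb_diff2: fixes A B :: "real mat" assumes A: "A \<in> carrier_mat r c" and B: "B \<in> carrier_mat r c"
  and p: "p \<in> carrier_vec c" and p0: "p0 \<in> carrier_vec c" and e: "e \<in> carrier_vec c" and e0: "e0 \<in> carrier_vec c"
  shows "(B *\<^sub>v p + (A + t \<cdot>\<^sub>m B) *\<^sub>v e) - (B *\<^sub>v p0 + A *\<^sub>v e0)
      = B *\<^sub>v (p - p0) + (A + t \<cdot>\<^sub>m B) *\<^sub>v (e - e0) + t \<cdot>\<^sub>v (B *\<^sub>v e0)"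
proof (rule eq_vecI)
  fix i assume "i < dim_vec (B *\<^sub>v (p - p0) + (A + t \<cdot>\<^sub>m B) *\<^sub>v (e - e0) + t \<cdot>\<^sub>v (B *\<^sub>v e0))"
  hence i: "i < r" using B by simp
  have M: "A + t \<cdot>\<^sub>m B \<in> carrier_mat r c" using A B by simp
  have pp: "p - p0 \<in> carrier_vec c" using p p0 by simp
  have ee: "e - e0 \<in> carrier_vec c" using e e0 by simp
  show "((B *\<^sub>v p + (A + t \<cdot>\<^sub>m B) *\<^sub>v e) - (B *\<^sub>v p0 + A *\<^sub>v e0)) $ i = (B *\<^sub>v (p - p0) + (A + t \<cdot>\<^sub>m B) *\<^sub>v (e - e0) + t \<cdot>\<^sub>v (B *\<^sub>v e0)) $ i"
    using i A B index_mult_mat_vec_sum[OF B p i] index_mult_mat_vec_sum[OF M e i] index_mult_mat_vec_sum[OF B p0 i] index_mult_mat_vec_sum[OF A e0 i]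
      index_mult_mat_vec_sum[OF B pp i] index_mult_mat_vec_sum[OF M ee i] index_mult_mat_vec_sum[OF B e0 i] p p0 e e0
    by (simp del: index_mult_mat_vec) (rule sum_diff_pointwise2, auto simp: algebra_simps)
qed (use A B in auto)

lemma mult_left_bound_trans: "(a::real) \<le> f * x \<Longrightarrow> x \<le> B \<Longrightarrow> 0 \<le> f \<Longrightarrow> a \<le> f * B"
  by (meson mult_left_mono order_trans)

lemma vnorm_add3_le: "dim_vec a = dim_vec b \<Longrightarrow> dim_vec c = dim_vec b \<Longrightarrow> vnorm (a + b + c) \<le> vnorm a + vnorm b + vnorm c"
  using vnorm_add_le[of "a + b" c] vnorm_add_le[of a b] by simp

section \<open>Elementary real analysis\<close>

lemma taylor_upper_bound_unit_interval:
  fixes g g' :: "real \<Rightarrow> real"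
  assumes g_deriv: "\<And>t. (g has_real_derivative g' t) (at t)"
    and g'_lipschitz: "\<And>t. 0 \<le> t \<Longrightarrow> t \<le> 1 \<Longrightarrow> \<bar>g' t - g' 0\<bar> \<le> \<kappa> * t"
  shows "g 1 \<le> g 0 + g' 0 + \<kappa> / 2"
proof -
  define h where "h t = g t - t * g' 0 - \<kappa> / 2 * t^2" for t
  have "h 1 \<le> h 0"
  proof (rule DERIV_nonpos_imp_nonincreasing[of 0 1 h])
    fix x :: real assume x: "0 \<le> x" "x \<le> 1"
    have "(h has_real_derivative g' x - 1 * g' 0 - \<kappa> / 2 * (2 * x)) (at x)"
      unfolding h_def by (intro derivative_eq_intros g_deriv) (auto simp: power2_eq_square intro: g_deriv)
    moreover have "g' x - 1 * g' 0 - \<kappa> / 2 * (2 * x) \<le> 0"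
      using g'_lipschitz[OF x] by (simp add: abs_le_iff algebra_simps)
    ultimately show "\<exists>y. (h has_real_derivative y) (at x) \<and> y \<le> 0" by blast
  qed simp
  thus ?thesis unfolding h_def by simp
qed

lemma tendsto_power_ratio_1:
  fixes f :: "'a \<Rightarrow> real"
  assumes f: "filterlim f at_top F"
  shows "((\<lambda>t. ((f t - K) / (f t + B))^m) \<longlongrightarrow> 1) F"
proof -
  have "filterlim (\<lambda>t. B + f t) at_infinity F"
    by (rule filterlim_at_top_imp_at_infinity[OF filterlim_tendsto_add_at_top[OF tendsto_const f]])
  hence "((\<lambda>t. 1 - (K + B) / (B + f t)) \<longlongrightarrow> 1 - 0) F"
    by (intro tendsto_diff tendsto_const tendsto_divide_0[OF tendsto_const])
  moreover have "eventually (\<lambda>t. f t > - B) F" using f unfolding filterlim_at_top_dense by blast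
  hence "eventually (\<lambda>t. 1 - (K + B) / (B + f t) = (f t - K) / (f t + B)) F"
    by eventually_elim (simp add: field_simps)
  ultimately have "((\<lambda>t. (f t - K) / (f t + B)) \<longlongrightarrow> 1) F" by (simp add: tendsto_cong)
  from tendsto_power[OF this, of m] show ?thesis by simp
qed

lemma abs_div_bounds_of_sq_bounds:
  fixes y P lo hi :: real
  assumes lo: "0 < lo" "lo \<le> y^2" and up: "y^2 \<le> P^2" "P^2 \<le> hi" and P: "0 \<le> P"
  shows "\<bar>y / P\<bar> \<le> 1 \<and> lo / hi \<le> \<bar>y / P\<bar>"
proof -
  have "P \<noteq> 0" using lo up by auto
  hence P2: "P^2 > 0" by simp
  have sq: "\<bar>y / P\<bar>^2 = y^2 / P^2" by (simp add: power_divide)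
  have le1: "\<bar>y / P\<bar>^2 \<le> 1" unfolding sq using up(1) P2 by simp
  hence "\<bar>y / P\<bar> \<le> 1" by (simp add: power_le_one_iff)
  moreover have "lo / hi \<le> \<bar>y / P\<bar>^2" unfolding sq using lo up P2 by (intro frac_le) auto
  moreover have "\<bar>y / P\<bar>^2 \<le> \<bar>y / P\<bar>"
    using mult_left_le[OF \<open>\<bar>y / P\<bar> \<le> 1\<close> abs_ge_zero] by (simp only: power2_eq_square)
  ultimately show ?thesis by linarith
qed

section \<open>Forward and backward passes of a linear network\<close>

fun layer_out :: "(nat \<Rightarrow> real mat) \<Rightarrow> real vec \<Rightarrow> nat \<Rightarrow> real vec" where
  "layer_out V z 0 = z"
| "layer_out V z (Suc k) = V (Suc k) *\<^sub>v layer_out V z k"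

lemma layer_out_step: "1 \<le> k \<Longrightarrow> layer_out V w k = V k *\<^sub>v layer_out V w (k-1)"
  by (cases k) auto

(* backprop L V k = (V L \<cdots> V (k+1))\<^sup>T 1, built from the top layer down. *)
fun backprop_rev :: "nat \<Rightarrow> (nat \<Rightarrow> real mat) \<Rightarrow> nat \<Rightarrow> real vec" where
  "backprop_rev L V 0 = vec 1 (\<lambda>_. 1)"
| "backprop_rev L V (Suc j) = transpose_mat (V (L - j)) *\<^sub>v backprop_rev L V j"

definition backprop :: "nat \<Rightarrow> (nat \<Rightarrow> real mat) \<Rightarrow> nat \<Rightarrow> real vec" where
  "backprop L V k = backprop_rev L V (L - k)"

definition net_dims :: "(nat \<Rightarrow> nat) \<Rightarrow> nat \<Rightarrow> (nat \<Rightarrow> real mat) \<Rightarrow> bool" where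
  "net_dims dims L V \<longleftrightarrow> (\<forall>k. 1 \<le> k \<and> k \<le> L \<longrightarrow> V k \<in> carrier_mat (dims k) (dims (k-1)))"

lemma net_dimsD: "net_dims dims L V \<Longrightarrow> 1 \<le> k \<Longrightarrow> k \<le> L \<Longrightarrow> V k \<in> carrier_mat (dims k) (dims (k-1))"
  unfolding net_dims_def by auto

lemma layer_out_carrier: "net_dims dims L V \<Longrightarrow> z \<in> carrier_vec (dims 0) \<Longrightarrow> k \<le> L \<Longrightarrow> layer_out V z k \<in> carrier_vec (dims k)"
proof (induction k)
  case (Suc k)
  have "V (Suc k) \<in> carrier_mat (dims (Suc k)) (dims k)" using net_dimsD[OF Suc.prems(1), of "Suc k"] Suc.prems by simp
  thus ?case using Suc by auto
qed simp

lemma backprop_rev_carrier: "net_dims dims L V \<Longrightarrow> dims L = 1 \<Longrightarrow> j \<le> L \<Longrightarrow> backprop_rev L V j \<in> carrier_vec (dims (L - j))"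
proof (induction j)
  case (Suc j)
  have e: "L - j - 1 = L - Suc j" by simp
  have "V (L - j) \<in> carrier_mat (dims (L - j)) (dims (L - j - 1))"
    using net_dimsD[OF Suc.prems(1), of "L - j"] Suc.prems(3) by simp
  hence V: "V (L - j) \<in> carrier_mat (dims (L - j)) (dims (L - Suc j))" unfolding e .
  have r: "backprop_rev L V j \<in> carrier_vec (dims (L - j))" using Suc by simp
  show ?case using V r by simp
qed simp

lemma backprop_carrier: "net_dims dims L V \<Longrightarrow> dims L = 1 \<Longrightarrow> k \<le> L \<Longrightarrow> backprop L V k \<in> carrier_vec (dims k)"
  unfolding backprop_def using backprop_rev_carrier[of dims L V "L - k"] by simp

lemma backprop_step: "1 \<le> k \<Longrightarrow> k \<le> L \<Longrightarrow> backprop L V (k-1) = transpose_mat (V k) *\<^sub>v backprop L V k"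
proof -
  assume k: "1 \<le> k" "k \<le> L"
  have "L - (k-1) = Suc (L - k)" using k by simp
  moreover have "L - (L - k) = k" using k by simp
  ultimately show ?thesis unfolding backprop_def by simp
qed

lemma backprop_last: "backprop L V L = vec 1 (\<lambda>_. 1)" unfolding backprop_def by simp

lemma mprod_carrier: "net_dims dims L V \<Longrightarrow> dims 0 = d \<Longrightarrow> k \<le> L \<Longrightarrow> mprod d V k \<in> carrier_mat (dims k) d"
proof (induction k)
  case (Suc k)
  have "V (Suc k) \<in> carrier_mat (dims (Suc k)) (dims k)" using net_dimsD[OF Suc.prems(1), of "Suc k"] Suc.prems by simp
  thus ?case using Suc by auto
qed simp

lemma mprod_mult_vec: "net_dims dims L V \<Longrightarrow> dims 0 = d \<Longrightarrow> z \<in> carrier_vec d \<Longrightarrow> k \<le> L \<Longrightarrow> mprod d V k *\<^sub>v z = layer_out V z k"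
proof (induction k)
  case (Suc k)
  have "V (Suc k) \<in> carrier_mat (dims (Suc k)) (dims k)" using net_dimsD[OF Suc.prems(1), of "Suc k"] Suc.prems by simp
  moreover have "mprod d V k \<in> carrier_mat (dims k) d" using mprod_carrier Suc.prems by simp
  ultimately show ?case using Suc by simp
qed simp

lemma wprod_inner_eq_output: assumes nd: "net_dims dims L V" and d: "dims 0 = d" and dL: "dims L = 1" and z: "z \<in> carrier_vec d"
  shows "wprod d L V \<bullet> z = (layer_out V z L) $ 0"
proof -
  have M: "mprod d V L \<in> carrier_mat 1 d" using mprod_carrier[OF nd d, of L] dL by simp
  have "(layer_out V z L) $ 0 = (mprod d V L *\<^sub>v z) $ 0" using mprod_mult_vec[OF nd d z, of L] by simp
  also have "\<dots> = row (mprod d V L) 0 \<bullet> z" using M by simp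
  finally show ?thesis unfolding wprod_def by simp
qed

lemma wprod_inner_eq_backprop_layer_out: assumes nd: "net_dims dims L V" and d: "dims 0 = d" and dL: "dims L = 1" and z: "z \<in> carrier_vec d"
  shows "k \<le> L \<Longrightarrow> wprod d L V \<bullet> z = backprop L V k \<bullet> layer_out V z k"
proof (induction "L - k" arbitrary: k)
  case 0
  hence k: "k = L" by simp
  have q: "layer_out V z L \<in> carrier_vec 1" using layer_out_carrier[OF nd, of z L] z d dL by simp
  show ?case unfolding k backprop_last wprod_inner_eq_output[OF nd d dL z] using q by (simp add: scalar_prod_def)
next
  case (Suc j)
  hence k: "k < L" "L - Suc k = j" by auto
  have IH: "wprod d L V \<bullet> z = backprop L V (Suc k) \<bullet> layer_out V z (Suc k)" using Suc.hyps(1)[of "Suc k"] k by simp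
  have Vk: "V (Suc k) \<in> carrier_mat (dims (Suc k)) (dims k)" using net_dimsD[OF nd, of "Suc k"] k by simp
  have qk: "layer_out V z k \<in> carrier_vec (dims k)" using layer_out_carrier[OF nd, of z k] z d k by simp
  have rk: "backprop L V (Suc k) \<in> carrier_vec (dims (Suc k))" using backprop_carrier[OF nd dL, of "Suc k"] k by simp
  have "backprop L V k = transpose_mat (V (Suc k)) *\<^sub>v backprop L V (Suc k)" using backprop_step[of "Suc k" L V] k by simp
  hence "backprop L V k \<bullet> layer_out V z k = backprop L V (Suc k) \<bullet> (V (Suc k) *\<^sub>v layer_out V z k)"
    using transpose_vec_mult_scalar[OF Vk qk rk] by simp
  thus ?case using IH by simp
qed

lemma layer_out_upd: "j < k \<Longrightarrow> layer_out (V(k:=E)) z j = layer_out V z j"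
  by (induction j) auto

lemma backprop_rev_upd: "k \<le> L \<Longrightarrow> j \<le> L - k \<Longrightarrow> backprop_rev L (V(k:=E)) j = backprop_rev L V j"
  by (induction j) auto

lemma backprop_upd: "k \<le> j \<Longrightarrow> j \<le> L \<Longrightarrow> backprop L (V(k:=E)) j = backprop L V j"
  unfolding backprop_def by (rule backprop_rev_upd) auto

section \<open>The gradient of the risk\<close>

lemma scalar_prod_mult_vec_sum: assumes A: "A \<in> carrier_mat r c" and y: "y \<in> carrier_vec r" and q: "q \<in> carrier_vec c"
  shows "y \<bullet> (A *\<^sub>v q) = (\<Sum>i<r. \<Sum>j<c. y $ i * A $$ (i,j) * q $ j)"
  using A y q by (simp add: scalar_prod_def index_mult_mat_vec_sum[OF A q] atLeast0LessThan sum_distrib_left mult.assoc)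

lemma set_entry_carrier: "A \<in> carrier_mat r c \<Longrightarrow> set_entry A a b s \<in> carrier_mat r c"
  unfolding set_entry_def by auto

lemma set_entry_bilin: assumes A: "A \<in> carrier_mat r c" and ab: "a < r" "b < c"
  and y: "y \<in> carrier_vec r" and q: "q \<in> carrier_vec c"
shows "y \<bullet> (set_entry A a b s *\<^sub>v q) = y \<bullet> (A *\<^sub>v q) + (s - A $$ (a,b)) * (y $ a * q $ b)"
proof -
  have E: "set_entry A a b s \<in> carrier_mat r c" using set_entry_carrier[OF A] .
  have "y \<bullet> (set_entry A a b s *\<^sub>v q) = (\<Sum>i<r. \<Sum>j<c. y $ i * set_entry A a b s $$ (i,j) * q $ j)"
    by (rule scalar_prod_mult_vec_sum[OF E y q])
  also have "\<dots> = (\<Sum>i<r. \<Sum>j<c. y $ i * A $$ (i,j) * q $ j + (if i = a \<and> j = b then (s - A $$ (a,b)) * (y $ a * q $ b) else 0))"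
  proof (intro sum.cong refl)
    fix i j assume ij: "i \<in> {..<r}" "j \<in> {..<c}"
    have e: "set_entry A a b s $$ (i,j) = (if (i,j) = (a,b) then s else A $$ (i,j))"
      using A ij unfolding set_entry_def by auto
    show "y $ i * set_entry A a b s $$ (i,j) * q $ j = y $ i * A $$ (i,j) * q $ j + (if i = a \<and> j = b then (s - A $$ (a,b)) * (y $ a * q $ b) else 0)"
    proof (cases "i = a \<and> j = b")
      case True thus ?thesis unfolding e by (simp add: algebra_simps)
    next
      case False thus ?thesis unfolding e by auto
    qed
  qed
  also have "\<dots> = (\<Sum>i<r. \<Sum>j<c. y $ i * A $$ (i,j) * q $ j) + (s - A $$ (a,b)) * (y $ a * q $ b)"
  proof -
    define K where "K = (s - A $$ (a,b)) * (y $ a * q $ b)"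
    have "\<And>i. (\<Sum>j<c. (if i = a \<and> j = b then K else 0)) = (if i = a then K else 0)"
      using ab by (simp add: sum.delta')
    hence "(\<Sum>i<r. \<Sum>j<c. (if i = a \<and> j = b then K else 0)) = K"
      using ab by (simp add: sum.delta')
    thus ?thesis unfolding K_def[symmetric] by (simp add: sum.distrib)
  qed
  also have "(\<Sum>i<r. \<Sum>j<c. y $ i * A $$ (i,j) * q $ j) = y \<bullet> (A *\<^sub>v q)" by (rule scalar_prod_mult_vec_sum[OF A y q, symmetric])
  finally show ?thesis .
qed

lemma net_dims_upd: "net_dims dims L V \<Longrightarrow> E \<in> carrier_mat (dims k) (dims (k-1)) \<Longrightarrow> net_dims dims L (V(k:=E))"
  unfolding net_dims_def by auto

lemma avg_loss_affine_has_derivative: fixes l dl :: "real \<Rightarrow> real"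
  assumes ld: "\<And>s. (l has_real_derivative dl s) (at s)"
  shows "((\<lambda>s. (1/real n) * (\<Sum>i<n. l (c i + (s - s0) * m i))) has_real_derivative
          (1/real n) * (\<Sum>i<n. dl (c i) * m i)) (at s0)"
proof -
  have "\<And>i. ((\<lambda>s. l (c i + (s - s0) * m i)) has_real_derivative dl (c i + (s0 - s0) * m i) * m i) (at s0)"
  proof -
    fix i
    have "((\<lambda>s. c i + (s - s0) * m i) has_real_derivative m i) (at s0)"
      by (auto intro!: derivative_eq_intros)
    thus "((\<lambda>s. l (c i + (s - s0) * m i)) has_real_derivative dl (c i + (s0 - s0) * m i) * m i) (at s0)"
      by (rule DERIV_chain2[OF ld])
  qed
  hence "((\<lambda>s. \<Sum>i<n. l (c i + (s - s0) * m i)) has_real_derivative (\<Sum>i<n. dl (c i) * m i)) (at s0)"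
    by (auto intro!: DERIV_sum)
  thus ?thesis by (rule DERIV_cmult)
qed

lemma grad_k_formula:
  assumes nd: "net_dims dims L V" and d: "dims 0 = d" and dL: "dims L = 1"
    and z: "\<And>i. i < n \<Longrightarrow> z i \<in> carrier_vec d" and k: "1 \<le> k" "k \<le> L"
    and ld: "\<And>s. (l has_real_derivative dl s) (at s)"
  shows "grad_k l n z d L V k = mat (dims k) (dims (k-1)) (\<lambda>(a,b). (1/real n) *
            (\<Sum>i<n. dl (wprod d L V \<bullet> z i) * (backprop L V k $ a * layer_out V (z i) (k-1) $ b)))"
proof -
  have Vk: "V k \<in> carrier_mat (dims k) (dims (k-1))" using net_dimsD[OF nd k] .
  have kk: "Suc (k - 1) = k" using k by simp
  show ?thesis
  proof (rule eq_matI)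
    fix a b assume ab: "a < dim_row (mat (dims k) (dims (k-1)) (\<lambda>(a,b). (1/real n) *
            (\<Sum>i<n. dl (wprod d L V \<bullet> z i) * (backprop L V k $ a * layer_out V (z i) (k-1) $ b))))"
       "b < dim_col (mat (dims k) (dims (k-1)) (\<lambda>(a,b). (1/real n) *
            (\<Sum>i<n. dl (wprod d L V \<bullet> z i) * (backprop L V k $ a * layer_out V (z i) (k-1) $ b))))"
    hence ab: "a < dims k" "b < dims (k-1)" by auto
    define m where "m i = backprop L V k $ a * layer_out V (z i) (k-1) $ b" for i
    define c where "c i = wprod d L V \<bullet> z i" for i
    define s0 where "s0 = V k $$ (a,b)"
    have h: "risk l n z d L (V(k := set_entry (V k) a b s)) = (1/real n) * (\<Sum>i<n. l (c i + (s - s0) * m i))" for s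
    proof -
      let ?E = "set_entry (V k) a b s"
      have E: "?E \<in> carrier_mat (dims k) (dims (k-1))" using set_entry_carrier[OF Vk] .
      have nd': "net_dims dims L (V(k := ?E))" using net_dims_upd[OF nd E] .
      have "wprod d L (V(k := ?E)) \<bullet> z i = c i + (s - s0) * m i" if i: "i < n" for i
      proof -
        have zi: "z i \<in> carrier_vec d" using z i .
        have q: "layer_out V (z i) (k-1) \<in> carrier_vec (dims (k-1))" using layer_out_carrier[OF nd, of "z i" "k-1"] zi d k by simp
        have r: "backprop L V k \<in> carrier_vec (dims k)" using backprop_carrier[OF nd dL k(2)] .
        have "wprod d L (V(k := ?E)) \<bullet> z i = backprop L (V(k := ?E)) k \<bullet> layer_out (V(k := ?E)) (z i) k"
          using wprod_inner_eq_backprop_layer_out[OF nd' d dL zi k(2)] .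
        also have "backprop L (V(k := ?E)) k = backprop L V k" using backprop_upd[of k k L] k by simp
        also have "layer_out (V(k := ?E)) (z i) k = ?E *\<^sub>v layer_out V (z i) (k-1)"
          using layer_out.simps(2)[of "V(k := ?E)" "z i" "k-1"] layer_out_upd[of "k-1" k V ?E "z i"] k kk by simp
        also have "backprop L V k \<bullet> (?E *\<^sub>v layer_out V (z i) (k-1)) = backprop L V k \<bullet> (V k *\<^sub>v layer_out V (z i) (k-1)) + (s - s0) * m i"
          unfolding s0_def m_def by (rule set_entry_bilin[OF Vk ab r q])
        also have "V k *\<^sub>v layer_out V (z i) (k-1) = layer_out V (z i) k"
          using layer_out.simps(2)[of V "z i" "k-1"] kk by simp
        also have "backprop L V k \<bullet> layer_out V (z i) k = c i" unfolding c_def using wprod_inner_eq_backprop_layer_out[OF nd d dL zi k(2)] by simp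
        finally show ?thesis .
      qed
      thus ?thesis unfolding risk_def by simp
    qed
    have D: "((\<lambda>s. risk l n z d L (V(k := set_entry (V k) a b s))) has_real_derivative
          (1/real n) * (\<Sum>i<n. dl (c i) * m i)) (at s0)"
      unfolding h by (rule avg_loss_affine_has_derivative[OF ld])
    have "grad_k l n z d L V k $$ (a,b) = (THE D. ((\<lambda>s. risk l n z d L (V(k := set_entry (V k) a b s))) has_real_derivative D) (at (V k $$ (a,b))))"
      unfolding grad_k_def using Vk ab by simp
    also have "\<dots> = (1/real n) * (\<Sum>i<n. dl (c i) * m i)"
      unfolding s0_def[symmetric] using D DERIV_unique by blast
    finally show "grad_k l n z d L V k $$ (a,b) = mat (dims k) (dims (k-1)) (\<lambda>(a,b). (1/real n) *
            (\<Sum>i<n. dl (wprod d L V \<bullet> z i) * (backprop L V k $ a * layer_out V (z i) (k-1) $ b))) $$ (a,b)"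
      using ab unfolding c_def m_def by simp
  qed (use Vk in \<open>auto simp: grad_k_def\<close>)
qed

definition avg_outer :: "nat \<Rightarrow> nat \<Rightarrow> nat \<Rightarrow> (nat \<Rightarrow> real) \<Rightarrow> real vec \<Rightarrow> (nat \<Rightarrow> real vec) \<Rightarrow> real mat" where
  "avg_outer r c n u ra q = mat r c (\<lambda>(a,b). (1/real n) * (\<Sum>i<n. u i * (ra $ a * q i $ b)))"

definition frob_inner :: "real mat \<Rightarrow> real mat \<Rightarrow> real" where
  "frob_inner A B = (\<Sum>a<dim_row A. \<Sum>b<dim_col A. A $$ (a,b) * B $$ (a,b))"

lemma avg_outer_carrier[simp]: "avg_outer r c n u ra q \<in> carrier_mat r c" unfolding avg_outer_def by simp

lemma sum_swap3: "(\<Sum>a\<in>A. \<Sum>b\<in>B. \<Sum>i\<in>I. f a b i) = (\<Sum>i\<in>I. \<Sum>a\<in>A. \<Sum>b\<in>B. f a b i)"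
proof -
  have "(\<Sum>a\<in>A. \<Sum>b\<in>B. \<Sum>i\<in>I. f a b i) = (\<Sum>a\<in>A. \<Sum>i\<in>I. \<Sum>b\<in>B. f a b i)"
    by (rule sum.cong[OF refl], rule sum.swap)
  also have "\<dots> = (\<Sum>i\<in>I. \<Sum>a\<in>A. \<Sum>b\<in>B. f a b i)" by (rule sum.swap)
  finally show ?thesis .
qed

lemma double_sum_const_mult_split: "(\<Sum>a\<in>A. \<Sum>b\<in>B. K * ((f a :: real) * g b)) = K * ((\<Sum>a\<in>A. f a) * (\<Sum>b\<in>B. g b))"
  unfolding sum_product by (simp add: sum_distrib_left)

lemma avg_outer_bilinear: assumes ra: "ra \<in> carrier_vec r" and q: "\<And>i. i < n \<Longrightarrow> q i \<in> carrier_vec c"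
  and y: "y \<in> carrier_vec r" and x: "x \<in> carrier_vec c"
  shows "y \<bullet> (avg_outer r c n u ra q *\<^sub>v x) = (1/real n) * (\<Sum>i<n. u i * ((ra \<bullet> y) * (q i \<bullet> x)))"
proof -
  have "y \<bullet> (avg_outer r c n u ra q *\<^sub>v x) = (\<Sum>a<r. \<Sum>b<c. y $ a * avg_outer r c n u ra q $$ (a,b) * x $ b)"
    by (rule scalar_prod_mult_vec_sum[OF avg_outer_carrier y x])
  also have "\<dots> = (\<Sum>a<r. \<Sum>b<c. \<Sum>i<n. (1/real n) * u i * ((ra $ a * y $ a) * (q i $ b * x $ b)))"
    unfolding avg_outer_def by (intro sum.cong refl) (simp add: sum_distrib_left sum_distrib_right algebra_simps)
  also have "\<dots> = (\<Sum>i<n. \<Sum>a<r. \<Sum>b<c. (1/real n) * u i * ((ra $ a * y $ a) * (q i $ b * x $ b)))"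
    by (rule sum_swap3)
  also have "\<dots> = (\<Sum>i<n. (1/real n) * u i * ((\<Sum>a<r. ra $ a * y $ a) * (\<Sum>b<c. q i $ b * x $ b)))"
    by (intro sum.cong refl) (rule double_sum_const_mult_split)
  also have "\<dots> = (1/real n) * (\<Sum>i<n. u i * ((ra \<bullet> y) * (q i \<bullet> x)))"
    using ra y q x by (simp add: sum_distrib_left scalar_prod_def atLeast0LessThan mult.assoc)
  finally show ?thesis .
qed

lemma frob_inner_avg_outer: assumes A: "A \<in> carrier_mat r c" and ra: "ra \<in> carrier_vec r" and q: "\<And>i. i < n \<Longrightarrow> q i \<in> carrier_vec c"
  shows "frob_inner A (avg_outer r c n u ra q) = (1/real n) * (\<Sum>i<n. u i * (ra \<bullet> (A *\<^sub>v q i)))"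
proof -
  have "frob_inner A (avg_outer r c n u ra q) = (\<Sum>a<r. \<Sum>b<c. \<Sum>i<n. (1/real n) * u i * (ra $ a * A $$ (a,b) * q i $ b))"
  proof -
    have dA: "dim_row A = r" "dim_col A = c" using A by auto
    show ?thesis unfolding frob_inner_def avg_outer_def dA by (intro sum.cong refl) (auto simp: sum_distrib_left algebra_simps)
  qed
  also have "\<dots> = (\<Sum>i<n. \<Sum>a<r. \<Sum>b<c. (1/real n) * u i * (ra $ a * A $$ (a,b) * q i $ b))"
    by (rule sum_swap3)
  also have "\<dots> = (\<Sum>i<n. (1/real n) * u i * (\<Sum>a<r. \<Sum>b<c. ra $ a * A $$ (a,b) * q i $ b))"
    by (intro sum.cong refl) (simp add: sum_distrib_left)
  also have "\<dots> = (1/real n) * (\<Sum>i<n. u i * (ra \<bullet> (A *\<^sub>v q i)))"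
    using scalar_prod_mult_vec_sum[OF A ra q] by (simp add: sum_distrib_left mult.assoc)
  finally show ?thesis .
qed

lemma frob_avg_outer_sq_le: assumes q: "\<And>i. i < n \<Longrightarrow> q i \<in> carrier_vec c" and ra: "ra \<in> carrier_vec r"
  shows "frob (avg_outer r c n u ra q) ^ 2 \<le> (1/real n)^2 * sq_norm ra * (real n * (\<Sum>i<n. (u i)^2 * sq_norm (q i)))"
proof -
  have "frob (avg_outer r c n u ra q) ^ 2 = (\<Sum>a<r. \<Sum>b<c. ((1/real n) * (\<Sum>i<n. u i * (ra $ a * q i $ b)))^2)"
    unfolding frob_sq avg_outer_def by simp
  also have "\<dots> = (\<Sum>a<r. \<Sum>b<c. (1/real n)^2 * (ra $ a)^2 * (\<Sum>i<n. u i * q i $ b)^2)"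
  proof (intro sum.cong refl)
    fix a b
    have E: "(\<Sum>i<n. u i * (ra $ a * q i $ b)) = ra $ a * (\<Sum>i<n. u i * q i $ b)"
      by (simp add: sum_distrib_left algebra_simps)
    thus "((1/real n) * (\<Sum>i<n. u i * (ra $ a * q i $ b)))^2 = (1/real n)^2 * (ra $ a)^2 * (\<Sum>i<n. u i * q i $ b)^2"
      by (simp only: E) (simp add: power2_eq_square algebra_simps divide_inverse)
  qed
  also have "\<dots> \<le> (\<Sum>a<r. \<Sum>b<c. (1/real n)^2 * (ra $ a)^2 * (real n * (\<Sum>i<n. (u i * q i $ b)^2)))"
    using sum_sq_le_card_sum_sq[of "\<lambda>i. u i * q i $ _" "{..<n}"]
    by (intro sum_mono mult_left_mono) auto
  also have "\<dots> = (\<Sum>a<r. \<Sum>b<c. ((1/real n)^2 * real n) * ((ra $ a)^2 * (\<Sum>i<n. (u i)^2 * (q i $ b)^2)))"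
    by (intro sum.cong refl) (simp add: power_mult_distrib)
  also have "\<dots> = ((1/real n)^2 * real n) * ((\<Sum>a<r. (ra $ a)^2) * (\<Sum>b<c. \<Sum>i<n. (u i)^2 * (q i $ b)^2))"
    by (rule double_sum_const_mult_split)
  also have "(\<Sum>b<c. \<Sum>i<n. (u i)^2 * (q i $ b)^2) = (\<Sum>i<n. (u i)^2 * (\<Sum>b<c. (q i $ b)^2))"
    by (subst sum.swap) (simp add: sum_distrib_left)
  also have "(\<Sum>i<n. (u i)^2 * (\<Sum>b<c. (q i $ b)^2)) = (\<Sum>i<n. (u i)^2 * sq_norm (q i))"
  proof (intro sum.cong refl)
    fix i assume "i \<in> {..<n}"
    hence "dim_vec (q i) = c" using q by auto
    thus "(u i)^2 * (\<Sum>b<c. (q i $ b)^2) = (u i)^2 * sq_norm (q i)"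
      by (simp add: scalar_prod_def atLeast0LessThan power2_eq_square)
  qed
  also have "(\<Sum>a<r. (ra $ a)^2) = sq_norm ra"
    using ra by (auto simp: scalar_prod_def atLeast0LessThan power2_eq_square)
  finally show ?thesis by (simp add: algebra_simps)
qed

lemma sum_diff_mult_distrib: "(\<Sum>i\<in>I. ((a i::real) - e * b i) * x i) = (\<Sum>i\<in>I. a i * x i) - (\<Sum>i\<in>I. e * (b i * x i))"
  by (simp add: left_diff_distrib sum_subtractf mult.assoc)

lemma sq_norm_minus_smult: assumes "v \<in> carrier_vec m" "w \<in> carrier_vec m"
  shows "sq_norm (v - e \<cdot>\<^sub>v w) = sq_norm v - 2 * e * (v \<bullet> w) + e^2 * sq_norm w"
  using assms by (simp add: scalar_prod_def atLeast0LessThan sum.distrib sum_subtractf sum_distrib_left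
      power2_eq_square algebra_simps)

lemma mult_update_vec: fixes A G :: "real mat" assumes A: "A \<in> carrier_mat r c" and G: "G \<in> carrier_mat r c" and x: "x \<in> carrier_vec c"
  shows "(A - e \<cdot>\<^sub>m G) *\<^sub>v x = A *\<^sub>v x - e \<cdot>\<^sub>v (G *\<^sub>v x)"
  using A G x apply (intro eq_vecI) apply (auto simp: scalar_prod_def atLeast0LessThan sum_distrib_left)
  by (metis (no_types) sum_diff_mult_distrib)

lemma transpose_mult_update_vec: fixes A G :: "real mat" assumes A: "A \<in> carrier_mat r c" and G: "G \<in> carrier_mat r c" and x: "x \<in> carrier_vec r"
  shows "transpose_mat (A - e \<cdot>\<^sub>m G) *\<^sub>v x = transpose_mat A *\<^sub>v x - e \<cdot>\<^sub>v (transpose_mat G *\<^sub>v x)"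
  using A G x apply (intro eq_vecI) apply (auto simp: scalar_prod_def atLeast0LessThan sum_distrib_left)
  by (metis (no_types) sum_diff_mult_distrib)

lemma sq_norm_mult_update: assumes A: "A \<in> carrier_mat r c" and G: "G \<in> carrier_mat r c" and x: "x \<in> carrier_vec c"
  shows "sq_norm ((A - e \<cdot>\<^sub>m G) *\<^sub>v x) = sq_norm (A *\<^sub>v x) - 2 * e * ((A *\<^sub>v x) \<bullet> (G *\<^sub>v x)) + e^2 * sq_norm (G *\<^sub>v x)"
  unfolding mult_update_vec[OF A G x] using A G x by (intro sq_norm_minus_smult[of _ r]) auto

lemma sq_norm_transpose_mult_update: assumes A: "A \<in> carrier_mat r c" and G: "G \<in> carrier_mat r c" and x: "x \<in> carrier_vec r"
  shows "sq_norm (transpose_mat (A - e \<cdot>\<^sub>m G) *\<^sub>v x) = sq_norm (transpose_mat A *\<^sub>v x)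
     - 2 * e * ((transpose_mat A *\<^sub>v x) \<bullet> (transpose_mat G *\<^sub>v x)) + e^2 * sq_norm (transpose_mat G *\<^sub>v x)"
  unfolding transpose_mult_update_vec[OF A G x] using A G x by (intro sq_norm_minus_smult[of _ c]) auto

lemma frob_sq_update: assumes A: "A \<in> carrier_mat r c" and G: "G \<in> carrier_mat r c"
  shows "frob (A - e \<cdot>\<^sub>m G) ^ 2 = frob A ^ 2 - 2 * e * frob_inner A G + e^2 * frob G ^ 2"
proof -
  have "frob (A - e \<cdot>\<^sub>m G) ^ 2 = (\<Sum>a<r. \<Sum>b<c. (A $$ (a,b))^2 - 2 * e * (A $$ (a,b) * G $$ (a,b)) + e^2 * (G $$ (a,b))^2)"
    unfolding frob_sq using A G by (intro sum.cong) (auto simp: power2_eq_square algebra_simps)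
  also have "\<dots> = frob A ^ 2 - 2 * e * frob_inner A G + e^2 * frob G ^ 2"
    unfolding frob_sq frob_inner_def using A G by (simp add: sum.distrib sum_subtractf sum_distrib_left)
  finally show ?thesis .
qed

lemma frob_smult: "frob (c \<cdot>\<^sub>m A) = \<bar>c\<bar> * frob A"
proof -
  have "frob (c \<cdot>\<^sub>m A)^2 = (c * frob A)^2"
    unfolding power_mult_distrib[of c "frob A"] frob_sq by (simp add: power_mult_distrib sum_distrib_left)
  hence "sqrt (frob (c \<cdot>\<^sub>m A)^2) = sqrt ((c * frob A)^2)" by simp
  thus ?thesis using frob_nonneg[of "c \<cdot>\<^sub>m A"] frob_nonneg[of A] by (simp add: abs_mult)
qed

lemma frob_inner_smult_self: "frob_inner (c \<cdot>\<^sub>m A) A = c * frob A ^ 2"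
  unfolding frob_inner_def frob_sq by (simp add: sum_distrib_left power2_eq_square mult.assoc)

lemma bessel_scalar_prod: assumes c: "c \<in> carrier_vec m" and u: "u \<in> carrier_vec m" and w: "w \<in> carrier_vec m"
  and Nu: "sq_norm u = 1" and uw: "u \<bullet> w = 0"
  shows "(c \<bullet> w)^2 \<le> (sq_norm c - (c \<bullet> u)^2) * sq_norm w"
proof -
  define c' where "c' = c - (c \<bullet> u) \<cdot>\<^sub>v u"
  have c'c: "c' \<in> carrier_vec m" unfolding c'_def using c u by simp
  have "c' \<bullet> w = c \<bullet> w - (c \<bullet> u) * (u \<bullet> w)" unfolding c'_def using c u w
    by (simp add: minus_scalar_prod_distrib)
  hence cw: "c' \<bullet> w = c \<bullet> w" using uw by simp
  have "sq_norm c' = sq_norm c - 2 * (c \<bullet> u) * (c \<bullet> u) + (c \<bullet> u)^2 * sq_norm u"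
    unfolding c'_def by (rule sq_norm_minus_smult[OF c u])
  hence Nc': "sq_norm c' = sq_norm c - (c \<bullet> u)^2" using Nu by (simp add: power2_eq_square)
  have "(c' \<bullet> w)^2 \<le> sq_norm c' * sq_norm w" using cauchy_schwarz[of c' w] c'c w by simp
  thus ?thesis unfolding cw Nc' .
qed

lemma bessel_transpose_mult: assumes A: "A \<in> carrier_mat r c" and u: "u \<in> carrier_vec r" and w: "w \<in> carrier_vec r"
  and Nu: "sq_norm u = 1" and uw: "u \<bullet> w = 0"
  shows "sq_norm (transpose_mat A *\<^sub>v w) \<le> (frob A ^ 2 - sq_norm (transpose_mat A *\<^sub>v u)) * sq_norm w"
proof -
  have idx: "(transpose_mat A *\<^sub>v x) $ j = col A j \<bullet> x" if "j < c" for x j using A that by simp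
  have "sq_norm (transpose_mat A *\<^sub>v w) = (\<Sum>j<c. (col A j \<bullet> w)^2)"
    using A by (simp add: scalar_prod_def[of "transpose_mat A *\<^sub>v w"] atLeast0LessThan power2_eq_square)
  also have "\<dots> \<le> (\<Sum>j<c. (sq_norm (col A j) - (col A j \<bullet> u)^2) * sq_norm w)"
    using A u w Nu uw by (intro sum_mono bessel_scalar_prod[of _ r]) auto
  also have "\<dots> = ((\<Sum>j<c. sq_norm (col A j)) - (\<Sum>j<c. (col A j \<bullet> u)^2)) * sq_norm w"
    by (simp add: sum_distrib_right sum_subtractf left_diff_distrib)
  also have "(\<Sum>j<c. sq_norm (col A j)) = frob A ^ 2"
    unfolding frob_sq using A by (subst sum.swap) (simp add: scalar_prod_def atLeast0LessThan power2_eq_square)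
  also have "(\<Sum>j<c. (col A j \<bullet> u)^2) = sq_norm (transpose_mat A *\<^sub>v u)"
    using A by (simp add: scalar_prod_def[of "transpose_mat A *\<^sub>v u"] atLeast0LessThan power2_eq_square)
  finally show ?thesis .
qed

lemma sq_norm_transpose_mult_le_top_sv:
  fixes A :: "real mat"
  assumes A: "A \<in> carrier_mat r c" and u: "u \<in> carrier_vec r" and v': "v' \<in> carrier_vec c"
    and v: "v \<in> carrier_vec r" and Nu: "sq_norm u = 1" and Nv': "sq_norm v' = 1" and Nv: "sq_norm v = 1"
    and Av': "A *\<^sub>v v' = s \<cdot>\<^sub>v u" and ATu: "transpose_mat A *\<^sub>v u = s \<cdot>\<^sub>v v'"
  shows "sq_norm (transpose_mat A *\<^sub>v v) \<le> (u \<bullet> v)^2 * s^2 + (1 - (u \<bullet> v)^2) * (frob A ^ 2 - s^2)"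
proof -
  define a where "a = u \<bullet> v"
  have ATu_sq: "sq_norm (transpose_mat A *\<^sub>v u) = s^2" unfolding ATu sq_norm_smult Nv' by simp
  define w where "w = v - a \<cdot>\<^sub>v u"
  have w: "w \<in> carrier_vec r" unfolding w_def using u v by simp
  have uw: "u \<bullet> w = 0" unfolding w_def a_def using u v Nu
    by (simp add: scalar_prod_minus_distrib[of u r] scalar_prod_comm)
  have Nw: "sq_norm w = 1 - a^2" unfolding w_def sq_norm_minus_smult[OF v u] Nv Nu using u v
    by (simp add: a_def scalar_prod_comm power2_eq_square)
  have vw: "v = w + a \<cdot>\<^sub>v u" unfolding w_def using u v by (intro eq_vecI) auto
  have Tv: "transpose_mat A *\<^sub>v v = transpose_mat A *\<^sub>v w + a \<cdot>\<^sub>v (s \<cdot>\<^sub>v v')"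
  proof -
    have "transpose_mat A *\<^sub>v v = transpose_mat A *\<^sub>v w + transpose_mat A *\<^sub>v (a \<cdot>\<^sub>v u)"
      unfolding vw using A w u by (intro mult_add_distrib_mat_vec[of _ c r]) auto
    also have "transpose_mat A *\<^sub>v (a \<cdot>\<^sub>v u) = a \<cdot>\<^sub>v (transpose_mat A *\<^sub>v u)"
      using A u by (intro mult_mat_vec[of _ c r]) auto
    finally show ?thesis unfolding ATu .
  qed
  have orth: "(transpose_mat A *\<^sub>v w) \<bullet> (a \<cdot>\<^sub>v (s \<cdot>\<^sub>v v')) = 0"
  proof -
    have "(transpose_mat A *\<^sub>v w) \<bullet> v' = w \<bullet> (A *\<^sub>v v')" by (rule transpose_vec_mult_scalar[OF A v' w])
    also have "\<dots> = s * (w \<bullet> u)" unfolding Av' using w u by simp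
    also have "w \<bullet> u = 0" using uw u w by (simp add: scalar_prod_comm)
    finally show ?thesis using A v' by simp
  qed
  have "sq_norm (transpose_mat A *\<^sub>v v) = sq_norm (transpose_mat A *\<^sub>v w) + a^2 * s^2"
    unfolding Tv using sq_norm_add[of "transpose_mat A *\<^sub>v w" "a \<cdot>\<^sub>v (s \<cdot>\<^sub>v v')"] orth A v' Nv'
    by (simp add: sq_norm_smult power_mult_distrib)
  also have "sq_norm (transpose_mat A *\<^sub>v w) \<le> (frob A ^ 2 - sq_norm (transpose_mat A *\<^sub>v u)) * sq_norm w"
    by (rule bessel_transpose_mult[OF A u w Nu uw])
  finally show ?thesis unfolding ATu_sq Nw a_def by (simp add: algebra_simps)
qed

lemma sq_norm_eq_1_if_unit: "vnorm v = 1 \<Longrightarrow> sq_norm v = 1" using vnorm_sq[of v] by simp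

definition net_grad :: "(real \<Rightarrow> real) \<Rightarrow> nat \<Rightarrow> (nat \<Rightarrow> real vec) \<Rightarrow> nat \<Rightarrow> (nat \<Rightarrow> nat) \<Rightarrow> nat
   \<Rightarrow> (nat \<Rightarrow> real mat) \<Rightarrow> nat \<Rightarrow> real mat" where
  "net_grad dl n z d dims L V k = avg_outer (dims k) (dims (k-1)) n (\<lambda>i. dl (wprod d L V \<bullet> z i)) (backprop L V k) (\<lambda>i. layer_out V (z i) (k-1))"

lemma net_grad_carrier[simp]: "net_grad dl n z d dims L V k \<in> carrier_mat (dims k) (dims (k-1))"
  unfolding net_grad_def by simp

lemma grad_k_eq_net_grad:
  assumes nd: "net_dims dims L V" and d: "dims 0 = d" and dL: "dims L = 1"
    and z: "\<And>i. i < n \<Longrightarrow> z i \<in> carrier_vec d" and k: "1 \<le> k" "k \<le> L"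
    and ld: "\<And>s. (l has_real_derivative dl s) (at s)"
  shows "grad_k l n z d L V k = net_grad dl n z d dims L V k"
  using grad_k_formula[OF nd d dL z k ld] unfolding net_grad_def avg_outer_def by simp

locale net =
  fixes dims :: "nat \<Rightarrow> nat" and L d n :: nat and z :: "nat \<Rightarrow> real vec" and V :: "nat \<Rightarrow> real mat"
  assumes nd: "net_dims dims L V" and d: "dims 0 = d" and dL: "dims L = 1"
    and z: "\<And>i. i < n \<Longrightarrow> z i \<in> carrier_vec d"
begin

lemma V_carrier: "1 \<le> k \<Longrightarrow> k \<le> L \<Longrightarrow> V k \<in> carrier_mat (dims k) (dims (k-1))"
  using net_dimsD[OF nd] by auto

lemma layer_out_z_carrier: "i < n \<Longrightarrow> k \<le> L \<Longrightarrow> layer_out V (z i) k \<in> carrier_vec (dims k)"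
  using layer_out_carrier[OF nd, of "z i" k] z d by simp

lemma backprop_V_carrier: "k \<le> L \<Longrightarrow> backprop L V k \<in> carrier_vec (dims k)"
  using backprop_carrier[OF nd dL] by simp

lemma sum_frob_inner_net_grad:
  assumes D_carrier: "\<And>k. 1 \<le> k \<Longrightarrow> k \<le> L \<Longrightarrow> D k \<in> carrier_mat (dims k) (dims (k-1))"
  shows "(\<Sum>k\<in>{1..L}. frob_inner (D k) (net_grad dl n z d dims L V k))
    = (1/real n) * (\<Sum>i<n. dl (wprod d L V \<bullet> z i) * (\<Sum>k\<in>{1..L}. backprop L V k \<bullet> (D k *\<^sub>v layer_out V (z i) (k-1))))"
proof -
  have "(\<Sum>k\<in>{1..L}. frob_inner (D k) (net_grad dl n z d dims L V k))
      = (\<Sum>k\<in>{1..L}. (1/real n) * (\<Sum>i<n. dl (wprod d L V \<bullet> z i) * (backprop L V k \<bullet> (D k *\<^sub>v layer_out V (z i) (k-1)))))"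
    unfolding net_grad_def by (intro sum.cong refl frob_inner_avg_outer D_carrier backprop_V_carrier layer_out_z_carrier) auto
  also have "\<dots> = (1/real n) * (\<Sum>i<n. dl (wprod d L V \<bullet> z i) * (\<Sum>k\<in>{1..L}. backprop L V k \<bullet> (D k *\<^sub>v layer_out V (z i) (k-1))))"
    by (simp only: sum_distrib_left) (rule sum.swap)
  finally show ?thesis .
qed

(* The source of approximate balancedness: W\<^sub>k \<nabla>\<^sub>k\<^sup>T and W\<^sub>k\<^sub>+\<^sub>1\<^sup>T \<nabla>\<^sub>k\<^sub>+\<^sub>1 have the same quadratic form. *)
lemma transpose_net_grad_balance: assumes k: "1 \<le> k" "k < L" and x: "x \<in> carrier_vec (dims k)"
  shows "(transpose_mat (V k) *\<^sub>v x) \<bullet> (transpose_mat (net_grad dl n z d dims L V k) *\<^sub>v x)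
       = (V (Suc k) *\<^sub>v x) \<bullet> (net_grad dl n z d dims L V (Suc k) *\<^sub>v x)"
proof -
  let ?u = "\<lambda>i. dl (wprod d L V \<bullet> z i)"
  have Vk: "V k \<in> carrier_mat (dims k) (dims (k-1))" using V_carrier k by simp
  have Vk1: "V (Suc k) \<in> carrier_mat (dims (Suc k)) (dims k)" using V_carrier[of "Suc k"] k by simp
  have rk: "backprop L V k \<in> carrier_vec (dims k)" using backprop_V_carrier k by simp
  have rk1: "backprop L V (Suc k) \<in> carrier_vec (dims (Suc k))" using backprop_V_carrier k by simp
  have qk: "\<And>i. i < n \<Longrightarrow> layer_out V (z i) k \<in> carrier_vec (dims k)" using layer_out_z_carrier k by simp
  have qk1: "\<And>i. i < n \<Longrightarrow> layer_out V (z i) (k-1) \<in> carrier_vec (dims (k-1))" using layer_out_z_carrier k by simp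
  have Vx: "transpose_mat (V k) *\<^sub>v x \<in> carrier_vec (dims (k-1))" using Vk x by simp
  have G: "net_grad dl n z d dims L V k \<in> carrier_mat (dims k) (dims (k-1))" by (rule net_grad_carrier)
  have "(transpose_mat (V k) *\<^sub>v x) \<bullet> (transpose_mat (net_grad dl n z d dims L V k) *\<^sub>v x)
      = (transpose_mat (net_grad dl n z d dims L V k) *\<^sub>v x) \<bullet> (transpose_mat (V k) *\<^sub>v x)"
    using Vk x carrier_matD[OF G] by (intro scalar_prod_comm) simp
  also have "\<dots> = x \<bullet> (net_grad dl n z d dims L V k *\<^sub>v (transpose_mat (V k) *\<^sub>v x))"
    by (rule transpose_vec_mult_scalar[OF G Vx x])
  also have "\<dots> = (1/real n) * (\<Sum>i<n. ?u i * ((backprop L V k \<bullet> x) * (layer_out V (z i) (k-1) \<bullet> (transpose_mat (V k) *\<^sub>v x))))"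
    unfolding net_grad_def by (rule avg_outer_bilinear[OF rk qk1 x Vx])
  also have "\<dots> = (1/real n) * (\<Sum>i<n. ?u i * ((backprop L V k \<bullet> x) * (x \<bullet> layer_out V (z i) k)))"
  proof -
    have "layer_out V (z i) (k-1) \<bullet> (transpose_mat (V k) *\<^sub>v x) = x \<bullet> layer_out V (z i) k" if i: "i < n" for i
    proof -
      have "layer_out V (z i) (k-1) \<bullet> (transpose_mat (V k) *\<^sub>v x) = (transpose_mat (V k) *\<^sub>v x) \<bullet> layer_out V (z i) (k-1)"
        using Vk qk1[OF i] by (intro scalar_prod_comm) simp
      also have "\<dots> = x \<bullet> (V k *\<^sub>v layer_out V (z i) (k-1))" by (rule transpose_vec_mult_scalar[OF Vk qk1[OF i] x])
      also have "V k *\<^sub>v layer_out V (z i) (k-1) = layer_out V (z i) k" using layer_out_step k by simp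
      finally show ?thesis .
    qed
    thus ?thesis by simp
  qed
  also have "\<dots> = (1/real n) * (\<Sum>i<n. ?u i * ((backprop L V (Suc k) \<bullet> (V (Suc k) *\<^sub>v x)) * (layer_out V (z i) (Suc k - 1) \<bullet> x)))"
  proof -
    have r: "backprop L V (Suc k) \<bullet> (V (Suc k) *\<^sub>v x) = backprop L V k \<bullet> x"
    proof -
      have "backprop L V k = transpose_mat (V (Suc k)) *\<^sub>v backprop L V (Suc k)" using backprop_step[of "Suc k" L V] k by simp
      hence "backprop L V k \<bullet> x = backprop L V (Suc k) \<bullet> (V (Suc k) *\<^sub>v x)"
        using transpose_vec_mult_scalar[OF Vk1 x rk1] by simp
      thus ?thesis by simp
    qed
    have "x \<bullet> layer_out V (z i) k = layer_out V (z i) (Suc k - 1) \<bullet> x" if i: "i < n" for i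
      using qk[OF i] x by (simp add: scalar_prod_comm)
    thus ?thesis using r by simp
  qed
  also have "\<dots> = (V (Suc k) *\<^sub>v x) \<bullet> (net_grad dl n z d dims L V (Suc k) *\<^sub>v x)"
    unfolding net_grad_def using Vk1 x k by (intro avg_outer_bilinear[symmetric] backprop_V_carrier layer_out_z_carrier) auto
  finally show ?thesis .
qed

lemma frob_inner_net_grad_balance: assumes k: "1 \<le> k" "k < L"
  shows "frob_inner (V k) (net_grad dl n z d dims L V k) = frob_inner (V (Suc k)) (net_grad dl n z d dims L V (Suc k))"
proof -
  have Vk: "V k \<in> carrier_mat (dims k) (dims (k-1))" using V_carrier k by simp
  have Vk1: "V (Suc k) \<in> carrier_mat (dims (Suc k)) (dims k)" using V_carrier[of "Suc k"] k by simp
  have rk1: "backprop L V (Suc k) \<in> carrier_vec (dims (Suc k))" using backprop_V_carrier k by simp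
  have qk: "\<And>i. i < n \<Longrightarrow> layer_out V (z i) k \<in> carrier_vec (dims k)" using layer_out_z_carrier k by simp
  have "frob_inner (V k) (net_grad dl n z d dims L V k) = (1/real n) * (\<Sum>i<n. dl (wprod d L V \<bullet> z i) * (backprop L V k \<bullet> (V k *\<^sub>v layer_out V (z i) (k-1))))"
    unfolding net_grad_def using k by (intro frob_inner_avg_outer[OF Vk] backprop_V_carrier layer_out_z_carrier) auto
  also have "\<dots> = (1/real n) * (\<Sum>i<n. dl (wprod d L V \<bullet> z i) * (backprop L V (Suc k) \<bullet> (V (Suc k) *\<^sub>v layer_out V (z i) (Suc k - 1))))"
  proof -
    have "backprop L V k \<bullet> (V k *\<^sub>v layer_out V (z i) (k-1)) = backprop L V (Suc k) \<bullet> (V (Suc k) *\<^sub>v layer_out V (z i) (Suc k - 1))" if i: "i < n" for i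
    proof -
      have e1: "V k *\<^sub>v layer_out V (z i) (k-1) = layer_out V (z i) k" using layer_out_step k by simp
      have e2: "backprop L V k = transpose_mat (V (Suc k)) *\<^sub>v backprop L V (Suc k)" using backprop_step[of "Suc k" L V] k by simp
      have e3: "(transpose_mat (V (Suc k)) *\<^sub>v backprop L V (Suc k)) \<bullet> layer_out V (z i) k = backprop L V (Suc k) \<bullet> (V (Suc k) *\<^sub>v layer_out V (z i) k)"
        by (rule transpose_vec_mult_scalar[OF Vk1 qk[OF i] rk1])
      show ?thesis unfolding e1 using e3 e2 by simp
    qed
    thus ?thesis by simp
  qed
  also have "\<dots> = frob_inner (V (Suc k)) (net_grad dl n z d dims L V (Suc k))"
  proof -
    have Vk1': "V (Suc k) \<in> carrier_mat (dims (Suc k)) (dims (Suc k - 1))" using Vk1 by simp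
    show ?thesis unfolding net_grad_def using k by (intro frob_inner_avg_outer[symmetric, OF Vk1'] backprop_V_carrier layer_out_z_carrier) auto
  qed
  finally show ?thesis .
qed

lemma frob_net_grad_sq_le: assumes k: "1 \<le> k" "k \<le> L" and n: "n \<ge> 1"
  and Gb: "\<And>i. i < n \<Longrightarrow> \<bar>dl (wprod d L V \<bullet> z i)\<bar> \<le> G"
  and Mb: "\<And>i. i < n \<Longrightarrow> sq_norm (layer_out V (z i) (k-1)) \<le> M"
  shows "frob (net_grad dl n z d dims L V k) ^ 2 \<le> G^2 * sq_norm (backprop L V k) * M"
proof -
  let ?u = "\<lambda>i. dl (wprod d L V \<bullet> z i)"
  have "frob (net_grad dl n z d dims L V k) ^ 2 \<le> (1/real n)^2 * sq_norm (backprop L V k) * (real n * (\<Sum>i<n. (?u i)^2 * sq_norm (layer_out V (z i) (k-1))))"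
    unfolding net_grad_def using k by (intro frob_avg_outer_sq_le layer_out_z_carrier backprop_V_carrier) auto
  also have "\<dots> \<le> (1/real n)^2 * sq_norm (backprop L V k) * (real n * (\<Sum>i<n. G^2 * M))"
  proof -
    have "(?u i)^2 * sq_norm (layer_out V (z i) (k-1)) \<le> G^2 * M" if i: "i < n" for i
    proof (rule mult_mono)
      have "\<bar>?u i\<bar>^2 \<le> G^2" by (rule power_mono[OF Gb[OF i] abs_ge_zero])
      thus "(?u i)^2 \<le> G^2" by simp
      show "sq_norm (layer_out V (z i) (k-1)) \<le> M" using Mb[OF i] .
      show "0 \<le> G^2" by simp
      show "0 \<le> sq_norm (layer_out V (z i) (k-1))" by (rule sq_norm_nonneg)
    qed
    hence "(\<Sum>i<n. (?u i)^2 * sq_norm (layer_out V (z i) (k-1))) \<le> (\<Sum>i<n. G^2 * M)" by (intro sum_mono) auto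
    thus ?thesis using sq_norm_nonneg[of "backprop L V k"] by (intro mult_left_mono) auto
  qed
  also have "\<dots> = G^2 * sq_norm (backprop L V k) * M" using n by (simp add: power2_eq_square field_simps)
  finally show ?thesis .
qed

end

section \<open>Smoothness of the risk along a straight segment\<close>

fun interp_out :: "(nat \<Rightarrow> real mat) \<Rightarrow> (nat \<Rightarrow> real mat) \<Rightarrow> real vec \<Rightarrow> real \<Rightarrow> nat \<Rightarrow> real vec" where
  "interp_out V D z \<tau> 0 = z"
| "interp_out V D z \<tau> (Suc j) = (V (Suc j) + \<tau> \<cdot>\<^sub>m D (Suc j)) *\<^sub>v interp_out V D z \<tau> j"

fun interp_deriv :: "(nat \<Rightarrow> real mat) \<Rightarrow> (nat \<Rightarrow> real mat) \<Rightarrow> real vec \<Rightarrow> real \<Rightarrow> nat \<Rightarrow> real vec" where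
  "interp_deriv V D z \<tau> 0 = 0\<^sub>v (dim_vec z)"
| "interp_deriv V D z \<tau> (Suc j) = D (Suc j) *\<^sub>v interp_out V D z \<tau> j + (V (Suc j) + \<tau> \<cdot>\<^sub>m D (Suc j)) *\<^sub>v interp_deriv V D z \<tau> j"

locale net_path =
  fixes dims :: "nat \<Rightarrow> nat" and L :: nat and V D :: "nat \<Rightarrow> real mat"
  assumes V_carrier: "\<And>k. 1 \<le> k \<Longrightarrow> k \<le> L \<Longrightarrow> V k \<in> carrier_mat (dims k) (dims (k-1))"
    and D_carrier: "\<And>k. 1 \<le> k \<Longrightarrow> k \<le> L \<Longrightarrow> D k \<in> carrier_mat (dims k) (dims (k-1))"
begin

lemma V_carrier_Suc: "j < L \<Longrightarrow> V (Suc j) \<in> carrier_mat (dims (Suc j)) (dims j)" using V_carrier[of "Suc j"] by simp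

lemma D_carrier_Suc: "j < L \<Longrightarrow> D (Suc j) \<in> carrier_mat (dims (Suc j)) (dims j)" using D_carrier[of "Suc j"] by simp

lemma perturbed_carrier_Suc: "j < L \<Longrightarrow> V (Suc j) + t \<cdot>\<^sub>m D (Suc j) \<in> carrier_mat (dims (Suc j)) (dims j)"
  using V_carrier_Suc D_carrier_Suc by simp

lemma interp_out_carrier: "z \<in> carrier_vec (dims 0) \<Longrightarrow> j \<le> L \<Longrightarrow> interp_out V D z t j \<in> carrier_vec (dims j)"
proof (induction j)
  case (Suc j) thus ?case using perturbed_carrier_Suc[of j t] by simp
qed simp

lemma interp_deriv_carrier: "z \<in> carrier_vec (dims 0) \<Longrightarrow> j \<le> L \<Longrightarrow> interp_deriv V D z t j \<in> carrier_vec (dims j)"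
proof (induction j)
  case (Suc j)
  have "D (Suc j) *\<^sub>v interp_out V D z t j \<in> carrier_vec (dims (Suc j))"
    using D_carrier_Suc[of j] Suc.prems by (intro carrier_vecI) auto
  moreover have "(V (Suc j) + t \<cdot>\<^sub>m D (Suc j)) *\<^sub>v interp_deriv V D z t j \<in> carrier_vec (dims (Suc j))"
    using perturbed_carrier_Suc[of j t] Suc by simp
  ultimately show ?case by simp
qed simp

lemma interp_out_has_derivative: assumes z: "z \<in> carrier_vec (dims 0)"
  shows "j \<le> L \<Longrightarrow> a < dims j \<Longrightarrow> ((\<lambda>t. interp_out V D z t j $ a) has_real_derivative (interp_deriv V D z t j $ a)) (at t)"
proof (induction j arbitrary: a)
  case 0 thus ?case using z by simp
next
  case (Suc j)
  have j: "j < L" using Suc by simp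
  have Vj: "V (Suc j) \<in> carrier_mat (dims (Suc j)) (dims j)" using V_carrier_Suc[OF j] .
  have Dj: "D (Suc j) \<in> carrier_mat (dims (Suc j)) (dims j)" using D_carrier_Suc[OF j] .
  have eq: "interp_out V D z s (Suc j) $ a = (\<Sum>b<dims j. (V (Suc j) $$ (a,b) + s * D (Suc j) $$ (a,b)) * interp_out V D z s j $ b)" for s
  proof -
    have "interp_out V D z s (Suc j) $ a = (\<Sum>b<dims j. (V (Suc j) + s \<cdot>\<^sub>m D (Suc j)) $$ (a,b) * interp_out V D z s j $ b)"
      using index_mult_mat_vec_sum[OF perturbed_carrier_Suc[OF j] interp_out_carrier[OF z, of j s] Suc.prems(2)] j by simp
    also have "\<dots> = (\<Sum>b<dims j. (V (Suc j) $$ (a,b) + s * D (Suc j) $$ (a,b)) * interp_out V D z s j $ b)"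
      using Vj Dj Suc.prems(2) by (intro sum.cong refl) auto
    finally show ?thesis .
  qed
  have "((\<lambda>s. \<Sum>b<dims j. (V (Suc j) $$ (a,b) + s * D (Suc j) $$ (a,b)) * interp_out V D z s j $ b) has_real_derivative
       (\<Sum>b<dims j. D (Suc j) $$ (a,b) * interp_out V D z t j $ b + (V (Suc j) $$ (a,b) + t * D (Suc j) $$ (a,b)) * interp_deriv V D z t j $ b)) (at t)"
  proof (rule DERIV_sum)
    fix b assume "b \<in> {..<dims j}"
    hence IH: "((\<lambda>s. interp_out V D z s j $ b) has_real_derivative interp_deriv V D z t j $ b) (at t)" using Suc j by simp
    have lin: "((\<lambda>s. V (Suc j) $$ (a,b) + s * D (Suc j) $$ (a,b)) has_real_derivative D (Suc j) $$ (a,b)) (at t)"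
      by (auto intro!: derivative_eq_intros)
    show "((\<lambda>s. (V (Suc j) $$ (a,b) + s * D (Suc j) $$ (a,b)) * interp_out V D z s j $ b) has_real_derivative
        D (Suc j) $$ (a,b) * interp_out V D z t j $ b + (V (Suc j) $$ (a,b) + t * D (Suc j) $$ (a,b)) * interp_deriv V D z t j $ b) (at t)"
      using DERIV_mult[OF lin IH] by (simp add: algebra_simps)
  qed
  moreover have "(\<Sum>b<dims j. D (Suc j) $$ (a,b) * interp_out V D z t j $ b + (V (Suc j) $$ (a,b) + t * D (Suc j) $$ (a,b)) * interp_deriv V D z t j $ b)
      = interp_deriv V D z t (Suc j) $ a"
  proof -
    have "interp_deriv V D z t (Suc j) $ a = (D (Suc j) *\<^sub>v interp_out V D z t j) $ a + ((V (Suc j) + t \<cdot>\<^sub>m D (Suc j)) *\<^sub>v interp_deriv V D z t j) $ a"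
      using Suc.prems(2) Vj Dj by simp
    also have "(D (Suc j) *\<^sub>v interp_out V D z t j) $ a = (\<Sum>b<dims j. D (Suc j) $$ (a,b) * interp_out V D z t j $ b)"
      using index_mult_mat_vec_sum[OF Dj interp_out_carrier[OF z, of j t] Suc.prems(2)] j by simp
    also have "((V (Suc j) + t \<cdot>\<^sub>m D (Suc j)) *\<^sub>v interp_deriv V D z t j) $ a = (\<Sum>b<dims j. (V (Suc j) + t \<cdot>\<^sub>m D (Suc j)) $$ (a,b) * interp_deriv V D z t j $ b)"
      using index_mult_mat_vec_sum[OF perturbed_carrier_Suc[OF j] interp_deriv_carrier[OF z, of j t] Suc.prems(2)] j by simp
    also have "\<dots> = (\<Sum>b<dims j. (V (Suc j) $$ (a,b) + t * D (Suc j) $$ (a,b)) * interp_deriv V D z t j $ b)"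
      using Vj Dj Suc.prems(2) by (intro sum.cong refl) auto
    finally show ?thesis by (simp add: sum.distrib)
  qed
  ultimately show ?case unfolding eq by simp
qed

end

locale bounded_net_path = net_path +
  fixes R :: real and z :: "real vec"
  assumes R_ge_1: "R \<ge> 1"
    and Vb: "\<And>k. 1 \<le> k \<Longrightarrow> k \<le> L \<Longrightarrow> frob (V k) \<le> R - 1"
    and Db: "\<And>k. 1 \<le> k \<Longrightarrow> k \<le> L \<Longrightarrow> frob (D k) \<le> 1"
    and z_carrier: "z \<in> carrier_vec (dims 0)"
    and vnorm_z_le_1: "vnorm z \<le> 1"
begin

definition S :: "nat \<Rightarrow> real" where "S j = (\<Sum>k\<in>{1..j}. frob (D k))"

(* P j = R\<^sup>j\<^sup>-\<^sup>1 bounds the gain of j - 1 perturbed layers. *)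
definition P :: "nat \<Rightarrow> real" where "P j = R^j / R"

lemma S_Suc: "S (Suc j) = S j + frob (D (Suc j))" unfolding S_def by simp

lemma S_nonneg: "S j \<ge> 0" unfolding S_def by (auto intro!: sum_nonneg frob_nonneg)

lemma P_Suc: "P (Suc j) = R * P j" unfolding P_def by simp

lemma P_Suc_eq_pow: "P (Suc j) = R ^ j" unfolding P_def using R_ge_1 by simp

lemma P_nonneg: "P j \<ge> 0" unfolding P_def using R_ge_1 by simp

lemma P_mono: "P j \<le> P (Suc j)" unfolding P_Suc using P_nonneg[of j] R_ge_1 by (simp add: mult_le_cancel_right1)

lemma mult_plus_0_smult: assumes j: "j < L" and x: "x \<in> carrier_vec (dims j)"
  shows "(V (Suc j) + 0 \<cdot>\<^sub>m D (Suc j)) *\<^sub>v x = V (Suc j) *\<^sub>v x"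
proof -
  have V: "V (Suc j) \<in> carrier_mat (dims (Suc j)) (dims j)" using V_carrier_Suc[OF j] .
  have D: "D (Suc j) \<in> carrier_mat (dims (Suc j)) (dims j)" using D_carrier_Suc[OF j] .
  have "(V (Suc j) + 0 \<cdot>\<^sub>m D (Suc j)) *\<^sub>v x = V (Suc j) *\<^sub>v x + 0 \<cdot>\<^sub>v (D (Suc j) *\<^sub>v x)"
    by (rule mult_plus_smult_vec[OF V D x])
  also have "\<dots> = V (Suc j) *\<^sub>v x" using V D by (intro eq_vecI) auto
  finally show ?thesis .
qed

lemma vnorm_mult_perturbed_le: assumes j: "j < L" and t: "0 \<le> t" "t \<le> 1" and x: "x \<in> carrier_vec (dims j)"
  shows "vnorm ((V (Suc j) + t \<cdot>\<^sub>m D (Suc j)) *\<^sub>v x) \<le> R * vnorm x"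
proof -
  have V: "V (Suc j) \<in> carrier_mat (dims (Suc j)) (dims j)" using V_carrier_Suc[OF j] .
  have D: "D (Suc j) \<in> carrier_mat (dims (Suc j)) (dims j)" using D_carrier_Suc[OF j] .
  have "vnorm ((V (Suc j) + t \<cdot>\<^sub>m D (Suc j)) *\<^sub>v x) = vnorm (V (Suc j) *\<^sub>v x + t \<cdot>\<^sub>v (D (Suc j) *\<^sub>v x))"
    unfolding mult_plus_smult_vec[OF V D x] ..
  also have "\<dots> \<le> vnorm (V (Suc j) *\<^sub>v x) + vnorm (t \<cdot>\<^sub>v (D (Suc j) *\<^sub>v x))"
    using V D by (intro vnorm_add_le) simp
  also have "\<dots> = vnorm (V (Suc j) *\<^sub>v x) + t * vnorm (D (Suc j) *\<^sub>v x)" using t by (simp add: vnorm_smult)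
  also have "\<dots> \<le> frob (V (Suc j)) * vnorm x + t * (frob (D (Suc j)) * vnorm x)"
    using vnorm_mult_le_frob[OF V x] vnorm_mult_le_frob[OF D x] t by (intro add_mono mult_left_mono) auto
  also have "\<dots> \<le> (R - 1) * vnorm x + 1 * (1 * vnorm x)"
    using Vb[of "Suc j"] Db[of "Suc j"] j t vnorm_nonneg[of x] frob_nonneg[of "D (Suc j)"]
    by (intro add_mono mult_right_mono mult_mono) auto
  finally show ?thesis by (simp add: algebra_simps)
qed

lemma vnorm_interp_out_le: assumes t: "0 \<le> t" "t \<le> 1" shows "j \<le> L \<Longrightarrow> vnorm (interp_out V D z t j) \<le> R ^ j"
proof (induction j)
  case 0 thus ?case using vnorm_z_le_1 by simp
next
  case (Suc j)
  have "vnorm (interp_out V D z t (Suc j)) \<le> R * vnorm (interp_out V D z t j)"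
    using vnorm_mult_perturbed_le[OF _ t interp_out_carrier[OF z_carrier]] Suc.prems by simp
  also have "\<dots> \<le> R * R ^ j" using Suc R_ge_1 by (intro mult_left_mono) auto
  finally show ?case by simp
qed

lemma vnorm_interp_out_diff_le: assumes t: "0 \<le> t" "t \<le> 1" shows "j \<le> L \<Longrightarrow> vnorm (interp_out V D z t j - interp_out V D z 0 j) \<le> t * P j * S j"
proof (induction j)
  case 0 thus ?case using z_carrier by (simp add: S_def)
next
  case (Suc j)
  have j: "j < L" using Suc by simp
  have V: "V (Suc j) \<in> carrier_mat (dims (Suc j)) (dims j)" using V_carrier_Suc[OF j] .
  have D: "D (Suc j) \<in> carrier_mat (dims (Suc j)) (dims j)" using D_carrier_Suc[OF j] .
  have a: "interp_out V D z t j \<in> carrier_vec (dims j)" and b: "interp_out V D z 0 j \<in> carrier_vec (dims j)" using interp_out_carrier[OF z_carrier] j by auto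
  have "interp_out V D z t (Suc j) - interp_out V D z 0 (Suc j) = (V (Suc j) + t \<cdot>\<^sub>m D (Suc j)) *\<^sub>v interp_out V D z t j - V (Suc j) *\<^sub>v interp_out V D z 0 j"
    using mult_plus_0_smult[OF j b] by simp
  also have "\<dots> = (V (Suc j) + t \<cdot>\<^sub>m D (Suc j)) *\<^sub>v (interp_out V D z t j - interp_out V D z 0 j) + t \<cdot>\<^sub>v (D (Suc j) *\<^sub>v interp_out V D z 0 j)"
    by (rule mult_perturb_diff[OF V D a b])
  finally have eq: "interp_out V D z t (Suc j) - interp_out V D z 0 (Suc j) = \<dots>" .
  have "vnorm (interp_out V D z t (Suc j) - interp_out V D z 0 (Suc j)) \<le>
     vnorm ((V (Suc j) + t \<cdot>\<^sub>m D (Suc j)) *\<^sub>v (interp_out V D z t j - interp_out V D z 0 j)) + vnorm (t \<cdot>\<^sub>v (D (Suc j) *\<^sub>v interp_out V D z 0 j))"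
    unfolding eq using V D by (intro vnorm_add_le) simp
  also have "\<dots> \<le> R * (t * P j * S j) + t * (frob (D (Suc j)) * R ^ j)"
  proof (rule add_mono)
    show "vnorm ((V (Suc j) + t \<cdot>\<^sub>m D (Suc j)) *\<^sub>v (interp_out V D z t j - interp_out V D z 0 j)) \<le> R * (t * P j * S j)"
    proof -
      have IHj: "vnorm (interp_out V D z t j - interp_out V D z 0 j) \<le> t * P j * S j" using Suc.IH j by simp
      have "vnorm ((V (Suc j) + t \<cdot>\<^sub>m D (Suc j)) *\<^sub>v (interp_out V D z t j - interp_out V D z 0 j)) \<le> R * vnorm (interp_out V D z t j - interp_out V D z 0 j)"
        by (rule vnorm_mult_perturbed_le[OF j t]) (use a b in simp)
      from mult_left_bound_trans[OF this IHj] R_ge_1 show ?thesis by simp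
    qed
    have "vnorm (D (Suc j) *\<^sub>v interp_out V D z 0 j) \<le> frob (D (Suc j)) * vnorm (interp_out V D z 0 j)" by (rule vnorm_mult_le_frob[OF D b])
    also have "\<dots> \<le> frob (D (Suc j)) * R ^ j" using vnorm_interp_out_le[of 0 j] j frob_nonneg by (intro mult_left_mono) auto
    finally have "t * vnorm (D (Suc j) *\<^sub>v interp_out V D z 0 j) \<le> t * (frob (D (Suc j)) * R ^ j)"
      using t(1) by (rule mult_left_mono)
    thus "vnorm (t \<cdot>\<^sub>v (D (Suc j) *\<^sub>v interp_out V D z 0 j)) \<le> t * (frob (D (Suc j)) * R ^ j)"
      using t(1) by (simp add: vnorm_smult)
  qed
  also have "\<dots> = t * P (Suc j) * S (Suc j)" unfolding S_Suc P_Suc using P_Suc_eq_pow[of j] unfolding P_Suc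
    by (simp add: algebra_simps)
  finally show ?case .
qed

lemma vnorm_interp_deriv_le: assumes t: "0 \<le> t" "t \<le> 1" shows "j \<le> L \<Longrightarrow> vnorm (interp_deriv V D z t j) \<le> P j * S j"
proof (induction j)
  case 0 thus ?case by (simp add: S_def)
next
  case (Suc j)
  have j: "j < L" using Suc by simp
  have D: "D (Suc j) \<in> carrier_mat (dims (Suc j)) (dims j)" using D_carrier_Suc[OF j] .
  have M: "V (Suc j) + t \<cdot>\<^sub>m D (Suc j) \<in> carrier_mat (dims (Suc j)) (dims j)" using perturbed_carrier_Suc[OF j] .
  have a: "interp_out V D z t j \<in> carrier_vec (dims j)" and e: "interp_deriv V D z t j \<in> carrier_vec (dims j)"
    using interp_out_carrier[OF z_carrier] interp_deriv_carrier[OF z_carrier] j by auto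
  have "vnorm (interp_deriv V D z t (Suc j)) \<le> vnorm (D (Suc j) *\<^sub>v interp_out V D z t j) + vnorm ((V (Suc j) + t \<cdot>\<^sub>m D (Suc j)) *\<^sub>v interp_deriv V D z t j)"
    using D M by (simp add: vnorm_add_le)
  also have "\<dots> \<le> frob (D (Suc j)) * R ^ j + R * (P j * S j)"
  proof (rule add_mono)
    show "vnorm (D (Suc j) *\<^sub>v interp_out V D z t j) \<le> frob (D (Suc j)) * R ^ j"
      using vnorm_mult_le_frob[OF D a] vnorm_interp_out_le[OF t, of j] j frob_nonneg[of "D (Suc j)"]
      by (meson less_imp_le_nat mult_left_mono order_trans)
    show "vnorm ((V (Suc j) + t \<cdot>\<^sub>m D (Suc j)) *\<^sub>v interp_deriv V D z t j) \<le> R * (P j * S j)"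
    proof -
      have IHj: "vnorm (interp_deriv V D z t j) \<le> P j * S j" using Suc.IH j by simp
      from mult_left_bound_trans[OF vnorm_mult_perturbed_le[OF j t e] IHj] R_ge_1 show ?thesis by simp
    qed
  qed
  also have "\<dots> = P (Suc j) * S (Suc j)" unfolding S_Suc P_Suc using P_Suc_eq_pow[of j] unfolding P_Suc
    by (simp add: algebra_simps)
  finally show ?case .
qed

lemma vnorm_interp_deriv_diff_le: assumes t: "0 \<le> t" "t \<le> 1" shows "j \<le> L \<Longrightarrow> vnorm (interp_deriv V D z t j - interp_deriv V D z 0 j) \<le> 2 * t * P j * (S j)^2"
proof (induction j)
  case 0 thus ?case using z_carrier by (simp add: S_def)
next
  case (Suc j)
  have j: "j < L" using Suc by simp
  have V: "V (Suc j) \<in> carrier_mat (dims (Suc j)) (dims j)" using V_carrier_Suc[OF j] .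
  have D: "D (Suc j) \<in> carrier_mat (dims (Suc j)) (dims j)" using D_carrier_Suc[OF j] .
  have p: "interp_out V D z t j \<in> carrier_vec (dims j)" and p0: "interp_out V D z 0 j \<in> carrier_vec (dims j)"
    and e: "interp_deriv V D z t j \<in> carrier_vec (dims j)" and e0: "interp_deriv V D z 0 j \<in> carrier_vec (dims j)"
    using interp_out_carrier[OF z_carrier] interp_deriv_carrier[OF z_carrier] j by auto
  let ?M = "V (Suc j) + t \<cdot>\<^sub>m D (Suc j)"
  define \<delta> where "\<delta> = frob (D (Suc j))"
  have \<delta>: "0 \<le> \<delta>" "\<delta> \<le> 1" unfolding \<delta>_def using frob_nonneg Db[of "Suc j"] j by auto
  have "interp_deriv V D z t (Suc j) - interp_deriv V D z 0 (Suc j) = (D (Suc j) *\<^sub>v interp_out V D z t j + ?M *\<^sub>v interp_deriv V D z t j) - (D (Suc j) *\<^sub>v interp_out V D z 0 j + V (Suc j) *\<^sub>v interp_deriv V D z 0 j)"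
    using mult_plus_0_smult[OF j e0] by simp
  also have "\<dots> = D (Suc j) *\<^sub>v (interp_out V D z t j - interp_out V D z 0 j) + ?M *\<^sub>v (interp_deriv V D z t j - interp_deriv V D z 0 j) + t \<cdot>\<^sub>v (D (Suc j) *\<^sub>v interp_deriv V D z 0 j)"
    by (rule mult_perturb_diff2[OF V D p p0 e e0])
  finally have eq: "interp_deriv V D z t (Suc j) - interp_deriv V D z 0 (Suc j) = \<dots>" .
  have "vnorm (interp_deriv V D z t (Suc j) - interp_deriv V D z 0 (Suc j)) \<le>
      vnorm (D (Suc j) *\<^sub>v (interp_out V D z t j - interp_out V D z 0 j)) + vnorm (?M *\<^sub>v (interp_deriv V D z t j - interp_deriv V D z 0 j))
      + vnorm (t \<cdot>\<^sub>v (D (Suc j) *\<^sub>v interp_deriv V D z 0 j))"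
    unfolding eq using V D by (intro vnorm_add3_le) auto
  also have "\<dots> \<le> \<delta> * (t * P j * S j) + R * (2 * t * P j * (S j)^2) + t * (\<delta> * (P j * S j))"
  proof (intro add_mono)
    show "vnorm (D (Suc j) *\<^sub>v (interp_out V D z t j - interp_out V D z 0 j)) \<le> \<delta> * (t * P j * S j)"
    proof -
      have "vnorm (D (Suc j) *\<^sub>v (interp_out V D z t j - interp_out V D z 0 j)) \<le> \<delta> * vnorm (interp_out V D z t j - interp_out V D z 0 j)"
        unfolding \<delta>_def by (rule vnorm_mult_le_frob[OF D]) (use p p0 in simp)
      from mult_left_bound_trans[OF this vnorm_interp_out_diff_le[OF t, of j]] j \<delta> show ?thesis by simp
    qed
    show "vnorm (?M *\<^sub>v (interp_deriv V D z t j - interp_deriv V D z 0 j)) \<le> R * (2 * t * P j * (S j)^2)"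
    proof -
      have IHj: "vnorm (interp_deriv V D z t j - interp_deriv V D z 0 j) \<le> 2 * t * P j * (S j)^2" using Suc.IH j by simp
      have "vnorm (?M *\<^sub>v (interp_deriv V D z t j - interp_deriv V D z 0 j)) \<le> R * vnorm (interp_deriv V D z t j - interp_deriv V D z 0 j)"
        by (rule vnorm_mult_perturbed_le[OF j t]) (use e e0 in simp)
      from mult_left_bound_trans[OF this IHj] R_ge_1 show ?thesis by simp
    qed
    have "vnorm (D (Suc j) *\<^sub>v interp_deriv V D z 0 j) \<le> \<delta> * (P j * S j)"
    proof -
      have "vnorm (D (Suc j) *\<^sub>v interp_deriv V D z 0 j) \<le> \<delta> * vnorm (interp_deriv V D z 0 j)"
        unfolding \<delta>_def by (rule vnorm_mult_le_frob[OF D e0])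
      from mult_left_bound_trans[OF this vnorm_interp_deriv_le[of 0 j]] j \<delta> show ?thesis by simp
    qed
    hence "t * vnorm (D (Suc j) *\<^sub>v interp_deriv V D z 0 j) \<le> t * (\<delta> * (P j * S j))" using t(1) by (rule mult_left_mono)
    thus "vnorm (t \<cdot>\<^sub>v (D (Suc j) *\<^sub>v interp_deriv V D z 0 j)) \<le> t * (\<delta> * (P j * S j))"
      using t(1) by (simp add: vnorm_smult)
  qed
  also have "\<dots> = 2 * t * (P j * \<delta> * S j) + 2 * t * (R * P j) * (S j)^2" by (simp add: algebra_simps)
  also have "\<dots> \<le> 2 * t * (P (Suc j) * \<delta> * S j) + 2 * t * P (Suc j) * (S j)^2"
    using P_mono[of j] \<delta> S_nonneg[of j] t P_nonneg[of "Suc j"] unfolding P_Suc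
    by (intro add_mono mult_left_mono mult_right_mono) (auto simp: P_Suc[symmetric])
  also have "\<dots> \<le> 2 * t * P (Suc j) * (S (Suc j))^2"
  proof -
    have "\<delta> * S j + (S j)^2 \<le> (S j + \<delta>)^2" using \<delta> S_nonneg[of j] by (simp add: power2_eq_square algebra_simps)
    hence "2 * t * P (Suc j) * (\<delta> * S j + (S j)^2) \<le> 2 * t * P (Suc j) * (S j + \<delta>)^2"
      using t P_nonneg[of "Suc j"] by (intro mult_left_mono) auto
    thus ?thesis unfolding S_Suc \<delta>_def[symmetric] by (simp add: algebra_simps)
  qed
  finally show ?case .
qed

lemma P_eq_pow_pred: "L \<ge> 1 \<Longrightarrow> P L = R^(L-1)"
  unfolding P_def using R_ge_1 by (cases L) auto

lemma loss_deriv_path_diff_le: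
  assumes L1: "L \<ge> 1" and dL: "dims L = 1"
    and lip: "\<And>a b. \<bar>dl a - dl b\<bar> \<le> beta * \<bar>a - b\<bar>" and gb: "\<And>s. \<bar>dl s\<bar> \<le> G"
    and t: "0 \<le> t" "t \<le> 1"
  shows "\<bar>dl (interp_out V D z t L $ 0) * interp_deriv V D z t L $ 0
          - dl (interp_out V D z 0 L $ 0) * interp_deriv V D z 0 L $ 0\<bar>
       \<le> 2 * (beta + G) * R^(2*L-2) * (S L)^2 * t"
proof -
  define p where "p s = interp_out V D z s L $ 0" for s
  define q where "q s = interp_deriv V D z s L $ 0" for s
  have beta0: "beta \<ge> 0" using lip[of 1 0] by simp
  have G0: "G \<ge> 0" using gb[of 0] by simp
  have S0: "S L \<ge> 0" by (rule S_nonneg)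
  have P0: "P L \<ge> 0" by (rule P_nonneg)
  have P2: "(P L)^2 = R^(2*L-2)" unfolding P_eq_pow_pred[OF L1]
    by (simp add: power_mult[symmetric] mult.commute right_diff_distrib')
  have P1: "P L \<le> R^(2*L-2)" unfolding P_eq_pow_pred[OF L1] using R_ge_1 L1 by (intro power_increasing) auto
  have c: "interp_out V D z s L \<in> carrier_vec 1" "interp_deriv V D z s L \<in> carrier_vec 1" for s
    using interp_out_carrier[OF z_carrier, of L s] interp_deriv_carrier[OF z_carrier, of L s] dL by auto
  have dp: "\<bar>p t - p 0\<bar> \<le> t * P L * S L"
  proof -
    have "\<bar>p t - p 0\<bar> = \<bar>(interp_out V D z t L - interp_out V D z 0 L) $ 0\<bar>" unfolding p_def using c[of t] c[of 0] by simp
    also have "\<dots> \<le> vnorm (interp_out V D z t L - interp_out V D z 0 L)" using c[of t] c[of 0] by (intro vnorm_component) simp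
    also have "\<dots> \<le> t * P L * S L" by (rule vnorm_interp_out_diff_le[OF t]) simp
    finally show ?thesis .
  qed
  have dq: "\<bar>q t\<bar> \<le> P L * S L"
  proof -
    have "\<bar>q t\<bar> \<le> vnorm (interp_deriv V D z t L)" unfolding q_def using c[of t] c[of 0] by (intro vnorm_component) simp
    also have "\<dots> \<le> P L * S L" by (rule vnorm_interp_deriv_le[OF t]) simp
    finally show ?thesis .
  qed
  have dqq: "\<bar>q t - q 0\<bar> \<le> 2 * t * P L * (S L)^2"
  proof -
    have "\<bar>q t - q 0\<bar> = \<bar>(interp_deriv V D z t L - interp_deriv V D z 0 L) $ 0\<bar>" unfolding q_def using c[of t] c[of 0] by simp
    also have "\<dots> \<le> vnorm (interp_deriv V D z t L - interp_deriv V D z 0 L)" using c[of t] c[of 0] by (intro vnorm_component) simp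
    also have "\<dots> \<le> 2 * t * P L * (S L)^2" by (rule vnorm_interp_deriv_diff_le[OF t]) simp
    finally show ?thesis .
  qed
  have "\<bar>dl (p t) * q t - dl (p 0) * q 0\<bar> = \<bar>(dl (p t) - dl (p 0)) * q t + dl (p 0) * (q t - q 0)\<bar>"
    by (simp add: algebra_simps)
  also have "\<dots> \<le> \<bar>dl (p t) - dl (p 0)\<bar> * \<bar>q t\<bar> + \<bar>dl (p 0)\<bar> * \<bar>q t - q 0\<bar>"
    by (metis abs_mult abs_triangle_ineq)
  also have "\<dots> \<le> (beta * (t * P L * S L)) * (P L * S L) + G * (2 * t * P L * (S L)^2)"
  proof (rule add_mono)
    have "\<bar>dl (p t) - dl (p 0)\<bar> \<le> beta * (t * P L * S L)"
      using lip[of "p t" "p 0"] dp beta0 by (meson mult_left_mono order_trans)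
    thus "\<bar>dl (p t) - dl (p 0)\<bar> * \<bar>q t\<bar> \<le> (beta * (t * P L * S L)) * (P L * S L)"
      using dq by (intro mult_mono) auto
    show "\<bar>dl (p 0)\<bar> * \<bar>q t - q 0\<bar> \<le> G * (2 * t * P L * (S L)^2)"
      using gb dqq G0 by (intro mult_mono) auto
  qed
  also have "\<dots> = t * (S L)^2 * (beta * (P L)^2 + 2 * G * P L)" by (simp add: power2_eq_square algebra_simps)
  also have "\<dots> \<le> t * (S L)^2 * (beta * R^(2*L-2) + 2 * G * R^(2*L-2))"
    unfolding P2 using P1 t G0 beta0 by (intro mult_left_mono add_mono) auto
  also have "\<dots> \<le> 2 * (beta + G) * R^(2*L-2) * (S L)^2 * t"
    using t G0 beta0 R_ge_1 by (simp add: algebra_simps mult_left_mono)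
  finally show ?thesis unfolding p_def q_def .
qed

end

context net_path begin

lemma interp_out_0: "z \<in> carrier_vec (dims 0) \<Longrightarrow> j \<le> L \<Longrightarrow> interp_out V D z 0 j = layer_out V z j"
proof (induction j)
  case (Suc j)
  have j: "j < L" using Suc by simp
  have V: "V (Suc j) \<in> carrier_mat (dims (Suc j)) (dims j)" using V_carrier_Suc[OF j] .
  have D: "D (Suc j) \<in> carrier_mat (dims (Suc j)) (dims j)" using D_carrier_Suc[OF j] .
  have x: "interp_out V D z 0 j \<in> carrier_vec (dims j)" by (rule interp_out_carrier[OF Suc.prems(1)]) (use Suc.prems in simp)
  have "(V (Suc j) + 0 \<cdot>\<^sub>m D (Suc j)) *\<^sub>v interp_out V D z 0 j = V (Suc j) *\<^sub>v interp_out V D z 0 j + 0 \<cdot>\<^sub>v (D (Suc j) *\<^sub>v interp_out V D z 0 j)"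
    by (rule mult_plus_smult_vec[OF V D x])
  also have "\<dots> = V (Suc j) *\<^sub>v interp_out V D z 0 j" using V D by (intro eq_vecI) auto
  finally show ?case using Suc j by simp
qed simp

lemma interp_out_1: assumes V': "\<And>k. 1 \<le> k \<Longrightarrow> k \<le> L \<Longrightarrow> V' k = V k + D k"
  shows "z \<in> carrier_vec (dims 0) \<Longrightarrow> j \<le> L \<Longrightarrow> interp_out V D z 1 j = layer_out V' z j"
proof (induction j)
  case (Suc j)
  have j: "j < L" using Suc by simp
  have V: "V (Suc j) \<in> carrier_mat (dims (Suc j)) (dims j)" using V_carrier_Suc[OF j] .
  have D: "D (Suc j) \<in> carrier_mat (dims (Suc j)) (dims j)" using D_carrier_Suc[OF j] .
  have "V (Suc j) + 1 \<cdot>\<^sub>m D (Suc j) = V' (Suc j)" using V' j V D by (intro eq_matI) auto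
  thus ?case using Suc j by simp
qed simp

lemma backprop_inner_interp_deriv_0: assumes nd: "net_dims dims L V" and dL: "dims L = 1" and z: "z \<in> carrier_vec (dims 0)"
  shows "j \<le> L \<Longrightarrow> backprop L V j \<bullet> interp_deriv V D z 0 j = (\<Sum>k\<in>{1..j}. backprop L V k \<bullet> (D k *\<^sub>v layer_out V z (k-1)))"
proof (induction j)
  case 0 thus ?case using z backprop_carrier[OF nd dL, of 0] by simp
next
  case (Suc j)
  have j: "j < L" using Suc by simp
  have V: "V (Suc j) \<in> carrier_mat (dims (Suc j)) (dims j)" using V_carrier_Suc[OF j] .
  have D: "D (Suc j) \<in> carrier_mat (dims (Suc j)) (dims j)" using D_carrier_Suc[OF j] .
  have e: "interp_deriv V D z 0 j \<in> carrier_vec (dims j)" using interp_deriv_carrier[OF z] j by simp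
  have p: "interp_out V D z 0 j \<in> carrier_vec (dims j)" using interp_out_carrier[OF z] j by simp
  have r: "backprop L V (Suc j) \<in> carrier_vec (dims (Suc j))" using backprop_carrier[OF nd dL] j by simp
  have "(V (Suc j) + 0 \<cdot>\<^sub>m D (Suc j)) *\<^sub>v interp_deriv V D z 0 j = V (Suc j) *\<^sub>v interp_deriv V D z 0 j + 0 \<cdot>\<^sub>v (D (Suc j) *\<^sub>v interp_deriv V D z 0 j)"
    by (rule mult_plus_smult_vec[OF V D e])
  also have "\<dots> = V (Suc j) *\<^sub>v interp_deriv V D z 0 j" using V D by (intro eq_vecI) auto
  finally have M: "(V (Suc j) + 0 \<cdot>\<^sub>m D (Suc j)) *\<^sub>v interp_deriv V D z 0 j = V (Suc j) *\<^sub>v interp_deriv V D z 0 j" .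
  have "backprop L V (Suc j) \<bullet> interp_deriv V D z 0 (Suc j) = backprop L V (Suc j) \<bullet> (D (Suc j) *\<^sub>v layer_out V z j) + backprop L V (Suc j) \<bullet> (V (Suc j) *\<^sub>v interp_deriv V D z 0 j)"
    using M interp_out_0[OF z, of j] j r V D e p by (simp add: scalar_prod_add_distrib[of _ "dims (Suc j)"])
  also have "backprop L V (Suc j) \<bullet> (V (Suc j) *\<^sub>v interp_deriv V D z 0 j) = backprop L V j \<bullet> interp_deriv V D z 0 j"
  proof -
    have "backprop L V j = transpose_mat (V (Suc j)) *\<^sub>v backprop L V (Suc j)" using backprop_step[of "Suc j" L V] j by simp
    thus ?thesis using transpose_vec_mult_scalar[OF V e r] by simp
  qed
  also have "\<dots> = (\<Sum>k\<in>{1..j}. backprop L V k \<bullet> (D k *\<^sub>v layer_out V z (k-1)))" using Suc j by simp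
  finally show ?case by simp
qed


lemma interp_deriv_0_output:
  assumes nd: "net_dims dims L V" and dL: "dims L = 1" and z: "z \<in> carrier_vec (dims 0)"
  shows "interp_deriv V D z 0 L $ 0 = (\<Sum>k\<in>{1..L}. backprop L V k \<bullet> (D k *\<^sub>v layer_out V z (k-1)))"
proof -
  have c: "interp_deriv V D z 0 L \<in> carrier_vec 1" using interp_deriv_carrier[OF z, of L] dL by auto
  have "interp_deriv V D z 0 L $ 0 = backprop L V L \<bullet> interp_deriv V D z 0 L"
    unfolding backprop_last using c by (simp add: scalar_prod_def)
  also have "\<dots> = (\<Sum>k\<in>{1..L}. backprop L V k \<bullet> (D k *\<^sub>v layer_out V z (k-1)))"
    by (rule backprop_inner_interp_deriv_0[OF nd dL z]) simp
  finally show ?thesis .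
qed

lemma avg_loss_interp_has_derivative:
  assumes ld: "\<And>s. (l has_real_derivative dl s) (at s)" and dL: "dims L = 1"
    and z: "\<And>i. i < n \<Longrightarrow> z i \<in> carrier_vec (dims 0)"
  shows "((\<lambda>t. (1/real n) * (\<Sum>i<n. l (interp_out V D (z i) t L $ 0))) has_real_derivative
          (1/real n) * (\<Sum>i<n. dl (interp_out V D (z i) t L $ 0) * interp_deriv V D (z i) t L $ 0)) (at t)"
proof (intro DERIV_cmult DERIV_sum)
  fix i assume "i \<in> {..<n}"
  hence "((\<lambda>t. interp_out V D (z i) t L $ 0) has_real_derivative interp_deriv V D (z i) t L $ 0) (at t)"
    using interp_out_has_derivative[OF z, of i L 0 t] dL by simp
  thus "((\<lambda>t. l (interp_out V D (z i) t L $ 0)) has_real_derivative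
      dl (interp_out V D (z i) t L $ 0) * interp_deriv V D (z i) t L $ 0) (at t)"
    by (rule DERIV_chain2[OF ld])
qed

end

lemma bounded_net_path_intro: "net_path dims L V D \<Longrightarrow> R \<ge> 1 \<Longrightarrow> (\<And>k. 1 \<le> k \<Longrightarrow> k \<le> L \<Longrightarrow> frob (V k) \<le> R - 1)
  \<Longrightarrow> (\<And>k. 1 \<le> k \<Longrightarrow> k \<le> L \<Longrightarrow> frob (D k) \<le> 1) \<Longrightarrow> z \<in> carrier_vec (dims 0) \<Longrightarrow> vnorm z \<le> 1
  \<Longrightarrow> bounded_net_path dims L V D R z"
  unfolding bounded_net_path_def bounded_net_path_axioms_def by auto

lemma risk_taylor_upper_bound:
  fixes dims :: "nat \<Rightarrow> nat" and L d n :: nat and z :: "nat \<Rightarrow> real vec" and V V' D :: "nat \<Rightarrow> real mat"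
    and R beta G :: real and l dl :: "real \<Rightarrow> real"
  assumes L1: "L \<ge> 1" and nd: "net_dims dims L V" and d: "dims 0 = d" and dL: "dims L = 1"
    and z: "\<And>i. i < n \<Longrightarrow> z i \<in> carrier_vec d" and zb: "\<And>i. i < n \<Longrightarrow> vnorm (z i) \<le> 1"
    and n: "n \<ge> 1"
    and D_carrier: "\<And>k. 1 \<le> k \<Longrightarrow> k \<le> L \<Longrightarrow> D k \<in> carrier_mat (dims k) (dims (k-1))"
    and Db: "\<And>k. 1 \<le> k \<Longrightarrow> k \<le> L \<Longrightarrow> frob (D k) \<le> 1"
    and R: "R \<ge> 1" and Vb: "\<And>k. 1 \<le> k \<Longrightarrow> k \<le> L \<Longrightarrow> frob (V k) \<le> R - 1"
    and V': "\<And>k. 1 \<le> k \<Longrightarrow> k \<le> L \<Longrightarrow> V' k = V k + D k"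
    and ld: "\<And>s. (l has_real_derivative dl s) (at s)"
    and lip: "\<And>a b. \<bar>dl a - dl b\<bar> \<le> beta * \<bar>a - b\<bar>" and gb: "\<And>s. \<bar>dl s\<bar> \<le> G"
  shows "risk l n z d L V' \<le> risk l n z d L V + (\<Sum>k\<in>{1..L}. frob_inner (D k) (net_grad dl n z d dims L V k))
      + (beta + G) * R^(2*L-2) * (\<Sum>k\<in>{1..L}. frob (D k))^2"
proof -
  have pa: "net_path dims L V D" using net_dimsD[OF nd] D_carrier by unfold_locales auto
  have net_V: "net dims L d n z V" using nd d dL z by unfold_locales auto
  have nd': "net_dims dims L V'" unfolding net_dims_def using V' net_dimsD[OF nd] D_carrier by auto
  have zi: "\<And>i. i < n \<Longrightarrow> z i \<in> carrier_vec (dims 0)" using z d by simp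
  have pb: "\<And>i. i < n \<Longrightarrow> bounded_net_path dims L V D R (z i)"
    using bounded_net_path_intro[OF pa R Vb Db zi zb] by simp
  define p where "p i t = interp_out V D (z i) t L $ 0" for i t
  define q where "q i t = interp_deriv V D (z i) t L $ 0" for i t
  define g where "g t = (1/real n) * (\<Sum>i<n. l (p i t))" for t
  define g' where "g' t = (1/real n) * (\<Sum>i<n. dl (p i t) * q i t)" for t
  define \<kappa> where "\<kappa> = 2 * (beta + G) * R^(2*L-2) * (\<Sum>k\<in>{1..L}. frob (D k))^2"
  have p0: "p i 0 = wprod d L V \<bullet> z i" if i: "i < n" for i
    unfolding p_def using net_path.interp_out_0[OF pa zi[OF i], of L] wprod_inner_eq_output[OF nd d dL z[OF i]] by simp
  have g_deriv: "(g has_real_derivative g' t) (at t)" for t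
    unfolding g_def g'_def p_def q_def by (rule net_path.avg_loss_interp_has_derivative[OF pa ld dL zi])
  have g'_lipschitz: "\<bar>g' t - g' 0\<bar> \<le> \<kappa> * t" if t: "0 \<le> t" "t \<le> 1" for t
  proof -
    have "\<bar>g' t - g' 0\<bar> = (1/real n) * \<bar>\<Sum>i<n. dl (p i t) * q i t - dl (p i 0) * q i 0\<bar>"
    proof -
      have "g' t - g' 0 = (1/real n) * (\<Sum>i<n. dl (p i t) * q i t - dl (p i 0) * q i 0)"
        unfolding g'_def by (simp add: sum_subtractf right_diff_distrib)
      thus ?thesis by (simp add: abs_mult)
    qed
    also have "\<dots> \<le> (1/real n) * (\<Sum>i<n. \<kappa> * t)"
      using bounded_net_path.loss_deriv_path_diff_le[OF pb L1 dL lip gb t] unfolding p_def q_def \<kappa>_def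
      by (intro mult_left_mono order_trans[OF sum_abs sum_mono]) (auto simp: bounded_net_path.S_def[OF pb])
    also have "\<dots> = \<kappa> * t" using n by simp
    finally show ?thesis .
  qed
  have g1: "g 1 = risk l n z d L V'"
  proof -
    have "p i 1 = wprod d L V' \<bullet> z i" if i: "i < n" for i
      unfolding p_def using net_path.interp_out_1[OF pa V' zi[OF i], of L] wprod_inner_eq_output[OF nd' d dL z[OF i]] by simp
    thus ?thesis unfolding g_def risk_def by simp
  qed
  have g0: "g 0 = risk l n z d L V" unfolding g_def risk_def using p0 by simp
  have g'0: "g' 0 = (\<Sum>k\<in>{1..L}. frob_inner (D k) (net_grad dl n z d dims L V k))"
  proof -
    have "q i 0 = (\<Sum>k\<in>{1..L}. backprop L V k \<bullet> (D k *\<^sub>v layer_out V (z i) (k-1)))" if i: "i < n" for i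
      unfolding q_def by (rule net_path.interp_deriv_0_output[OF pa nd dL zi[OF i]])
    hence "g' 0 = (1/real n) * (\<Sum>i<n. dl (wprod d L V \<bullet> z i) * (\<Sum>k\<in>{1..L}. backprop L V k \<bullet> (D k *\<^sub>v layer_out V (z i) (k-1))))"
      unfolding g'_def using p0 by simp
    also have "\<dots> = (\<Sum>k\<in>{1..L}. frob_inner (D k) (net_grad dl n z d dims L V k))"
      by (rule net.sum_frob_inner_net_grad[symmetric, OF net_V D_carrier])
    finally show ?thesis .
  qed
  have "risk l n z d L V' = g 1" using g1 by simp
  also have "\<dots> \<le> g 0 + g' 0 + \<kappa> / 2" by (rule taylor_upper_bound_unit_interval[OF g_deriv g'_lipschitz])
  finally show ?thesis unfolding g0 g'0 \<kappa>_def by (simp add: field_simps)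
qed

lemma sq_norm_layer_out_le: assumes nd: "net_dims dims L V" and d: "dims 0 = d" and z: "z \<in> carrier_vec d"
  and B: "0 \<le> B" "\<And>k. 1 \<le> k \<Longrightarrow> k \<le> L \<Longrightarrow> frob (V k) \<le> B"
  shows "j \<le> L \<Longrightarrow> sq_norm (layer_out V z j) \<le> B^(2*j) * sq_norm z"
proof (induction j)
  case (Suc j)
  have V: "V (Suc j) \<in> carrier_mat (dims (Suc j)) (dims j)" using net_dimsD[OF nd, of "Suc j"] Suc by simp
  have q: "layer_out V z j \<in> carrier_vec (dims j)" using layer_out_carrier[OF nd, of z j] z d Suc by simp
  have "sq_norm (layer_out V z (Suc j)) \<le> frob (V (Suc j))^2 * sq_norm (layer_out V z j)" using sq_norm_mult_le_frob[OF V q] by simp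
  also have "\<dots> \<le> B^2 * (B^(2*j) * sq_norm z)"
    using Suc B frob_nonneg[of "V (Suc j)"] sq_norm_nonneg[of "layer_out V z j"]
    by (intro mult_mono power_mono) auto
  also have "B^2 * (B^(2*j) * sq_norm z) = B^(2 * Suc j) * sq_norm z" by (simp add: power_add mult.assoc power2_eq_square)
  finally show ?case .
qed simp

lemma sq_norm_backprop_rev_le: assumes nd: "net_dims dims L V" and dL: "dims L = 1"
  and B: "0 \<le> B" "\<And>k. 1 \<le> k \<Longrightarrow> k \<le> L \<Longrightarrow> frob (V k) \<le> B"
  shows "j \<le> L \<Longrightarrow> sq_norm (backprop_rev L V j) \<le> B^(2*j)"
proof (induction j)
  case 0 thus ?case by (simp add: scalar_prod_def)
next
  case (Suc j)
  have V: "V (L - j) \<in> carrier_mat (dims (L - j)) (dims (L - j - 1))" using net_dimsD[OF nd, of "L - j"] Suc by simp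
  have r: "backprop_rev L V j \<in> carrier_vec (dims (L - j))" using backprop_rev_carrier[OF nd dL, of j] Suc by simp
  have "sq_norm (backprop_rev L V (Suc j)) \<le> frob (V (L - j))^2 * sq_norm (backprop_rev L V j)" using sq_norm_transpose_mult_le_frob[OF V r] by simp
  also have "\<dots> \<le> B^2 * B^(2*j)"
    using Suc B frob_nonneg[of "V (L - j)"] sq_norm_nonneg[of "backprop_rev L V j"]
    by (intro mult_mono power_mono) auto
  finally show ?case by (simp add: power_add flip: power_add)
qed

lemma sq_norm_backprop_le: assumes nd: "net_dims dims L V" and dL: "dims L = 1"
  and B: "0 \<le> B" "\<And>k. 1 \<le> k \<Longrightarrow> k \<le> L \<Longrightarrow> frob (V k) \<le> B" and k: "k \<le> L"
  shows "sq_norm (backprop L V k) \<le> B^(2*(L-k))"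
  unfolding backprop_def using sq_norm_backprop_rev_le[OF nd dL B, of "L - k"] by simp

section \<open>Gradient descent\<close>

locale gradient_descent =
  fixes n d L :: nat
    and x :: "nat \<Rightarrow> real vec" and y :: "nat \<Rightarrow> real"
    and l dl :: "real \<Rightarrow> real" and beta G :: real
    and dims :: "nat \<Rightarrow> nat"
    and W :: "nat \<Rightarrow> nat \<Rightarrow> real mat"
    and eta Rr :: "nat \<Rightarrow> real"
  assumes n_pos: "n \<ge> 1"
    and x_dim: "\<And>i. i < n \<Longrightarrow> x i \<in> carrier_vec d"
    and x_norm: "\<And>i. i < n \<Longrightarrow> vnorm (x i) \<le> 1"
    and y_pm: "\<And>i. i < n \<Longrightarrow> y i = 1 \<or> y i = -1"
    and L_ge: "L \<ge> 2"
    and dims_pos: "\<And>k. k \<le> L \<Longrightarrow> dims k > 0"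
    and dims_0: "dims 0 = d" and dims_L: "dims L = 1"
    and W0_dim: "\<And>k. 1 \<le> k \<Longrightarrow> k \<le> L \<Longrightarrow> W 0 k \<in> carrier_mat (dims k) (dims (k - 1))"
    and l_deriv: "\<And>s. (l has_real_derivative dl s) (at s)"
    and dl_neg: "\<And>s. dl s < 0"
    and l_top: "(l \<longlongrightarrow> 0) at_top"
    and dl_lip: "\<And>a b. \<bar>dl a - dl b\<bar> \<le> beta * \<bar>a - b\<bar>"
    and dl_bdd: "\<And>s. \<bar>dl s\<bar> \<le> G"
    and GD: "\<And>t k. 1 \<le> k \<Longrightarrow> k \<le> L \<Longrightarrow>
      W (Suc t) k = W t k - eta t \<cdot>\<^sub>m grad_k l n (\<lambda>i. y i \<cdot>\<^sub>v x i) d L (W t) k"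
    and eta_def: "\<And>t. eta t = min (1 / betaR L beta G (Rr t)) 1"
    and Rr_ball: "\<And>t k. 1 \<le> k \<Longrightarrow> k \<le> L \<Longrightarrow> frob (W t k) \<le> Rr t - 1"
begin

definition z :: "nat \<Rightarrow> real vec" where "z i = y i \<cdot>\<^sub>v x i"

definition grad :: "nat \<Rightarrow> nat \<Rightarrow> real mat" where "grad t k = net_grad dl n z d dims L (W t) k"

definition grad_sq_norm :: "nat \<Rightarrow> real" where "grad_sq_norm t = (\<Sum>k\<in>{1..L}. frob (grad t k)^2)"

definition step_sq_sum :: "nat \<Rightarrow> nat \<Rightarrow> real" where "step_sq_sum t k = (\<Sum>s<t. (eta s)^2 * frob (grad s k)^2)"

definition total_step_sq :: "nat \<Rightarrow> real" where "total_step_sq t = (\<Sum>s<t. (eta s)^2 * grad_sq_norm s)"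

definition risk0 :: real where "risk0 = risk l n z d L (W 0)"

lemma z_eq: "(\<lambda>i. y i \<cdot>\<^sub>v x i) = z" unfolding z_def by auto

lemma z_carrier: "i < n \<Longrightarrow> z i \<in> carrier_vec d" unfolding z_def using x_dim by simp

lemma vnorm_z_le_1: "i < n \<Longrightarrow> vnorm (z i) \<le> 1"
proof -
  assume i: "i < n"
  have "(y i)^2 = 1" using y_pm[OF i] by auto
  hence "vnorm (z i) = vnorm (x i)" unfolding z_def vnorm_def sq_norm_smult by simp
  thus ?thesis using x_norm[OF i] by simp
qed

lemma W_net_dims: "net_dims dims L (W t)"
proof (induction t)
  case 0 thus ?case unfolding net_dims_def using W0_dim by auto
next
  case (Suc t)
  show ?case unfolding net_dims_def
  proof (intro allI impI)
    fix k assume k: "1 \<le> k \<and> k \<le> L"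
    have "W t k \<in> carrier_mat (dims k) (dims (k-1))" using net_dimsD[OF Suc] k by simp
    moreover have "grad_k l n (\<lambda>i. y i \<cdot>\<^sub>v x i) d L (W t) k \<in> carrier_mat (dims k) (dims (k-1))"
      unfolding grad_k_def using calculation by simp
    hence "eta t \<cdot>\<^sub>m grad_k l n (\<lambda>i. y i \<cdot>\<^sub>v x i) d L (W t) k \<in> carrier_mat (dims k) (dims (k-1))" by simp
    from minus_carrier_mat[OF this] show "W (Suc t) k \<in> carrier_mat (dims k) (dims (k-1))" using GD[of k t] k by simp
  qed
qed

lemma W_carrier: "1 \<le> k \<Longrightarrow> k \<le> L \<Longrightarrow> W t k \<in> carrier_mat (dims k) (dims (k-1))"
  using net_dimsD[OF W_net_dims] by simp

lemma net_W: "net dims L d n z (W t)"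
  using W_net_dims dims_0 dims_L z_carrier by unfold_locales auto

lemma grad_carrier: "grad t k \<in> carrier_mat (dims k) (dims (k-1))" unfolding grad_def by (rule net_grad_carrier)

lemma W_Suc: "1 \<le> k \<Longrightarrow> k \<le> L \<Longrightarrow> W (Suc t) k = W t k - eta t \<cdot>\<^sub>m grad t k"
proof -
  assume k: "1 \<le> k" "k \<le> L"
  have "grad_k l n z d L (W t) k = net_grad dl n z d dims L (W t) k"
    by (rule grad_k_eq_net_grad[OF W_net_dims dims_0 dims_L]) (use z_carrier k l_deriv in auto)
  thus ?thesis using GD[OF k, of t] unfolding z_eq grad_def by simp
qed

lemma G_pos: "G > 0" using dl_bdd[of 0] dl_neg[of 0] by simp

lemma beta_nonneg: "beta \<ge> 0" using dl_lip[of 1 0] by simp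

lemma Rr_ge_1: "Rr t \<ge> 1" using Rr_ball[of 1 t] frob_nonneg[of "W t 1"] L_ge by simp

lemma betaR_pos: "betaR L beta G (Rr t) > 0"
  unfolding betaR_def using L_ge Rr_ge_1[of t] G_pos beta_nonneg by (intro mult_pos_pos) auto

lemma eta_pos: "eta t > 0" unfolding eta_def using betaR_pos[of t] by simp

lemma eta_le1: "eta t \<le> 1" unfolding eta_def by simp

lemma eta_betaR_le_1: "eta t * betaR L beta G (Rr t) \<le> 1"
proof -
  have "eta t \<le> 1 / betaR L beta G (Rr t)" unfolding eta_def by simp
  thus ?thesis using betaR_pos[of t] by (simp add: field_simps)
qed

lemma loss_pos: "l s > 0"
proof -
  have dec: "l b < l a" if "a < b" for a b
  proof -
    obtain c where "a < c" "c < b" "l b - l a = (b - a) * dl c"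
      using MVT2[OF \<open>a < b\<close>, of l dl] l_deriv by (auto simp: DERIV_def has_field_derivative_def)
    thus ?thesis using dl_neg[of c] \<open>a < b\<close> mult_pos_neg[of "b - a" "dl c"] by linarith
  qed
  have "eventually (\<lambda>t. l t \<le> l (s + 1)) at_top"
    unfolding eventually_at_top_linorder by (intro exI[of _ "s + 1"]) (auto intro: less_imp_le dec simp: le_less)
  hence "0 \<le> l (s + 1)" using tendsto_upperbound[OF l_top] by auto
  thus ?thesis using dec[of s "s + 1"] by simp
qed

lemma risk_nonneg: "risk l n z d L V \<ge> 0"
  unfolding risk_def by (intro mult_nonneg_nonneg sum_nonneg) (auto intro: less_imp_le loss_pos)

lemma sq_norm_z_le_1: "i < n \<Longrightarrow> sq_norm (z i) \<le> 1"
  using vnorm_z_le_1[of i] vnorm_sq[of "z i"] vnorm_nonneg[of "z i"] by (metis power_le_one)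

lemma frob_grad_le: assumes k: "1 \<le> k" "k \<le> L" shows "frob (grad t k) \<le> G * (Rr t)^(L-1)"
proof -
  define B where "B = Rr t - 1"
  have B0: "B \<ge> 0" unfolding B_def using Rr_ge_1[of t] by simp
  have Bb: "\<And>k. 1 \<le> k \<Longrightarrow> k \<le> L \<Longrightarrow> frob (W t k) \<le> B" unfolding B_def using Rr_ball by simp
  have Mb: "sq_norm (layer_out (W t) (z i) (k-1)) \<le> B^(2*(k-1))" if i: "i < n" for i
  proof -
    have "sq_norm (layer_out (W t) (z i) (k-1)) \<le> B^(2*(k-1)) * sq_norm (z i)"
      using sq_norm_layer_out_le[OF W_net_dims dims_0 z_carrier[OF i] B0 Bb, of "k-1"] k by simp
    also have "\<dots> \<le> B^(2*(k-1)) * 1" using sq_norm_z_le_1[OF i] B0 by (intro mult_left_mono) auto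
    finally show ?thesis by simp
  qed
  have "frob (grad t k)^2 \<le> G^2 * sq_norm (backprop L (W t) k) * B^(2*(k-1))"
    unfolding grad_def by (rule net.frob_net_grad_sq_le[OF net_W k n_pos dl_bdd Mb])
  also have "\<dots> \<le> G^2 * B^(2*(L-k)) * B^(2*(k-1))"
  proof -
    have "sq_norm (backprop L (W t) k) \<le> B^(2*(L-k))" by (rule sq_norm_backprop_le[OF W_net_dims dims_L B0 Bb k(2)])
    from mult_left_mono[OF this, of "G^2"] have "G^2 * sq_norm (backprop L (W t) k) \<le> G^2 * B^(2*(L-k))" by simp
    from mult_right_mono[OF this, of "B^(2*(k-1))"] show ?thesis using B0 by simp
  qed
  also have "\<dots> = G^2 * B^(2*(L-k) + 2*(k-1))" by (simp add: power_add mult.assoc)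
  also have "2*(L-k) + 2*(k-1) = 2*(L-1)" using k by simp
  also have "G^2 * B^(2*(L-1)) = (G * B^(L-1))^2"
    by (simp add: power_mult_distrib power_mult[symmetric] mult.commute)
  finally have "frob (grad t k) \<le> G * B^(L-1)"
    by (rule power2_le_imp_le) (use G_pos B0 in simp)
  also have "\<dots> \<le> G * (Rr t)^(L-1)"
  proof -
    have "B^(L-1) \<le> (Rr t)^(L-1)" by (rule power_mono) (use B0 in \<open>auto simp: B_def\<close>)
    from mult_left_mono[OF this, of G] G_pos show ?thesis by simp
  qed
  finally show ?thesis .
qed

lemma G_pow_le_betaR: "G * (Rr t)^(L-1) \<le> betaR L beta G (Rr t)"
proof -
  have R: "Rr t \<ge> 1" by (rule Rr_ge_1)
  have p: "(Rr t)^(L-1) \<le> (Rr t)^(2*L-2)" by (rule power_increasing) (use R L_ge in auto)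
  have "G * (Rr t)^(L-1) \<le> (beta + G) * (Rr t)^(2*L-2)"
    by (rule mult_mono) (use G_pos beta_nonneg R p in auto)
  also have "\<dots> \<le> (2 * real L ^ 2) * ((beta + G) * (Rr t)^(2*L-2))"
  proof -
    have L2: "real L \<ge> 2" using L_ge by simp
    have "real L * real L \<ge> 2 * 2" using L2 by (intro mult_mono) auto
    hence c1: "(1::real) \<le> 2 * real L ^ 2" by (simp add: power2_eq_square)
    have X0: "0 \<le> (beta + G) * (Rr t)^(2*L-2)" using G_pos beta_nonneg R by simp
    show ?thesis using mult_right_mono[OF c1 X0] by simp
  qed
  also have "\<dots> = betaR L beta G (Rr t)" unfolding betaR_def by (simp add: algebra_simps)
  finally show ?thesis .
qed

lemma eta_frob_grad_le_1: assumes k: "1 \<le> k" "k \<le> L" shows "eta t * frob (grad t k) \<le> 1"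
proof -
  have "eta t * frob (grad t k) \<le> eta t * (G * (Rr t)^(L-1))"
    using mult_left_mono[OF frob_grad_le[OF k] less_imp_le[OF eta_pos]] .
  also have "\<dots> \<le> eta t * betaR L beta G (Rr t)"
    using mult_left_mono[OF G_pow_le_betaR less_imp_le[OF eta_pos]] .
  also have "\<dots> \<le> 1" by (rule eta_betaR_le_1)
  finally show ?thesis .
qed

subsection \<open>Sufficient decrease\<close>

lemma grad_sq_norm_nonneg: "grad_sq_norm t \<ge> 0" unfolding grad_sq_norm_def by (auto intro!: sum_nonneg)

lemma risk_Suc_le: "risk l n z d L (W (Suc t)) \<le> risk l n z d L (W t) - (3/4) * eta t * grad_sq_norm t"
proof -
  define e where "e = eta t"
  define D where "D k = (- e) \<cdot>\<^sub>m grad t k" for k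
  have e0: "e > 0" unfolding e_def by (rule eta_pos)
  have L1: "L \<ge> 1" using L_ge by simp
  have D_carrier: "D k \<in> carrier_mat (dims k) (dims (k-1))" for k unfolding D_def using grad_carrier by simp
  have Db: "frob (D k) \<le> 1" if k: "1 \<le> k" "k \<le> L" for k
    unfolding D_def frob_smult using eta_frob_grad_le_1[OF k, of t] e0 unfolding e_def by simp
  have V': "W (Suc t) k = W t k + D k" if k: "1 \<le> k" "k \<le> L" for k
  proof -
    have "W (Suc t) k = W t k - e \<cdot>\<^sub>m grad t k" unfolding e_def by (rule W_Suc[OF k])
    also have "\<dots> = W t k + D k" unfolding D_def using W_carrier[OF k, of t] grad_carrier[of t k]
      by (intro eq_matI) auto
    finally show ?thesis .
  qed
  have desc: "risk l n z d L (W (Suc t)) \<le> risk l n z d L (W t) + (\<Sum>k\<in>{1..L}. frob_inner (D k) (net_grad dl n z d dims L (W t) k))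
      + (beta + G) * (Rr t)^(2*L-2) * (\<Sum>k\<in>{1..L}. frob (D k))^2"
    by (rule risk_taylor_upper_bound[OF L1 W_net_dims dims_0 dims_L z_carrier vnorm_z_le_1 n_pos D_carrier Db Rr_ge_1 Rr_ball V' l_deriv dl_lip dl_bdd])
  have f: "(\<Sum>k\<in>{1..L}. frob_inner (D k) (net_grad dl n z d dims L (W t) k)) = - e * grad_sq_norm t"
    unfolding D_def grad_sq_norm_def grad_def[symmetric] frob_inner_smult_self by (simp add: sum_distrib_left)
  have s: "(\<Sum>k\<in>{1..L}. frob (D k))^2 \<le> e^2 * (real L * grad_sq_norm t)"
  proof -
    have "(\<Sum>k\<in>{1..L}. frob (D k)) = e * (\<Sum>k\<in>{1..L}. frob (grad t k))"
      unfolding D_def frob_smult using e0 by (simp add: sum_distrib_left)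
    hence "(\<Sum>k\<in>{1..L}. frob (D k))^2 = e^2 * (\<Sum>k\<in>{1..L}. frob (grad t k))^2" by (simp add: power_mult_distrib)
    also have "\<dots> \<le> e^2 * (real (card {1..L}) * (\<Sum>k\<in>{1..L}. frob (grad t k)^2))"
      by (intro mult_left_mono sum_sq_le_card_sum_sq) auto
    finally show ?thesis unfolding grad_sq_norm_def by simp
  qed
  have c: "(beta + G) * (Rr t)^(2*L-2) * real L * e \<le> 1/4"
  proof -
    have "(beta + G) * (Rr t)^(2*L-2) * real L * e = (e * betaR L beta G (Rr t)) / (2 * real L)"
      unfolding betaR_def using L_ge by (simp add: power2_eq_square field_simps)
    also have "\<dots> \<le> 1 / (2 * real L)" using eta_betaR_le_1[of t] L_ge unfolding e_def by (intro divide_right_mono) auto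
    also have "\<dots> \<le> 1/4" using L_ge by (simp add: field_simps)
    finally show ?thesis .
  qed
  have "(beta + G) * (Rr t)^(2*L-2) * (\<Sum>k\<in>{1..L}. frob (D k))^2 \<le> (beta + G) * (Rr t)^(2*L-2) * (e^2 * (real L * grad_sq_norm t))"
    using s G_pos beta_nonneg Rr_ge_1[of t] by (intro mult_left_mono) auto
  also have "\<dots> = ((beta + G) * (Rr t)^(2*L-2) * real L * e) * (e * grad_sq_norm t)" by (simp add: power2_eq_square algebra_simps)
  also have "\<dots> \<le> (1/4) * (e * grad_sq_norm t)" using c e0 grad_sq_norm_nonneg[of t] by (intro mult_right_mono) auto
  finally have "(beta + G) * (Rr t)^(2*L-2) * (\<Sum>k\<in>{1..L}. frob (D k))^2 \<le> (1/4) * (e * grad_sq_norm t)" .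
  thus ?thesis using desc f unfolding e_def by simp
qed

lemma risk_plus_descent_le: "risk l n z d L (W t) + (3/4) * (\<Sum>s<t. eta s * grad_sq_norm s) \<le> risk0"
proof (induction t)
  case 0 thus ?case unfolding risk0_def by simp
next
  case (Suc t)
  thus ?case using risk_Suc_le[of t] by (simp add: algebra_simps)
qed

lemma risk0_nonneg: "risk0 \<ge> 0" unfolding risk0_def by (rule risk_nonneg)

lemma total_step_sq_le: "total_step_sq t \<le> (4/3) * risk0"
proof -
  have "total_step_sq t \<le> (\<Sum>s<t. eta s * grad_sq_norm s)" unfolding total_step_sq_def
  proof (rule sum_mono)
    fix s
    have "(eta s)^2 \<le> eta s" using eta_pos[of s] eta_le1[of s] by (simp add: power2_eq_square mult_le_cancel_left1)
    thus "(eta s)^2 * grad_sq_norm s \<le> eta s * grad_sq_norm s" using grad_sq_norm_nonneg[of s] by (rule mult_right_mono)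
  qed
  also have "\<dots> \<le> (4/3) * risk0" using risk_plus_descent_le[of t] risk_nonneg[of "W t"] by simp
  finally show ?thesis .
qed

lemma total_step_sq_nonneg: "total_step_sq t \<ge> 0"
  unfolding total_step_sq_def using grad_sq_norm_nonneg by (auto intro!: sum_nonneg)

lemma step_sq_sum_nonneg: "step_sq_sum t k \<ge> 0" unfolding step_sq_sum_def by (auto intro!: sum_nonneg)

lemma step_sq_sum_sum: "(\<Sum>k\<in>{1..L}. step_sq_sum t k) = total_step_sq t"
  unfolding step_sq_sum_def total_step_sq_def grad_sq_norm_def by (subst sum.swap) (simp add: sum_distrib_left)

lemma step_sq_sum_le_total: "k \<in> {1..L} \<Longrightarrow> step_sq_sum t k \<le> total_step_sq t"
  unfolding step_sq_sum_sum[symmetric] using step_sq_sum_nonneg by (intro member_le_sum) auto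

lemma step_sq_sum_adjacent_le: "1 \<le> k \<Longrightarrow> k < L \<Longrightarrow> step_sq_sum t k + step_sq_sum t (Suc k) \<le> total_step_sq t"
proof -
  assume k: "1 \<le> k" "k < L"
  have "step_sq_sum t k + step_sq_sum t (Suc k) = (\<Sum>j\<in>{k, Suc k}. step_sq_sum t j)" by simp
  also have "\<dots> \<le> (\<Sum>j\<in>{1..L}. step_sq_sum t j)" using k step_sq_sum_nonneg by (intro sum_mono2) auto
  finally show ?thesis unfolding step_sq_sum_sum .
qed

subsection \<open>Approximate balancedness\<close>

definition gap :: "nat \<Rightarrow> nat \<Rightarrow> real vec \<Rightarrow> real" where
  "gap t k v = sq_norm (transpose_mat (W t k) *\<^sub>v v) - sq_norm (W t (Suc k) *\<^sub>v v)"

lemma gap_Suc: assumes k: "1 \<le> k" "k < L" and v: "v \<in> carrier_vec (dims k)"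
  shows "gap (Suc t) k v = gap t k v + (eta t)^2 * (sq_norm (transpose_mat (grad t k) *\<^sub>v v) - sq_norm (grad t (Suc k) *\<^sub>v v))"
proof -
  have Wk: "W t k \<in> carrier_mat (dims k) (dims (k-1))" using W_carrier k by simp
  have Wk1: "W t (Suc k) \<in> carrier_mat (dims (Suc k)) (dims k)" using W_carrier[of "Suc k"] k by simp
  have Gk: "grad t k \<in> carrier_mat (dims k) (dims (k-1))" by (rule grad_carrier)
  have Gk1: "grad t (Suc k) \<in> carrier_mat (dims (Suc k)) (dims k)" using grad_carrier[of t "Suc k"] by simp
  have e1: "W (Suc t) k = W t k - eta t \<cdot>\<^sub>m grad t k" using W_Suc k by simp
  have e2: "W (Suc t) (Suc k) = W t (Suc k) - eta t \<cdot>\<^sub>m grad t (Suc k)" using W_Suc[of "Suc k"] k by simp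
  have K: "(transpose_mat (W t k) *\<^sub>v v) \<bullet> (transpose_mat (grad t k) *\<^sub>v v) = (W t (Suc k) *\<^sub>v v) \<bullet> (grad t (Suc k) *\<^sub>v v)"
    unfolding grad_def by (rule net.transpose_net_grad_balance[OF net_W k v])
  show ?thesis unfolding gap_def e1 e2 sq_norm_transpose_mult_update[OF Wk Gk v] sq_norm_mult_update[OF Wk1 Gk1 v] K by (simp add: algebra_simps)
qed

lemma gap_le: assumes k: "1 \<le> k" "k < L" and v: "v \<in> carrier_vec (dims k)"
  shows "gap t k v \<le> gap 0 k v + step_sq_sum t k * sq_norm v"
proof (induction t)
  case 0 thus ?case unfolding step_sq_sum_def by simp
next
  case (Suc t)
  have Gk: "grad t k \<in> carrier_mat (dims k) (dims (k-1))" by (rule grad_carrier)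
  have "sq_norm (transpose_mat (grad t k) *\<^sub>v v) - sq_norm (grad t (Suc k) *\<^sub>v v) \<le> frob (grad t k)^2 * sq_norm v"
    using sq_norm_transpose_mult_le_frob[OF Gk v] sq_norm_nonneg[of "grad t (Suc k) *\<^sub>v v"] by simp
  hence "(eta t)^2 * (sq_norm (transpose_mat (grad t k) *\<^sub>v v) - sq_norm (grad t (Suc k) *\<^sub>v v)) \<le> (eta t)^2 * (frob (grad t k)^2 * sq_norm v)"
    by (rule mult_left_mono) simp
  thus ?case using Suc gap_Suc[OF k v, of t] unfolding step_sq_sum_def by (simp add: algebra_simps sum_distrib_right)
qed

lemma gap_ge: assumes k: "1 \<le> k" "k < L" and v: "v \<in> carrier_vec (dims k)"
  shows "gap t k v \<ge> gap 0 k v - step_sq_sum t (Suc k) * sq_norm v"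
proof (induction t)
  case 0 thus ?case unfolding step_sq_sum_def by simp
next
  case (Suc t)
  have Gk1: "grad t (Suc k) \<in> carrier_mat (dims (Suc k)) (dims k)" using grad_carrier[of t "Suc k"] by simp
  have "sq_norm (transpose_mat (grad t k) *\<^sub>v v) - sq_norm (grad t (Suc k) *\<^sub>v v) \<ge> - (frob (grad t (Suc k))^2 * sq_norm v)"
    using sq_norm_mult_le_frob[OF Gk1 v] sq_norm_nonneg[of "transpose_mat (grad t k) *\<^sub>v v"] by simp
  hence "(eta t)^2 * (sq_norm (transpose_mat (grad t k) *\<^sub>v v) - sq_norm (grad t (Suc k) *\<^sub>v v)) \<ge> (eta t)^2 * (- (frob (grad t (Suc k))^2 * sq_norm v))"
    by (rule mult_left_mono) simp
  thus ?case using Suc gap_Suc[OF k v, of t] unfolding step_sq_sum_def by (simp add: algebra_simps sum_distrib_right)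
qed

lemma gap_le_spec0_sq: assumes k: "1 \<le> k" "k < L" and u: "u \<in> carrier_vec (dims k)" and Nu: "sq_norm u = 1"
  shows "gap t k u \<le> spec (W 0 k)^2 + step_sq_sum t k"
proof -
  have W0k: "W 0 k \<in> carrier_mat (dims k) (dims (k-1))" using W_carrier k by simp
  have "gap 0 k u \<le> spec (W 0 k)^2"
    unfolding gap_def using sq_norm_transpose_mult_le_spec[OF W0k u] Nu sq_norm_nonneg[of "W 0 (Suc k) *\<^sub>v u"] by simp
  thus ?thesis using gap_le[OF k u, of t] Nu by simp
qed

lemma neg_gap_le_spec0_sq: assumes k: "1 \<le> k" "k < L" and v: "v \<in> carrier_vec (dims k)" and Nv: "sq_norm v = 1"
  shows "- gap t k v \<le> spec (W 0 (Suc k))^2 + step_sq_sum t (Suc k)"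
proof -
  have W0k1: "W 0 (Suc k) \<in> carrier_mat (dims (Suc k)) (dims k)" using W_carrier[of "Suc k" 0] k by simp
  have "- gap 0 k v \<le> spec (W 0 (Suc k))^2"
    unfolding gap_def using sq_norm_mult_le_spec[OF W0k1 v] Nv
      sq_norm_nonneg[of "transpose_mat (W 0 k) *\<^sub>v v"] by simp
  thus ?thesis using gap_ge[OF k v, of t] Nv by simp
qed

lemma frob_inner_grad_layer_indep: "1 \<le> k \<Longrightarrow> k \<le> L \<Longrightarrow> frob_inner (W t k) (grad t k) = frob_inner (W t 1) (grad t 1)"
proof (induction k)
  case 0 thus ?case by simp
next
  case (Suc k)
  show ?case
  proof (cases "k = 0")
    case True thus ?thesis by simp
  next
    case False
    hence "frob_inner (W t (Suc k)) (grad t (Suc k)) = frob_inner (W t k) (grad t k)"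
      unfolding grad_def using net.frob_inner_net_grad_balance[OF net_W, where dl=dl and k=k] Suc.prems by simp
    thus ?thesis using Suc False by simp
  qed
qed

lemma frob_sq_evolution: assumes k: "1 \<le> k" "k \<le> L"
  shows "frob (W t k)^2 = frob (W 0 k)^2 + step_sq_sum t k - 2 * (\<Sum>s<t. eta s * frob_inner (W s 1) (grad s 1))"
proof (induction t)
  case 0 thus ?case unfolding step_sq_sum_def by simp
next
  case (Suc t)
  have "frob (W (Suc t) k)^2 = frob (W t k)^2 - 2 * eta t * frob_inner (W t k) (grad t k) + (eta t)^2 * frob (grad t k)^2"
    unfolding W_Suc[OF k] by (rule frob_sq_update[OF W_carrier[OF k] grad_carrier])
  thus ?case using Suc frob_inner_grad_layer_indep[OF k, of t] unfolding step_sq_sum_def by (simp add: algebra_simps)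
qed

definition gap_mat0 :: "nat \<Rightarrow> real mat" where
  "gap_mat0 j = W 0 j * transpose_mat (W 0 j) - transpose_mat (W 0 (Suc j)) * W 0 (Suc j)"

lemma gap_mat0_carrier: "1 \<le> j \<Longrightarrow> j < L \<Longrightarrow> gap_mat0 j \<in> carrier_mat (dims j) (dims j)"
  unfolding gap_mat0_def using W_carrier[of j 0] W_carrier[of "Suc j" 0] by (intro minus_carrier_mat) auto

lemma spec_gap_mat0_nonneg: "1 \<le> j \<Longrightarrow> j < L \<Longrightarrow> spec (gap_mat0 j) \<ge> 0"
  using spec_nonneg[OF gap_mat0_carrier] dims_pos[of j] by simp

lemma abs_gap0_le: assumes j: "1 \<le> j" "j < L" and v: "v \<in> carrier_vec (dims j)"
  shows "\<bar>gap 0 j v\<bar> \<le> spec (gap_mat0 j) * sq_norm v"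
proof -
  have "gap 0 j v = v \<bullet> (gap_mat0 j *\<^sub>v v)" unfolding gap_def gap_mat0_def
    by (rule quad_form_gram_diff[symmetric]) (use W_carrier[of j 0] W_carrier[of "Suc j" 0] j v in auto)
  thus ?thesis using abs_quad_form_le_spec[OF gap_mat0_carrier[OF j] v] by simp
qed

lemma spec_sq_Suc_le: assumes j: "1 \<le> j" "j < L"
  shows "spec (W t (Suc j))^2 \<le> spec (W t j)^2 + spec (gap_mat0 j) + step_sq_sum t (Suc j)"
proof (rule spec_sq_least)
  show "W t (Suc j) \<in> carrier_mat (dims (Suc j)) (dims j)" using W_carrier[of "Suc j" t] j by simp
  show "dims j > 0" using dims_pos j by simp
  fix v :: "real vec" assume v: "v \<in> carrier_vec (dims j)"
  have Wj: "W t j \<in> carrier_mat (dims j) (dims (j-1))" using W_carrier j by simp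
  have "sq_norm (W t (Suc j) *\<^sub>v v) = sq_norm (transpose_mat (W t j) *\<^sub>v v) - gap t j v" unfolding gap_def by simp
  also have "\<dots> \<le> spec (W t j)^2 * sq_norm v - (gap 0 j v - step_sq_sum t (Suc j) * sq_norm v)"
    using sq_norm_transpose_mult_le_spec[OF Wj v] gap_ge[OF j v, of t] by simp
  also have "\<dots> \<le> spec (W t j)^2 * sq_norm v + spec (gap_mat0 j) * sq_norm v + step_sq_sum t (Suc j) * sq_norm v"
    using abs_le_D2[OF abs_gap0_le[OF j v]] by simp
  finally show "sq_norm (W t (Suc j) *\<^sub>v v) \<le> (spec (W t j)^2 + spec (gap_mat0 j) + step_sq_sum t (Suc j)) * sq_norm v"
    by (simp add: algebra_simps)
qed

lemma spec_sq_last_le: assumes k: "1 \<le> k" "k \<le> L"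
  shows "spec (W t L)^2 \<le> spec (W t k)^2 + (\<Sum>j\<in>{k..<L}. spec (gap_mat0 j) + step_sq_sum t (Suc j))"
  using k
proof (induction "L - k" arbitrary: k)
  case 0 thus ?case by simp
next
  case (Suc m)
  have k: "k < L" "1 \<le> k" using Suc by auto
  have IH: "spec (W t L)^2 \<le> spec (W t (Suc k))^2 + (\<Sum>j\<in>{Suc k..<L}. spec (gap_mat0 j) + step_sq_sum t (Suc j))"
    using Suc.hyps(1)[of "Suc k"] Suc.hyps(2) k by simp
  have "{k..<L} = insert k {Suc k..<L}" using k by auto
  hence "(\<Sum>j\<in>{k..<L}. spec (gap_mat0 j) + step_sq_sum t (Suc j)) = (spec (gap_mat0 k) + step_sq_sum t (Suc k)) + (\<Sum>j\<in>{Suc k..<L}. spec (gap_mat0 j) + step_sq_sum t (Suc j))"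
    by simp
  thus ?case using IH spec_sq_Suc_le[of k t] k by simp
qed

lemma frob0_sq_le_Max: "1 \<le> k \<Longrightarrow> k \<le> L \<Longrightarrow> frob (W 0 k)^2 \<le> Max {frob (W 0 k) ^ 2 | k. 1 \<le> k \<and> k \<le> L}"
proof -
  assume k: "1 \<le> k" "k \<le> L"
  have fin: "finite {frob (W 0 k) ^ 2 | k. 1 \<le> k \<and> k \<le> L}"
  proof -
    have "{frob (W 0 k) ^ 2 | k. 1 \<le> k \<and> k \<le> L} = (\<lambda>k. frob (W 0 k)^2) ` {1..L}" by auto
    thus ?thesis by simp
  qed
  show ?thesis by (rule Max_ge[OF fin]) (use k in auto)
qed

lemma Dconst_eq: "Dconst L (W 0) = Max {frob (W 0 k) ^ 2 | k. 1 \<le> k \<and> k \<le> L} - frob (W 0 L)^2 + (\<Sum>j\<in>{1..<L}. spec (gap_mat0 j))"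
  unfolding Dconst_def gap_mat0_def by simp

lemma Dconst_nonneg: "Dconst L (W 0) \<ge> 0"
proof -
  have "frob (W 0 L)^2 \<le> Max {frob (W 0 k) ^ 2 | k. 1 \<le> k \<and> k \<le> L}" using frob0_sq_le_Max[of L] L_ge by simp
  moreover have "(\<Sum>j\<in>{1..<L}. spec (gap_mat0 j)) \<ge> 0" using spec_gap_mat0_nonneg by (intro sum_nonneg) auto
  ultimately show ?thesis unfolding Dconst_eq by simp
qed

lemma frob_last_le_spec: "frob (W t L) \<le> spec (W t L)"
proof (rule frob_le_spec_row)
  show "W t L \<in> carrier_mat 1 (dims (L - 1))" using W_carrier[of L t] L_ge dims_L by simp
  show "dims (L-1) > 0" using dims_pos by simp
qed

lemma frob_sq_minus_spec_sq_le_aux: assumes k: "1 \<le> k" "k \<le> L"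
  shows "frob (W t k)^2 - spec (W t k)^2 \<le> Dconst L (W 0) + total_step_sq t"
proof -
  have L1: "1 \<le> L" "L \<le> L" using L_ge by auto
  have fk: "frob (W t k)^2 - frob (W t L)^2 = frob (W 0 k)^2 - frob (W 0 L)^2 + step_sq_sum t k - step_sq_sum t L"
    using frob_sq_evolution[OF k, of t] frob_sq_evolution[OF L1, of t] by simp
  have fL: "frob (W t L)^2 \<le> spec (W t L)^2" using frob_last_le_spec[of t] frob_nonneg by (intro power_mono) auto
  have ch: "spec (W t L)^2 \<le> spec (W t k)^2 + (\<Sum>j\<in>{k..<L}. spec (gap_mat0 j)) + (\<Sum>j\<in>{k..<L}. step_sq_sum t (Suc j))"
    using spec_sq_last_le[OF k, of t] by (simp add: sum.distrib)
  have sh: "(\<Sum>j\<in>{k..<L}. step_sq_sum t (Suc j)) = (\<Sum>j\<in>{Suc k..L}. step_sq_sum t j)"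
  proof -
    have "(\<Sum>j\<in>{k..<L}. step_sq_sum t (Suc j)) = (\<Sum>j\<in>{Suc k..<Suc L}. step_sq_sum t j)" by (rule sum.shift_bounds_Suc_ivl[symmetric])
    also have "{Suc k..<Suc L} = {Suc k..L}" by auto
    finally show ?thesis .
  qed
  have s1: "step_sq_sum t k + (\<Sum>j\<in>{Suc k..L}. step_sq_sum t j) \<le> total_step_sq t"
  proof -
    have "{k..L} = insert k {Suc k..L}" using k by auto
    hence "step_sq_sum t k + (\<Sum>j\<in>{Suc k..L}. step_sq_sum t j) = (\<Sum>j\<in>{k..L}. step_sq_sum t j)" by simp
    also have "\<dots> \<le> (\<Sum>j\<in>{1..L}. step_sq_sum t j)" using k step_sq_sum_nonneg by (intro sum_mono2) auto
    finally show ?thesis unfolding step_sq_sum_sum .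
  qed
  have s2: "(\<Sum>j\<in>{k..<L}. spec (gap_mat0 j)) \<le> (\<Sum>j\<in>{1..<L}. spec (gap_mat0 j))"
    using k spec_gap_mat0_nonneg by (intro sum_mono2) auto
  have m: "frob (W 0 k)^2 \<le> Max {frob (W 0 k) ^ 2 | k. 1 \<le> k \<and> k \<le> L}" by (rule frob0_sq_le_Max[OF k])
  show ?thesis unfolding Dconst_eq using fk fL ch sh s1 s2 m step_sq_sum_nonneg[of t L] by linarith
qed

lemma frob_sq_minus_spec_sq_le: "1 \<le> k \<Longrightarrow> k \<le> L \<Longrightarrow> frob (W t k)^2 - spec (W t k)^2 \<le> Dconst L (W 0) + 2 * risk0"
  using frob_sq_minus_spec_sq_le_aux[of k t] total_step_sq_le[of t] risk0_nonneg by simp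

subsection \<open>Alignment of singular vectors\<close>

lemma top_singular_vectors_aligned: assumes k: "1 \<le> k" "k < L" and nz: "W t (Suc k) \<noteq> 0\<^sub>m (dims (Suc k)) (dims k)"
  and sv1: "top_sv (W t k) u v'" and sv2: "top_sv (W t (Suc k)) u' v"
  shows "(v \<bullet> u)^2 \<ge> 1 - (Dconst L (W 0) + 3 * risk0 + spec (W 0 (Suc k))^2 + spec (W 0 k)^2) / spec (W t (Suc k))^2"
proof -
  have Wk: "W t k \<in> carrier_mat (dims k) (dims (k-1))" using W_carrier k by simp
  have Wk1: "W t (Suc k) \<in> carrier_mat (dims (Suc k)) (dims k)" using W_carrier[of "Suc k" t] k by simp
  define sk where "sk = spec (W t k)"
  define s1 where "s1 = spec (W t (Suc k))"
  have u: "u \<in> carrier_vec (dims k)" and v': "v' \<in> carrier_vec (dims (k-1))" and Nu: "sq_norm u = 1" and Nv': "sq_norm v' = 1"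
    and Wv': "W t k *\<^sub>v v' = sk \<cdot>\<^sub>v u" and WTu: "transpose_mat (W t k) *\<^sub>v u = sk \<cdot>\<^sub>v v'"
    using sv1 Wk unfolding top_sv_def sk_def by (auto intro: sq_norm_eq_1_if_unit)
  have u': "u' \<in> carrier_vec (dims (Suc k))" and v: "v \<in> carrier_vec (dims k)" and Nu': "sq_norm u' = 1" and Nv: "sq_norm v = 1"
    and Wv: "W t (Suc k) *\<^sub>v v = s1 \<cdot>\<^sub>v u'"
    using sv2 Wk1 unfolding top_sv_def s1_def by (auto intro: sq_norm_eq_1_if_unit)
  define a where "a = u \<bullet> v"
  have a2: "a^2 \<le> 1" using cauchy_schwarz[of u v] u v Nu Nv unfolding a_def by simp
  have a0: "0 \<le> a^2" by simp
  have vu: "v \<bullet> u = a" unfolding a_def using u v by (simp add: scalar_prod_comm)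
  have F1: "sq_norm (W t (Suc k) *\<^sub>v v) = s1^2" unfolding Wv sq_norm_smult Nu' by simp
  have F2: "sq_norm (transpose_mat (W t k) *\<^sub>v u) = sk^2" unfolding WTu sq_norm_smult Nv' by simp
  define E where "E = frob (W t k)^2 - sk^2"
  have F3: "sq_norm (transpose_mat (W t k) *\<^sub>v v) \<le> a^2 * sk^2 + (1 - a^2) * E"
    unfolding a_def E_def by (rule sq_norm_transpose_mult_le_top_sv[OF Wk u v' v Nu Nv' Nv Wv' WTu])
  have F4: "s1^2 = sq_norm (transpose_mat (W t k) *\<^sub>v v) - gap t k v" unfolding gap_def F1[symmetric] by simp
  have F5: "sk^2 \<le> s1^2 + gap t k u"
  proof -
    have "sk^2 = sq_norm (W t (Suc k) *\<^sub>v u) + gap t k u" unfolding gap_def F2[symmetric] by simp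
    moreover have "sq_norm (W t (Suc k) *\<^sub>v u) \<le> s1^2" using sq_norm_mult_le_spec[OF Wk1 u] Nu unfolding s1_def by simp
    ultimately show ?thesis by simp
  qed
  have F6: "gap t k u \<le> spec (W 0 k)^2 + step_sq_sum t k" by (rule gap_le_spec0_sq[OF k u Nu])
  have F7: "- gap t k v \<le> spec (W 0 (Suc k))^2 + step_sq_sum t (Suc k)" by (rule neg_gap_le_spec0_sq[OF k v Nv])
  have F8: "E \<le> Dconst L (W 0) + total_step_sq t" unfolding E_def sk_def using frob_sq_minus_spec_sq_le_aux[of k t] k by simp
  have E0: "Dconst L (W 0) + total_step_sq t \<ge> 0" using Dconst_nonneg total_step_sq_nonneg by simp
  have sk0: "0 \<le> spec (W 0 k)^2 + step_sq_sum t k" using step_sq_sum_nonneg by simp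
  have main: "(1 - a^2) * s1^2 \<le> Dconst L (W 0) + 3 * risk0 + spec (W 0 (Suc k))^2 + spec (W 0 k)^2"
  proof -
    have "s1^2 \<le> a^2 * sk^2 + (1 - a^2) * E - gap t k v" using F3 F4 by simp
    also have "\<dots> \<le> a^2 * (s1^2 + gap t k u) + (1 - a^2) * E - gap t k v"
      using F5 a0 by (simp add: mult_left_mono)
    finally have "(1 - a^2) * s1^2 \<le> a^2 * gap t k u + (1 - a^2) * E - gap t k v" by (simp add: algebra_simps)
    also have "\<dots> \<le> a^2 * (spec (W 0 k)^2 + step_sq_sum t k) + (1 - a^2) * (Dconst L (W 0) + total_step_sq t) + (spec (W 0 (Suc k))^2 + step_sq_sum t (Suc k))"
    proof -
      have "a^2 * gap t k u \<le> a^2 * (spec (W 0 k)^2 + step_sq_sum t k)" using F6 a0 by (rule mult_left_mono)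
      moreover have "(1 - a^2) * E \<le> (1 - a^2) * (Dconst L (W 0) + total_step_sq t)" using F8 a2 by (intro mult_left_mono) auto
      ultimately show ?thesis using F7 by linarith
    qed
    also have "\<dots> \<le> 1 * (spec (W 0 k)^2 + step_sq_sum t k) + 1 * (Dconst L (W 0) + total_step_sq t) + (spec (W 0 (Suc k))^2 + step_sq_sum t (Suc k))"
      using a0 a2 sk0 E0 by (intro add_mono mult_right_mono) auto
    also have "\<dots> \<le> Dconst L (W 0) + 3 * risk0 + spec (W 0 (Suc k))^2 + spec (W 0 k)^2"
      using step_sq_sum_adjacent_le[OF k, of t] total_step_sq_le[of t] risk0_nonneg by simp
    finally show ?thesis .
  qed
  have s1pos: "s1 > 0" unfolding s1_def by (rule spec_pos[OF Wk1 nz])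
  hence "1 - a^2 \<le> (Dconst L (W 0) + 3 * risk0 + spec (W 0 (Suc k))^2 + spec (W 0 k)^2) / s1^2"
    using main by (simp add: field_simps)
  thus ?thesis unfolding vu s1_def by simp
qed

definition chain_const :: real where "chain_const = (\<Sum>j\<in>{1..<L}. spec (gap_mat0 j)) + 2 * risk0"

definition max_frob0_sq :: real where "max_frob0_sq = Max {frob (W 0 k) ^ 2 | k. 1 \<le> k \<and> k \<le> L}"

lemma chain_const_nonneg: "chain_const \<ge> 0" unfolding chain_const_def using spec_gap_mat0_nonneg risk0_nonneg by (auto intro!: add_nonneg_nonneg sum_nonneg)

lemma gap_le_chain_const: assumes j: "1 \<le> j" "j < L" and yy: "yy \<in> carrier_vec (dims j)"
  shows "gap t j yy \<le> chain_const * sq_norm yy"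
proof -
  have "gap t j yy \<le> gap 0 j yy + step_sq_sum t j * sq_norm yy" by (rule gap_le[OF j yy])
  also have "\<dots> \<le> spec (gap_mat0 j) * sq_norm yy + total_step_sq t * sq_norm yy"
    using abs_le_D1[OF abs_gap0_le[OF j yy]] step_sq_sum_le_total[of j t] j sq_norm_nonneg[of yy] by (intro add_mono mult_right_mono) auto
  also have "\<dots> \<le> chain_const * sq_norm yy"
  proof -
    have "spec (gap_mat0 j) \<le> (\<Sum>j\<in>{1..<L}. spec (gap_mat0 j))" using j spec_gap_mat0_nonneg by (intro member_le_sum) auto
    moreover have "total_step_sq t \<le> 2 * risk0" using total_step_sq_le[of t] risk0_nonneg by simp
    ultimately have "spec (gap_mat0 j) + total_step_sq t \<le> chain_const" unfolding chain_const_def by simp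
    hence "(spec (gap_mat0 j) + total_step_sq t) * sq_norm yy \<le> chain_const * sq_norm yy" using sq_norm_nonneg[of yy] by (rule mult_right_mono)
    thus ?thesis by (simp add: distrib_right)
  qed
  finally show ?thesis .
qed

lemma frob_sq_le_first: assumes k: "1 \<le> k" "k \<le> L" shows "frob (W t k)^2 \<le> frob (W t 1)^2 + (max_frob0_sq + 2 * risk0)"
proof -
  have k1: "1 \<le> (1::nat)" "1 \<le> L" using L_ge by auto
  have "frob (W t k)^2 - frob (W t 1)^2 = frob (W 0 k)^2 - frob (W 0 1)^2 + step_sq_sum t k - step_sq_sum t 1"
    using frob_sq_evolution[OF k, of t] frob_sq_evolution[OF k1, of t] by simp
  moreover have "frob (W 0 k)^2 \<le> max_frob0_sq" unfolding max_frob0_sq_def by (rule frob0_sq_le_Max[OF k])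
  moreover have "step_sq_sum t k \<le> 2 * risk0" using step_sq_sum_le_total[of k t] total_step_sq_le[of t] risk0_nonneg k by simp
  moreover have "frob (W 0 1)^2 \<ge> 0" by simp
  ultimately show ?thesis using step_sq_sum_nonneg[of t 1] by linarith
qed

lemma layer_out_W_carrier: "v \<in> carrier_vec d \<Longrightarrow> j \<le> L \<Longrightarrow> layer_out (W t) v j \<in> carrier_vec (dims j)"
  using layer_out_carrier[OF W_net_dims, of v j] dims_0 by simp

lemma sq_norm_layer_out_Suc_ge: assumes v: "v \<in> carrier_vec d" and j: "1 \<le> j" "j < L"
  and IH: "sq_norm (layer_out (W t) v j) \<ge> \<rho> * sq_norm (layer_out (W t) v (j-1))"
  shows "sq_norm (layer_out (W t) v (Suc j)) \<ge> (\<rho> - chain_const) * sq_norm (layer_out (W t) v j)"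
proof -
  have Wj: "W t j \<in> carrier_mat (dims j) (dims (j-1))" using W_carrier j by simp
  have yj: "layer_out (W t) v j \<in> carrier_vec (dims j)" using layer_out_W_carrier[OF v] j by simp
  have yj1: "layer_out (W t) v (j-1) \<in> carrier_vec (dims (j-1))" using layer_out_W_carrier[OF v] j by simp
  have T: "sq_norm (transpose_mat (W t j) *\<^sub>v layer_out (W t) v j) \<ge> \<rho> * sq_norm (layer_out (W t) v j)"
  proof (cases "\<rho> \<le> 0")
    case True
    have "\<rho> * sq_norm (layer_out (W t) v j) \<le> 0" using True sq_norm_nonneg[of "layer_out (W t) v j"] by (rule mult_nonpos_nonneg)
    thus ?thesis using sq_norm_nonneg[of "transpose_mat (W t j) *\<^sub>v layer_out (W t) v j"] by linarith
  next
    case False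
    hence rho: "\<rho> > 0" by simp
    show ?thesis
    proof (cases "sq_norm (layer_out (W t) v (j-1)) = 0")
      case True
      hence "sq_norm (layer_out (W t) v j) \<le> 0" using sq_norm_mult_le_spec[OF Wj yj1] layer_out_step[OF j(1), of "W t" v] by simp
      hence "sq_norm (layer_out (W t) v j) = 0" using sq_norm_nonneg[of "layer_out (W t) v j"] by simp
      thus ?thesis using sq_norm_nonneg[of "transpose_mat (W t j) *\<^sub>v layer_out (W t) v j"] by simp
    next
      case False
      hence pos: "sq_norm (layer_out (W t) v (j-1)) > 0" using sq_norm_nonneg[of "layer_out (W t) v (j-1)"] by simp
      have "sq_norm (layer_out (W t) v j) = layer_out (W t) v (j-1) \<bullet> (transpose_mat (W t j) *\<^sub>v layer_out (W t) v j)"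
      proof -
        have "sq_norm (layer_out (W t) v j) = (W t j *\<^sub>v layer_out (W t) v (j-1)) \<bullet> layer_out (W t) v j" using layer_out_step[OF j(1), of "W t" v] by simp
        also have "\<dots> = layer_out (W t) v (j-1) \<bullet> (transpose_mat (W t j) *\<^sub>v layer_out (W t) v j)"
          using transpose_vec_mult_scalar[of "transpose_mat (W t j)" "dims (j-1)" "dims j" "layer_out (W t) v j" "layer_out (W t) v (j-1)"] Wj yj yj1 by simp
        finally show ?thesis .
      qed
      hence "(sq_norm (layer_out (W t) v j))^2 \<le> sq_norm (layer_out (W t) v (j-1)) * sq_norm (transpose_mat (W t j) *\<^sub>v layer_out (W t) v j)"
        using cauchy_schwarz[of "layer_out (W t) v (j-1)" "transpose_mat (W t j) *\<^sub>v layer_out (W t) v j"] Wj yj1 by simp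
      moreover have "\<rho> * sq_norm (layer_out (W t) v (j-1)) * sq_norm (layer_out (W t) v j) \<le> (sq_norm (layer_out (W t) v j))^2"
        using IH sq_norm_nonneg[of "layer_out (W t) v j"] by (simp add: power2_eq_square mult_right_mono)
      ultimately have "sq_norm (layer_out (W t) v (j-1)) * (\<rho> * sq_norm (layer_out (W t) v j)) \<le> sq_norm (layer_out (W t) v (j-1)) * sq_norm (transpose_mat (W t j) *\<^sub>v layer_out (W t) v j)"
        by (simp add: algebra_simps)
      thus ?thesis using pos by simp
    qed
  qed
  have A: "sq_norm (layer_out (W t) v (Suc j)) = sq_norm (transpose_mat (W t j) *\<^sub>v layer_out (W t) v j) - gap t j (layer_out (W t) v j)"
    unfolding gap_def by simp
  have B: "gap t j (layer_out (W t) v j) \<le> chain_const * sq_norm (layer_out (W t) v j)" by (rule gap_le_chain_const[OF j yj])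
  have "(\<rho> - chain_const) * sq_norm (layer_out (W t) v j) = \<rho> * sq_norm (layer_out (W t) v j) - chain_const * sq_norm (layer_out (W t) v j)" by (simp add: left_diff_distrib)
  thus ?thesis using A B T by linarith
qed

lemma sq_norm_layer_out_ratio_ge: assumes v: "v \<in> carrier_vec d" and sv: "top_sv (W t 1) u v"
  shows "1 \<le> j \<Longrightarrow> j \<le> L \<Longrightarrow> sq_norm (layer_out (W t) v j) \<ge> (spec (W t 1)^2 - (real j - 1) * chain_const) * sq_norm (layer_out (W t) v (j-1))"
proof (induction j)
  case 0 thus ?case by simp
next
  case (Suc j)
  show ?case
  proof (cases "j = 0")
    case True
    have W1: "W t 1 \<in> carrier_mat (dims 1) (dims 0)" using W_carrier[of 1 t] L_ge by simp
    have "sq_norm v = 1" and "W t 1 *\<^sub>v v = spec (W t 1) \<cdot>\<^sub>v u" and "sq_norm u = 1"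
      using sv unfolding top_sv_def by (auto intro: sq_norm_eq_1_if_unit)
    hence "sq_norm (layer_out (W t) v 1) = spec (W t 1)^2" by (simp add: sq_norm_smult)
    thus ?thesis using True \<open>sq_norm v = 1\<close> by simp
  next
    case False
    hence j: "1 \<le> j" "j < L" using Suc by auto
    have "sq_norm (layer_out (W t) v (Suc j)) \<ge> ((spec (W t 1)^2 - (real j - 1) * chain_const) - chain_const) * sq_norm (layer_out (W t) v j)"
      using sq_norm_layer_out_Suc_ge[OF v j] Suc j by simp
    thus ?thesis by (simp add: algebra_simps)
  qed
qed

lemma sq_norm_layer_out_ge_pow: assumes v: "v \<in> carrier_vec d" and sv: "top_sv (W t 1) u v"
  and rho: "spec (W t 1)^2 - (real L - 1) * chain_const \<ge> 0"
  shows "j \<le> L \<Longrightarrow> sq_norm (layer_out (W t) v j) \<ge> (spec (W t 1)^2 - (real L - 1) * chain_const)^j"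
proof (induction j)
  case 0
  have "sq_norm v = 1" using sv unfolding top_sv_def by (auto intro: sq_norm_eq_1_if_unit)
  thus ?case by simp
next
  case (Suc j)
  let ?r = "spec (W t 1)^2 - (real L - 1) * chain_const"
  have "?r * sq_norm (layer_out (W t) v j) \<le> (spec (W t 1)^2 - (real (Suc j) - 1) * chain_const) * sq_norm (layer_out (W t) v j)"
  proof (rule mult_right_mono)
    have "(real (Suc j) - 1) * chain_const \<le> (real L - 1) * chain_const" using Suc.prems chain_const_nonneg by (intro mult_right_mono) auto
    thus "?r \<le> spec (W t 1)^2 - (real (Suc j) - 1) * chain_const" by simp
  qed (rule sq_norm_nonneg)
  also have "\<dots> \<le> sq_norm (layer_out (W t) v (Suc j))" using sq_norm_layer_out_ratio_ge[OF v sv, of "Suc j"] Suc.prems by simp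
  finally have "?r * sq_norm (layer_out (W t) v j) \<le> sq_norm (layer_out (W t) v (Suc j))" .
  moreover have "?r * ?r^j \<le> ?r * sq_norm (layer_out (W t) v j)" using Suc rho by (intro mult_left_mono) auto
  ultimately show ?case by simp
qed

lemma sq_norm_layer_out_le_prod_frob: assumes v: "v \<in> carrier_vec d" "sq_norm v = 1"
  shows "j \<le> L \<Longrightarrow> sq_norm (layer_out (W t) v j) \<le> (\<Prod>k\<in>{1..j}. frob (W t k)^2)"
proof (induction j)
  case 0 thus ?case using v by simp
next
  case (Suc j)
  have W: "W t (Suc j) \<in> carrier_mat (dims (Suc j)) (dims j)" using W_carrier[of "Suc j" t] Suc by simp
  have "sq_norm (layer_out (W t) v (Suc j)) \<le> frob (W t (Suc j))^2 * sq_norm (layer_out (W t) v j)"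
    using sq_norm_mult_le_frob[OF W layer_out_W_carrier[OF v(1), of j t]] Suc by simp
  also have "\<dots> \<le> frob (W t (Suc j))^2 * (\<Prod>k\<in>{1..j}. frob (W t k)^2)" using Suc by (intro mult_left_mono) auto
  finally show ?case by (simp add: mult.commute)
qed

lemma normalized_wprod_bounds:
  assumes sv: "top_sv (W t 1) u vv"
    and F: "frob (W t 1)^2 \<ge> Dconst L (W 0) + 2 * risk0 + (real L - 1) * chain_const + 1"
  shows "\<bar>((1 / (\<Prod>k\<in>{1..L}. frob (W t k))) \<cdot>\<^sub>v wprod d L (W t)) \<bullet> vv\<bar> \<le> 1
     \<and> ((frob (W t 1)^2 - (Dconst L (W 0) + 2 * risk0 + (real L - 1) * chain_const)) / (frob (W t 1)^2 + (max_frob0_sq + 2 * risk0)))^L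
        \<le> \<bar>((1 / (\<Prod>k\<in>{1..L}. frob (W t k))) \<cdot>\<^sub>v wprod d L (W t)) \<bullet> vv\<bar>"
proof -
  define Fv where "Fv = frob (W t 1)^2"
  define K1 where "K1 = Dconst L (W 0) + 2 * risk0 + (real L - 1) * chain_const"
  define B' where "B' = max_frob0_sq + 2 * risk0"
  define P where "P = (\<Prod>k\<in>{1..L}. frob (W t k))"
  define out where "out = layer_out (W t) vv L $ 0"
  have L1: "1 \<le> (1::nat)" "1 \<le> L" using L_ge by auto
  have W1: "W t 1 \<in> carrier_mat (dims 1) (dims 0)" using W_carrier[OF L1] by simp
  have vc: "vv \<in> carrier_vec d" and Nv: "sq_norm vv = 1"
    using sv W1 dims_0 unfolding top_sv_def by (auto intro: sq_norm_eq_1_if_unit)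
  have FK: "Fv - K1 \<ge> 1" using F unfolding Fv_def K1_def by simp
  have Ny: "sq_norm (layer_out (W t) vv L) = out^2"
    using layer_out_W_carrier[OF vc, of L t] dims_L unfolding out_def by (simp add: scalar_prod_def power2_eq_square)
  have low: "(Fv - K1)^L \<le> out^2"
  proof -
    define \<rho> where "\<rho> = spec (W t 1)^2 - (real L - 1) * chain_const"
    have "spec (W t 1)^2 \<ge> Fv - (Dconst L (W 0) + 2 * risk0)"
      using frob_sq_minus_spec_sq_le[OF L1, of t] unfolding Fv_def by simp
    hence rho: "\<rho> \<ge> Fv - K1" unfolding \<rho>_def K1_def by simp
    have "(Fv - K1)^L \<le> \<rho>^L" using rho FK by (intro power_mono) auto
    also have "\<dots> \<le> out^2"
      using sq_norm_layer_out_ge_pow[OF vc sv, of L] rho FK unfolding \<rho>_def Ny by simp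
    finally show ?thesis .
  qed
  have up: "out^2 \<le> P^2"
    using sq_norm_layer_out_le_prod_frob[OF vc Nv, of L t] unfolding Ny P_def by (simp add: prod_power_distrib)
  have P2: "P^2 \<le> (Fv + B')^L"
  proof -
    have "P^2 = (\<Prod>k\<in>{1..L}. frob (W t k)^2)" unfolding P_def by (simp add: prod_power_distrib)
    also have "\<dots> \<le> (\<Prod>k\<in>{1..L}. Fv + B')" using frob_sq_le_first unfolding Fv_def B'_def
      by (intro prod_mono) auto
    finally show ?thesis by simp
  qed
  have val: "((1 / P) \<cdot>\<^sub>v wprod d L (W t)) \<bullet> vv = out / P"
  proof -
    have "mprod d (W t) L \<in> carrier_mat (dims L) d" using mprod_carrier[OF W_net_dims[of t] dims_0, of L] by simp
    hence "dim_vec (wprod d L (W t)) = d" unfolding wprod_def by simp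
    thus ?thesis using vc wprod_inner_eq_output[OF W_net_dims dims_0 dims_L vc] unfolding out_def by simp
  qed
  have "\<bar>out / P\<bar> \<le> 1 \<and> (Fv - K1)^L / (Fv + B')^L \<le> \<bar>out / P\<bar>"
    using FK low up P2 by (intro abs_div_bounds_of_sq_bounds) (auto simp: P_def intro!: prod_nonneg frob_nonneg)
  thus ?thesis unfolding val[unfolded P_def] Fv_def K1_def B'_def P_def by (simp add: power_divide)
qed

lemma Max_frob_sq_le: "(Max {frob (W t k) | k. 1 \<le> k \<and> k \<le> L})^2 \<le> frob (W t 1)^2 + (max_frob0_sq + 2 * risk0)"
proof -
  have eq: "{frob (W t k) | k. 1 \<le> k \<and> k \<le> L} = (\<lambda>k. frob (W t k)) ` {1..L}" by auto
  have "Max ((\<lambda>k. frob (W t k)) ` {1..L}) \<in> (\<lambda>k. frob (W t k)) ` {1..L}"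
    using L_ge by (intro Max_in) auto
  then obtain k where k: "1 \<le> k" "k \<le> L" "Max ((\<lambda>k. frob (W t k)) ` {1..L}) = frob (W t k)" by auto
  show ?thesis unfolding eq k(3) by (rule frob_sq_le_first[OF k(1,2)])
qed

lemma normalized_wprod_aligned:
  assumes v1: "\<forall>t. \<exists>u. top_sv (W t 1) u (v1 t)"
    and lim: "filterlim (\<lambda>t. Max {frob (W t k) | k. 1 \<le> k \<and> k \<le> L}) at_top sequentially"
  shows "((\<lambda>t. \<bar>((1 / (\<Prod>k\<in>{1..L}. frob (W t k))) \<cdot>\<^sub>v wprod d L (W t)) \<bullet> v1 t\<bar>) \<longlongrightarrow> 1) sequentially"
proof -
  define Mx where "Mx t = Max {frob (W t k) | k. 1 \<le> k \<and> k \<le> L}" for t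
  define Fv where "Fv t = frob (W t 1)^2" for t
  define K1 where "K1 = Dconst L (W 0) + 2 * risk0 + (real L - 1) * chain_const"
  define B' where "B' = max_frob0_sq + 2 * risk0"
  define V where "V t = \<bar>((1 / (\<Prod>k\<in>{1..L}. frob (W t k))) \<cdot>\<^sub>v wprod d L (W t)) \<bullet> v1 t\<bar>" for t
  define g where "g t = ((Fv t - K1) / (Fv t + B'))^L" for t
  have lim': "filterlim Mx at_top sequentially" using lim unfolding Mx_def .
  have ev1: "eventually (\<lambda>t. 1 \<le> Mx t) sequentially" using lim' by (simp add: filterlim_at_top)
  have Finf: "filterlim Fv at_top sequentially"
  proof (rule filterlim_at_top_mono)
    show "filterlim (\<lambda>t. (- B') + Mx t) at_top sequentially"
      by (rule filterlim_tendsto_add_at_top[OF tendsto_const lim'])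
    show "eventually (\<lambda>t. - B' + Mx t \<le> Fv t) sequentially"
      using ev1
    proof eventually_elim
      case (elim t)
      have "Mx t \<le> (Mx t)^2" using elim by (simp add: power2_eq_square)
      moreover have "(Mx t)^2 \<le> Fv t + B'" unfolding Mx_def Fv_def B'_def by (rule Max_frob_sq_le)
      ultimately show ?case by simp
    qed
  qed
  have g1: "(g \<longlongrightarrow> 1) sequentially" unfolding g_def by (rule tendsto_power_ratio_1[OF Finf])
  have evF: "eventually (\<lambda>t. Fv t \<ge> K1 + 1) sequentially" using Finf by (simp add: filterlim_at_top)
  have bnds: "eventually (\<lambda>t. g t \<le> V t \<and> V t \<le> 1) sequentially"
    using evF
  proof eventually_elim
    case (elim t)
    obtain u where sv: "top_sv (W t 1) u (v1 t)" using v1 by blast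
    from normalized_wprod_bounds[OF sv] elim show ?case unfolding g_def V_def Fv_def K1_def B'_def by simp
  qed
  have "(V \<longlongrightarrow> 1) sequentially"
  proof (rule tendsto_sandwich[OF _ _ g1 tendsto_const])
    show "eventually (\<lambda>t. g t \<le> V t) sequentially" using bnds by (rule eventually_mono) simp
    show "eventually (\<lambda>t. V t \<le> 1) sequentially" using bnds by (rule eventually_mono) simp
  qed
  thus ?thesis unfolding V_def .
qed

end

theorem mainTheorem11:
  fixes n d L :: nat
    and x :: "nat \<Rightarrow> real vec" and y :: "nat \<Rightarrow> real"
    and l dl :: "real \<Rightarrow> real" and beta G :: real
    and dims :: "nat \<Rightarrow> nat"
    and W :: "nat \<Rightarrow> nat \<Rightarrow> real mat"
    and eta Rr :: "nat \<Rightarrow> real"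
  assumes n_pos: "n \<ge> 1"
    and x_dim: "\<And>i. i < n \<Longrightarrow> x i \<in> carrier_vec d"
    and x_norm: "\<And>i. i < n \<Longrightarrow> vnorm (x i) \<le> 1"
    and y_pm: "\<And>i. i < n \<Longrightarrow> y i = 1 \<or> y i = -1"
    and separable: "\<exists>u \<in> carrier_vec d. \<forall>i<n. u \<bullet> (y i \<cdot>\<^sub>v x i) > 0"
    and L_ge: "L \<ge> 2"
    and dims_pos: "\<And>k. k \<le> L \<Longrightarrow> dims k > 0"
    and dims_0: "dims 0 = d" and dims_L: "dims L = 1"
    and W0_dim: "\<And>k. 1 \<le> k \<Longrightarrow> k \<le> L \<Longrightarrow> W 0 k \<in> carrier_mat (dims k) (dims (k - 1))"
    \<comment> \<open>Assumption 1\<close>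
    and l_deriv: "\<And>s. (l has_real_derivative dl s) (at s)"
    and dl_cont: "continuous_on UNIV dl"
    and dl_neg: "\<And>s. dl s < 0"
    and l_bot: "filterlim l at_top at_bot"
    and l_top: "(l \<longlongrightarrow> 0) at_top"
    \<comment> \<open>Assumption 4\<close>
    and dl_lip: "\<And>a b. \<bar>dl a - dl b\<bar> \<le> beta * \<bar>a - b\<bar>"
    and dl_bdd: "\<And>s. \<bar>dl s\<bar> \<le> G"
    \<comment> \<open>gradient descent\<close>
    and GD: "\<And>t k. 1 \<le> k \<Longrightarrow> k \<le> L \<Longrightarrow>
      W (Suc t) k = W t k - eta t \<cdot>\<^sub>m grad_k l n (\<lambda>i. y i \<cdot>\<^sub>v x i) d L (W t) k"
    \<comment> \<open>Assumption 5\<close>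
    and eta_def: "\<And>t. eta t = min (1 / betaR L beta G (Rr t)) 1"
    and Rr_ball: "\<And>t k. 1 \<le> k \<Longrightarrow> k \<le> L \<Longrightarrow> frob (W t k) \<le> Rr t - 1"
    and Rr_keep: "\<And>t. (\<forall>k. 1 \<le> k \<and> k \<le> L \<longrightarrow> frob (W (Suc t) k) \<le> Rr t - 1)
      \<Longrightarrow> Rr (Suc t) = Rr t"
  shows
    "(\<forall>t k. 1 \<le> k \<and> k \<le> L \<longrightarrow>
        frob (W t k) ^ 2 - spec (W t k) ^ 2
          \<le> Dconst L (W 0) + 2 * risk l n (\<lambda>i. y i \<cdot>\<^sub>v x i) d L (W 0))
   \<and> (\<forall>t k u v u' v'. 1 \<le> k \<and> k < L \<and> W t (Suc k) \<noteq> 0\<^sub>m (dims (Suc k)) (dims k)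
        \<and> top_sv (W t k) u v' \<and> top_sv (W t (Suc k)) u' v \<longrightarrow>
        (v \<bullet> u) ^ 2 \<ge> 1 - (Dconst L (W 0) + 3 * risk l n (\<lambda>i. y i \<cdot>\<^sub>v x i) d L (W 0)
            + spec (W 0 (Suc k)) ^ 2 + spec (W 0 k) ^ 2) / spec (W t (Suc k)) ^ 2)
   \<and> (\<forall>v1 :: nat \<Rightarrow> real vec. (\<forall>t. \<exists>u. top_sv (W t 1) u (v1 t)) \<longrightarrow>
        filterlim (\<lambda>t. Max {frob (W t k) | k. 1 \<le> k \<and> k \<le> L}) at_top sequentially \<longrightarrow>
        ((\<lambda>t. \<bar>((1 / (\<Prod>k\<in>{1..L}. frob (W t k))) \<cdot>\<^sub>v wprod d L (W t)) \<bullet> v1 t\<bar>)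
           \<longlongrightarrow> 1) sequentially)"
proof -
  interpret gradient_descent n d L x y l dl beta G dims W eta Rr
    using n_pos x_dim x_norm y_pm L_ge dims_pos dims_0 dims_L W0_dim l_deriv dl_neg l_top dl_lip dl_bdd GD eta_def Rr_ball
    by unfold_locales auto
  have Req: "risk l n (\<lambda>i. y i \<cdot>\<^sub>v x i) d L (W 0) = risk0" unfolding risk0_def z_eq ..
  show ?thesis
    unfolding Req using frob_sq_minus_spec_sq_le top_singular_vectors_aligned normalized_wprod_aligned
    by blast
qed

end
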